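(* Let $((G_n)_{n\in\mathbb{N}},(\rho_n)_{n\in\mathbb{N}},(\kappa_k^n)_{k\le n})$ be a diverse $d$-ary cloning system. Then every non-trivial element of $\mathscr{T}_d(G_* )$ has infinitely many $F_d$-conjugates, i.e. for every $x\in\mathscr{T}_d(G_* )\setminus\{1\}$ the set $\{f^{-1}xf: f\in F_d\}$ is infinite. In particular $\mathscr{T}_d(G_* )$ is ICC, and (equivalently to the first statement) the inclusion of group von Neumann algebras $L(F_d)\subseteq L(\mathscr{T}_d(G_* ))$ is irreducible, i.e. $L(F_d)'\cap L(\mathscr{T}_d(G_* ))=\mathbb{C}1$.
   Context: Fix an integer $d\ge 2$. A $d$-ary tree is a finite rooted tree in which each non-leaf vertex has exactly $d$ ordered children; its leaves are numbered $1,\dots,n$ from left to right, and $n(T)$ is the number of leaves of $T$. For $1\le k\le n(T)$, $T_k$ denotes the tree obtained from $T$ by attaching a $d$-ary caret (a root with $d$ leaf children) to the $k$-th leaf. Standard cloning maps on symmetric groups: for $\sigma\in S_n$ and $1\le k\le n$, partition $\{1,\dots,n+d-1\}$ into consecutive blocks $B^{(k)}_1,\dots,B^{(k)}_n$ with $B^{(k)}_j=\{j\}$ for $j<k$, $B^{(k)}_k=\{k,\dots,k+d-1\}$, $B^{(k)}_j=\{j+d-1\}$ for $j>k$; then $(\sigma)\varsigma_k^n\in S_{n+d-1}$ maps each $B^{(k)}_j$ onto $B^{(\sigma(k))}_{\sigma(j)}$ preserving order. A $d$-ary cloning system consists of groups $(G_n)_{n\in\mathbb{N}}$, homomorphisms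 $\rho_n:G_n\to S_n$, and injective functions (not necessarily homomorphisms) $\kappa_k^n:G_n\to G_{n+d-1}$, $1\le k\le n$, written on the right ($g\mapsto (g)\kappa_k^n$, with $(g)(\kappa\circ\kappa'):=((g)\kappa)\kappa'$), such that for all $1\le k<\ell\le n$ and $g,h\in G_n$: (C1) $(gh)\kappa_k^n=(g)\kappa^n_{\rho_n(h)k}\,(h)\kappa_k^n$; (C2) $\kappa_\ell^n\circ\kappa_k^{n+d-1}=\kappa_k^n\circ\kappa_{\ell+d-1}^{n+d-1}$; (C3) $\rho_{n+d-1}((g)\kappa_k^n)(i)=((\rho_n(g))\varsigma_k^n)(i)$ for all $i\notin\{k,\dots,k+d-1\}$. The group $\mathscr{T}_d(G_* )$ consists of equivalence classes $[T,g,U]$ of triples $(T,g,U)$, where $T,U$ are $d$-ary trees with the same number $n$ of leaves and $g\in G_n$, under the equivalence relation generated by $(T,g,U)\sim(T_{\rho_n(g)(k)},(g)\kappa_k^n,U_k)$ ($1\le k\le n$); multiplication is $[T,g,U][U,h,W]=[T,gh,W]$ (any two elements can be represented with equal middle trees). The elements $[T,1,U]$ form a subgroup isomorphic to the Higman–Thompson group $F_d$; this is the copy of $F_d$ in $\mathscr{T}_d(G_* )$. The system is diverse if there is $n_0\in\mathbb{N}$ with $\bigcap_{k=1}^n \mathrm{Im}\,\kappa_k^n=\{1\}$ for all $n\ge n_0$. $L(G)$ denotes the group von Neumann algebra of a countable discrete group $G$. *)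

theory Defs
  imports "HOL-Algebra.Sym_Groups"
begin

datatype dtree = Leaf | Node "dtree list"

fun leaves :: "dtree \<Rightarrow> nat" where
  "leaves Leaf = 1"
| "leaves (Node ts) = sum_list (map leaves ts)"

fun dvalid :: "nat \<Rightarrow> dtree \<Rightarrow> bool" where
  "dvalid d Leaf = True"
| "dvalid d (Node ts) = (length ts = d \<and> (\<forall>t\<in>set ts. dvalid d t))"

text \<open>grow d k T is T_k: attach a d-ary caret to the k-th leaf (leaves numbered from 1).\<close>
fun grow :: "nat \<Rightarrow> nat \<Rightarrow> dtree \<Rightarrow> dtree"
and growl :: "nat \<Rightarrow> nat \<Rightarrow> dtree list \<Rightarrow> dtree list" where
  "grow d k Leaf = (if k = 1 then Node (replicate d Leaf) else Leaf)"
| "grow d k (Node ts) = Node (growl d k ts)"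
| "growl d k [] = []"
| "growl d k (t # ts) =
     (if k \<le> leaves t then grow d k t # ts else t # growl d (k - leaves t) ts)"

text \<open>Blocks B^(k)_j of {1..n+d-1}: first element and the block containing i.\<close>
definition blk_start :: "nat \<Rightarrow> nat \<Rightarrow> nat \<Rightarrow> nat" where
  "blk_start d k j = (if j \<le> k then j else j + d - 1)"

definition blk_of :: "nat \<Rightarrow> nat \<Rightarrow> nat \<Rightarrow> nat" where
  "blk_of d k i = (if i < k then i else if i < k + d then k else i - (d - 1))"

definition sclone :: "nat \<Rightarrow> nat \<Rightarrow> nat \<Rightarrow> (nat \<Rightarrow> nat) \<Rightarrow> nat \<Rightarrow> nat" where
  "sclone d n k \<sigma> i =
     (if 1 \<le> i \<and> i \<le> n + d - 1
      then blk_start d (\<sigma> k) (\<sigma> (blk_of d k i)) + (i - blk_start d k (blk_of d k i))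
      else i)"

text \<open>G n is the group G_n, rho n the homomorphism G_n -> S_n, and kappa n k g = (g)kappa_k^n.\<close>
definition cloning_system ::
  "nat \<Rightarrow> (nat \<Rightarrow> 'g monoid) \<Rightarrow> (nat \<Rightarrow> 'g \<Rightarrow> nat \<Rightarrow> nat) \<Rightarrow> (nat \<Rightarrow> nat \<Rightarrow> 'g \<Rightarrow> 'g) \<Rightarrow> bool"
where
  "cloning_system d G \<rho> \<kappa> \<longleftrightarrow>
     2 \<le> d \<and>
     (\<forall>n\<ge>1. group (G n)) \<and>
     (\<forall>n\<ge>1. \<rho> n \<in> hom (G n) (sym_group n)) \<and>
     (\<forall>n\<ge>1. \<forall>k\<in>{1..n}. \<kappa> n k \<in> carrier (G n) \<rightarrow> carrier (G (n + d - 1))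
                        \<and> inj_on (\<kappa> n k) (carrier (G n))) \<and>
     (\<forall>n\<ge>1. \<forall>k\<in>{1..n}. \<forall>g\<in>carrier (G n). \<forall>h\<in>carrier (G n).
        \<kappa> n k (g \<otimes>\<^bsub>G n\<^esub> h) = \<kappa> n (\<rho> n h k) g \<otimes>\<^bsub>G (n + d - 1)\<^esub> \<kappa> n k h) \<and>
     (\<forall>n\<ge>1. \<forall>k l g. 1 \<le> k \<and> k < l \<and> l \<le> n \<and> g \<in> carrier (G n) \<longrightarrow>
        \<kappa> (n + d - 1) k (\<kappa> n l g) = \<kappa> (n + d - 1) (l + d - 1) (\<kappa> n k g)) \<and>
     (\<forall>n\<ge>1. \<forall>k\<in>{1..n}. \<forall>g\<in>carrier (G n). \<forall>i. i \<notin> {k..k + d - 1} \<longrightarrow>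
        \<rho> (n + d - 1) (\<kappa> n k g) i = sclone d n k (\<rho> n g) i)"

definition diverse ::
  "nat \<Rightarrow> (nat \<Rightarrow> 'g monoid) \<Rightarrow> (nat \<Rightarrow> nat \<Rightarrow> 'g \<Rightarrow> 'g) \<Rightarrow> bool"
where
  "diverse d G \<kappa> \<longleftrightarrow>
     (\<exists>n0. \<forall>n\<ge>max n0 1. (\<Inter>k\<in>{1..n}. \<kappa> n k ` carrier (G n)) = {\<one>\<^bsub>G (n + d - 1)\<^esub>})"

definition valid_triple :: "nat \<Rightarrow> (nat \<Rightarrow> 'g monoid) \<Rightarrow> dtree \<times> 'g \<times> dtree \<Rightarrow> bool" where
  "valid_triple d G x \<longleftrightarrow> (case x of (T, g, U) \<Rightarrow>
     dvalid d T \<and> dvalid d U \<and> leaves T = leaves U \<and> g \<in> carrier (G (leaves T)))"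

definition expand_rel ::
  "nat \<Rightarrow> (nat \<Rightarrow> 'g monoid) \<Rightarrow> (nat \<Rightarrow> 'g \<Rightarrow> nat \<Rightarrow> nat) \<Rightarrow> (nat \<Rightarrow> nat \<Rightarrow> 'g \<Rightarrow> 'g)
   \<Rightarrow> ((dtree \<times> 'g \<times> dtree) \<times> (dtree \<times> 'g \<times> dtree)) set"
where
  "expand_rel d G \<rho> \<kappa> =
     {((T, g, U), (grow d (\<rho> (leaves T) g k) T, \<kappa> (leaves T) k g, grow d k U)) | T g U k.
        valid_triple d G (T, g, U) \<and> 1 \<le> k \<and> k \<le> leaves T}"

definition triple_equiv where
  "triple_equiv d G \<rho> \<kappa> = (expand_rel d G \<rho> \<kappa> \<union> (expand_rel d G \<rho> \<kappa>)\<inverse>)\<^sup>*"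

definition tclass where
  "tclass d G \<rho> \<kappa> x = triple_equiv d G \<rho> \<kappa> `` {x}"

definition tmult where
  "tmult d G \<rho> \<kappa> X Y =
     (let (T, g, U, h, W) = (SOME (T, g, U, h, W).
           valid_triple d G (T, g, U) \<and> valid_triple d G (U, h, W) \<and>
           X = tclass d G \<rho> \<kappa> (T, g, U) \<and> Y = tclass d G \<rho> \<kappa> (U, h, W))
      in tclass d G \<rho> \<kappa> (T, g \<otimes>\<^bsub>G (leaves T)\<^esub> h, W))"

definition TG ::
  "nat \<Rightarrow> (nat \<Rightarrow> 'g monoid) \<Rightarrow> (nat \<Rightarrow> 'g \<Rightarrow> nat \<Rightarrow> nat) \<Rightarrow> (nat \<Rightarrow> nat \<Rightarrow> 'g \<Rightarrow> 'g)
   \<Rightarrow> (dtree \<times> 'g \<times> dtree) set monoid"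
where
  "TG d G \<rho> \<kappa> =
    \<lparr> carrier = {tclass d G \<rho> \<kappa> x | x. valid_triple d G x},
      mult = tmult d G \<rho> \<kappa>,
      one = tclass d G \<rho> \<kappa> (Leaf, \<one>\<^bsub>G 1\<^esub>, Leaf) \<rparr>"

definition Fd_copy where
  "Fd_copy d G \<rho> \<kappa> =
     {tclass d G \<rho> \<kappa> (T, \<one>\<^bsub>G (leaves T)\<^esub>, U) | T U.
        dvalid d T \<and> dvalid d U \<and> leaves T = leaves U}"

end

theory Submission
  imports Defs
begin

text \<open>An element of T_d(G_*) has representatives [T, g, U] with any sufficiently fine right tree U, and
  by confluence of expansions the representative with a given right tree is unique.  Let x \<noteq> 1.
  If some representative of x has distinct trees, x carries some leaf a to a leaf b incomparable with a;
  conjugating by suitable elements [P_i, 1, Q_i] of F_d yields elements that carry a fixed leaf to leaves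
  of ever greater depth, so these conjugates are pairwise distinct.  Otherwise every representative of x
  is [A, g, A] with g \<noteq> 1, and conjugating by [A, 1, Z_k] (A with one caret more than Z) gives
  [Z_k, g, Z_k].  If there were only finitely many conjugates, they could all be represented with right
  tree Z, and uniqueness of representatives would put g into the image of every cloning map \<kappa>_k,
  contradicting diversity.\<close>

section \<open>Leaf addresses of d-ary trees\<close>

text \<open>A leaf is addressed by the list of child indices (counted from 0) on the path from the root;
  leaf_addrs lists the addresses from left to right, so the k-th leaf has address leaf_addrs T ! (k - 1).\<close>

fun leaf_addrs :: "dtree \<Rightarrow> nat list list"
and leaf_addrs_list :: "nat \<Rightarrow> dtree list \<Rightarrow> nat list list" where
  "leaf_addrs Leaf = [[]]"
| "leaf_addrs (Node ts) = leaf_addrs_list 0 ts"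
| "leaf_addrs_list i [] = []"
| "leaf_addrs_list i (t # ts) = map (Cons i) (leaf_addrs t) @ leaf_addrs_list (Suc i) ts"

lemma length_leaf_addrs_list: "length (leaf_addrs_list i ts) = sum_list (map leaves ts)"
  and length_leaf_addrs: "length (leaf_addrs t) = leaves t"
proof -
  have "\<forall>i. length (leaf_addrs_list i ts) = sum_list (map leaves ts)"
    if "\<forall>t\<in>set ts. length (leaf_addrs t) = leaves t" for ts
    using that by (induction ts) auto
  moreover have "length (leaf_addrs t) = leaves t" for t
    by (induction t) (use calculation in auto)
  ultimately show "length (leaf_addrs_list i ts) = sum_list (map leaves ts)"
    "length (leaf_addrs t) = leaves t" by auto
qed

lemma leaves_pos: "d \<ge> 1 \<Longrightarrow> dvalid d t \<Longrightarrow> leaves t \<ge> 1"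
proof (induction t)
  case Leaf then show ?case by simp
next
  case (Node ts)
  then obtain t where "t \<in> set ts" by (cases ts) auto
  with Node have "1 \<le> leaves t" by auto
  also have "leaves t \<le> sum_list (map leaves ts)"
    using \<open>t \<in> set ts\<close> by (simp add: member_le_sum_list)
  finally show ?case by simp
qed

lemma leaf_addrs_nonempty: "d \<ge> 1 \<Longrightarrow> dvalid d T \<Longrightarrow> leaf_addrs T \<noteq> []"
  using leaves_pos length_leaf_addrs by (metis le_zero_eq length_0_conv not_one_le_zero)

lemma mem_leaf_addrs_list:
  "a \<in> set (leaf_addrs_list i ts) \<longleftrightarrow> (\<exists>j<length ts. \<exists>a'. a = (i+j) # a' \<and> a' \<in> set (leaf_addrs (ts!j)))"
proof (induction ts arbitrary: i)
  case Nil then show ?case by simp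
next
  case (Cons t ts)
  have "a \<in> set (leaf_addrs_list (Suc i) ts) \<longleftrightarrow>
      (\<exists>j. Suc j < length (t # ts) \<and> (\<exists>a'. a = (i + Suc j) # a' \<and> a' \<in> set (leaf_addrs ((t # ts) ! Suc j))))"
    using Cons.IH by simp
  then show ?case by (auto simp: less_Suc_eq_0_disj)
qed

lemma mem_leaf_addrs_Node:
  "a \<in> set (leaf_addrs (Node ts)) \<longleftrightarrow> (\<exists>j<length ts. \<exists>a'. a = j # a' \<and> a' \<in> set (leaf_addrs (ts!j)))"
  using mem_leaf_addrs_list[of a 0 ts] by simp

lemma leaf_addrs_Node_not_Nil: "a \<in> set (leaf_addrs (Node ts)) \<Longrightarrow> a \<noteq> []"
  using mem_leaf_addrs_Node by auto

lemma leaf_addrs_digits: "dvalid d t \<Longrightarrow> a \<in> set (leaf_addrs t) \<Longrightarrow> x \<in> set a \<Longrightarrow> x < d"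
proof (induction t arbitrary: a)
  case Leaf then show ?case by simp
next
  case (Node ts)
  then obtain j a' where j: "j < length ts" "a = j # a'" "a' \<in> set (leaf_addrs (ts!j))"
    using mem_leaf_addrs_Node by blast
  then show ?case using Node.IH[of "ts!j" a'] Node.prems by (cases "x = j") auto
qed

lemma leaf_addrs_antichain: "a \<in> set (leaf_addrs t) \<Longrightarrow> a @ c \<in> set (leaf_addrs t) \<Longrightarrow> c = []"
proof (induction t arbitrary: a)
  case Leaf then show ?case by simp
next
  case (Node ts)
  then obtain j a' where j: "j < length ts" "a = j # a'" "a' \<in> set (leaf_addrs (ts!j))"
    using mem_leaf_addrs_Node by blast
  from Node.prems(2) obtain j2 a2 where j2: "j2 < length ts" "a @ c = j2 # a2" "a2 \<in> set (leaf_addrs (ts!j2))"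
    using mem_leaf_addrs_Node by blast
  then have "j2 = j" "a2 = a' @ c" using j by auto
  moreover have "ts!j \<in> set ts" using j by (simp add: nth_mem)
  ultimately show ?case using Node.IH[of "ts!j" a'] j j2 by simp
qed

lemma prefix_cases: "v @ c = v' @ c' \<Longrightarrow> (\<exists>e. v' = v @ e) \<or> (\<exists>e. v = v' @ e)"
  using append_eq_append_conv2[of v c v' c'] by blast

lemma leaf_prefix_unique:
  assumes "v \<in> set (leaf_addrs V)" "v' \<in> set (leaf_addrs V)" "v @ c = v' @ c'"
  shows "v = v'"
proof -
  from assms(3) consider e where "v' = v @ e" | e where "v = v' @ e"
    using prefix_cases by metis
  then show ?thesis
  proof cases
    case 1 then show ?thesis using leaf_addrs_antichain[OF assms(1)] assms(2) by simp
  next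
    case 2 then show ?thesis using leaf_addrs_antichain[OF assms(2)] assms(1) by simp
  qed
qed

lemma distinct_leaf_addrs: "distinct (leaf_addrs t)"
proof -
  have "\<forall>i. distinct (leaf_addrs_list i ts)" if "\<forall>t\<in>set ts. distinct (leaf_addrs t)" for ts
    using that
  proof (induction ts)
    case Nil then show ?case by simp
  next
    case (Cons t ts)
    have "set (map (Cons i) (leaf_addrs t)) \<inter> set (leaf_addrs_list (Suc i) ts) = {}" for i
      using mem_leaf_addrs_list[of _ "Suc i" ts] by fastforce
    with Cons show ?case by (simp add: distinct_map)
  qed
  then show ?thesis by (induction t) auto
qed

lemma nth_leaf_addrs_inj:
  assumes "1 \<le> k" "k \<le> leaves T" "1 \<le> k'" "k' \<le> leaves T" "leaf_addrs T ! (k - 1) = leaf_addrs T ! (k' - 1)"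
  shows "k = k'"
proof -
  have "k - 1 = k' - 1"
    using nth_eq_iff_index_eq[OF distinct_leaf_addrs, of "k - 1" T "k' - 1"] assms by (simp add: length_leaf_addrs)
  then show ?thesis using assms(1,3) by simp
qed

lemma set_leaf_addrs_inj:
  "dvalid d T \<Longrightarrow> dvalid d T' \<Longrightarrow> set (leaf_addrs T) = set (leaf_addrs T') \<Longrightarrow> T = T'"
proof (induction T arbitrary: T')
  case Leaf
  then show ?case using leaf_addrs_Node_not_Nil by (cases T') auto
next
  case (Node ts)
  show ?case
  proof (cases T')
    case Leaf
    then show ?thesis using Node.prems leaf_addrs_Node_not_Nil by auto
  next
    case (Node ts')
    have l: "length ts = d" "length ts' = d" using Node.prems \<open>T' = Node ts'\<close> by auto
    have "ts ! j = ts' ! j" if j: "j < d" for j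
    proof -
      have "set (leaf_addrs (ts!j)) = {a. j # a \<in> set (leaf_addrs (Node ts))}"
        using j l by (auto simp: mem_leaf_addrs_list)
      also have "\<dots> = {a. j # a \<in> set (leaf_addrs (Node ts'))}" using Node.prems \<open>T' = Node ts'\<close> by simp
      also have "\<dots> = set (leaf_addrs (ts'!j))" using j l by (auto simp: mem_leaf_addrs_list)
      finally show ?thesis using Node.IH[of "ts!j" "ts'!j"] Node.prems \<open>T' = Node ts'\<close> j l
        by (auto simp: nth_mem)
    qed
    then show ?thesis using l \<open>T' = Node ts'\<close> by (auto intro: nth_equalityI)
  qed
qed

lemma leaf_addrs_inj: "dvalid d T \<Longrightarrow> dvalid d T' \<Longrightarrow> leaf_addrs T = leaf_addrs T' \<Longrightarrow> T = T'"
  using set_leaf_addrs_inj by metis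

section \<open>Attaching carets\<close>

definition child_addrs :: "nat \<Rightarrow> nat list \<Rightarrow> nat list list" where
  "child_addrs d a = map (\<lambda>j. a @ [j]) [0..<d]"

lemma length_child_addrs [simp]: "length (child_addrs d a) = d"
  by (simp add: child_addrs_def)

text \<open>expand_at d k is the effect of grow d k on the list of leaf addresses (k counted from 1).\<close>

definition expand_at :: "nat \<Rightarrow> nat \<Rightarrow> nat list list \<Rightarrow> nat list list" where
  "expand_at d k as = take (k - 1) as @ child_addrs d (as ! (k - 1)) @ drop k as"

lemma expand_at_append: "expand_at d (Suc (length P)) (P @ x # S) = P @ child_addrs d x @ S"
  by (simp add: expand_at_def)

lemma split_at_nth:
  assumes "1 \<le> k" "k \<le> length as"
  obtains P x S where "as = P @ x # S" "k = Suc (length P)"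
proof
  show "as = take (k - 1) as @ as ! (k - 1) # drop k as"
    using assms id_take_nth_drop[of "k - 1" as] by simp
qed (use assms in simp)

lemma expand_at_commute:
  assumes "1 \<le> a" "a < b" "b \<le> length as"
  shows "expand_at d (b + d - 1) (expand_at d a as) = expand_at d a (expand_at d b as)"
proof -
  have "a \<le> length as" using assms by simp
  then obtain P x S where as: "as = P @ x # S" "a = Suc (length P)"
    by (rule split_at_nth[OF assms(1)])
  have "1 \<le> b - a" "b - a \<le> length S" using assms unfolding as by simp_all
  then obtain M y R where S: "S = M @ y # R" "b - a = Suc (length M)"
    by (rule split_at_nth)
  have b: "b + d - 1 = Suc (length (P @ child_addrs d x @ M))" "b = Suc (length (P @ x # M))"
    using as(2) S(2) assms(2) by simp_all
  have "expand_at d a as = (P @ child_addrs d x @ M) @ y # R"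
    unfolding as S expand_at_append by simp
  then have lhs: "expand_at d (b + d - 1) (expand_at d a as) = (P @ child_addrs d x @ M) @ child_addrs d y @ R"
    by (simp only: b(1) expand_at_append)
  have "as = (P @ x # M) @ y # R" unfolding as S by simp
  then have "expand_at d b as = (P @ x # M) @ child_addrs d y @ R"
    by (simp only: b(2) expand_at_append)
  also have "\<dots> = P @ x # (M @ child_addrs d y @ R)" by simp
  finally have rhs: "expand_at d a (expand_at d b as) = P @ child_addrs d x @ M @ child_addrs d y @ R"
    by (simp only: as(2) expand_at_append)
  show ?thesis unfolding lhs rhs by simp
qed

lemma nth_expand_at_before:
  assumes "1 \<le> j" "j < k" "k \<le> length as"
  shows "expand_at d k as ! (j - 1) = as ! (j - 1)"
proof -
  obtain P x S where split: "as = P @ x # S" "k = Suc (length P)"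
    using split_at_nth assms by (metis order.trans less_imp_le_nat)
  then have "j - 1 < length P" using assms by simp
  then show ?thesis unfolding split by (simp add: expand_at_append nth_append)
qed

lemma nth_expand_at_block:
  assumes "1 \<le> k" "k \<le> length as" "i < d"
  shows "expand_at d k as ! (k - 1 + i) = as ! (k - 1) @ [i]"
proof -
  obtain P x S where split: "as = P @ x # S" "k = Suc (length P)"
    using split_at_nth assms by metis
  have "(P @ child_addrs d x @ S) ! (length P + i) = x @ [i]"
    using assms(3) by (simp add: nth_append child_addrs_def del: nth_append_length_plus)
  then show ?thesis unfolding split by (simp add: expand_at_append)
qed

lemma nth_expand_at_after:
  assumes "1 \<le> k" "k < j" "j \<le> length as"
  shows "expand_at d k as ! (j + d - 2) = as ! (j - 1)"
proof -
  obtain P x S where split: "as = P @ x # S" "k = Suc (length P)"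
    using split_at_nth assms by (metis order.trans less_imp_le_nat)
  then obtain m where j: "j = length P + 2 + m" using assms(2) by (metis add_2_eq_Suc' less_eqE less_eq_Suc_le)
  have "(P @ child_addrs d x @ S) ! (length P + d + m) = S ! m"
    by (simp add: nth_append)
  moreover have "(P @ x # S) ! (length P + Suc m) = S ! m"
    by (simp only: nth_append_length_plus) simp
  moreover have "j + d - 2 = length P + d + m" "j - 1 = length P + Suc m" using j by simp_all
  ultimately show ?thesis unfolding split(1) by (simp only: split(2) expand_at_append)
qed

lemma set_expand_at:
  assumes "distinct as" "1 \<le> k" "k \<le> length as"
  shows "set (expand_at d k as) = (set as - {as ! (k - 1)}) \<union> set (child_addrs d (as ! (k - 1)))"
proof -
  obtain P x S where split: "as = P @ x # S" "k = Suc (length P)"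
    using split_at_nth assms(2,3) by metis
  have "x \<notin> set P" "x \<notin> set S" using assms(1) unfolding split by auto
  then have "set as - {as ! (k - 1)} = set P \<union> set S" unfolding split by auto
  moreover have "set (expand_at d k as) = set P \<union> set (child_addrs d x) \<union> set S"
    unfolding split by (simp add: expand_at_append Un_assoc)
  moreover have "as ! (k - 1) = x" unfolding split by simp
  ultimately show ?thesis by blast
qed

lemma expand_at_inj:
  assumes "d \<ge> 1" "1 \<le> k" "k \<le> length as" "length as = length bs" "expand_at d k as = expand_at d k bs"
  shows "as = bs"
proof -
  obtain P x S where as: "as = P @ x # S" "k = Suc (length P)"
    using split_at_nth assms(2,3) by metis
  obtain Q y R where bs: "bs = Q @ y # R" "k = Suc (length Q)"
    using split_at_nth assms(2-4) by metis
  have "P @ child_addrs d x @ S = expand_at d k as"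
    unfolding as by (rule expand_at_append[symmetric])
  also have "\<dots> = expand_at d k bs" by (rule assms(5))
  also have "\<dots> = Q @ child_addrs d y @ R"
    unfolding bs by (rule expand_at_append)
  finally have eq: "P @ child_addrs d x @ S = Q @ child_addrs d y @ R" .
  have "length P = length Q" using as(2) bs(2) by simp
  then have PQ: "P = Q" and "child_addrs d x @ S = child_addrs d y @ R"
    using eq append_eq_append_conv by blast+
  then have ch: "child_addrs d x = child_addrs d y" and SR: "S = R"
    using append_eq_append_conv[of "child_addrs d x" "child_addrs d y"] by auto
  have "x = y" using arg_cong[OF ch, of "\<lambda>l. l ! 0"] assms(1) by (simp add: child_addrs_def)
  then show ?thesis unfolding as(1) bs(1) using PQ SR by simp
qed

lemma expand_at_map_Cons_append:
  assumes "1 \<le> k" "k \<le> length as"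
  shows "expand_at d k (map (Cons i) as @ bs) = map (Cons i) (expand_at d k as) @ bs"
proof -
  obtain P x S where split: "as = P @ x # S" "k = Suc (length P)"
    using split_at_nth assms by metis
  have "map (Cons i) as @ bs = map (Cons i) P @ (i # x) # (map (Cons i) S @ bs)"
    unfolding split by simp
  then have "expand_at d k (map (Cons i) as @ bs) = map (Cons i) P @ child_addrs d (i # x) @ map (Cons i) S @ bs"
    using expand_at_append[of d "map (Cons i) P" "i # x" "map (Cons i) S @ bs"] split(2) by simp
  moreover have "child_addrs d (i # x) = map (Cons i) (child_addrs d x)"
    by (simp add: child_addrs_def)
  moreover have "expand_at d k as = P @ child_addrs d x @ S"
    unfolding split by (rule expand_at_append)
  ultimately show ?thesis by simp
qed

lemma expand_at_append_right:
  assumes "length A < k" "k \<le> length A + length B"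
  shows "expand_at d k (A @ B) = A @ expand_at d (k - length A) B"
proof -
  have "1 \<le> k - length A" "k - length A \<le> length B" using assms by auto
  then obtain P x S where split: "B = P @ x # S" "k - length A = Suc (length P)"
    by (rule split_at_nth)
  have "k = Suc (length (A @ P))" using split(2) assms(1) by simp
  then have "expand_at d k ((A @ P) @ x # S) = (A @ P) @ child_addrs d x @ S"
    by (simp only: expand_at_append)
  moreover have "expand_at d (k - length A) B = P @ child_addrs d x @ S"
    unfolding split by (rule expand_at_append)
  ultimately show ?thesis unfolding split(1) by simp
qed

lemma growl_props:
  assumes grow_props: "\<And>t k. t \<in> set ts \<Longrightarrow> 1 \<le> k \<Longrightarrow> k \<le> leaves t \<Longrightarrow>
      dvalid d (grow d k t) \<and> leaves (grow d k t) = leaves t + d - 1 \<and>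
      leaf_addrs (grow d k t) = expand_at d k (leaf_addrs t)"
    and "\<forall>t\<in>set ts. dvalid d t" "1 \<le> k" "k \<le> sum_list (map leaves ts)"
  shows "(\<forall>t\<in>set (growl d k ts). dvalid d t) \<and> length (growl d k ts) = length ts \<and>
    sum_list (map leaves (growl d k ts)) = sum_list (map leaves ts) + d - 1 \<and>
    leaf_addrs_list i (growl d k ts) = expand_at d k (leaf_addrs_list i ts)"
  using assms
proof (induction ts arbitrary: i k)
  case Nil
  then show ?case by simp
next
  case (Cons t ts)
  show ?case
  proof (cases "k \<le> leaves t")
    case True
    then have "dvalid d (grow d k t) \<and> leaves (grow d k t) = leaves t + d - 1 \<and>
        leaf_addrs (grow d k t) = expand_at d k (leaf_addrs t)"
      using Cons.prems by simp
    moreover have "expand_at d k (leaf_addrs_list i (t # ts)) =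
        map (Cons i) (expand_at d k (leaf_addrs t)) @ leaf_addrs_list (Suc i) ts"
      using expand_at_map_Cons_append True Cons.prems(3) by (simp add: length_leaf_addrs)
    ultimately show ?thesis using True Cons.prems(2,3) by auto
  next
    case False
    have IH: "(\<forall>t\<in>set (growl d (k - leaves t) ts). dvalid d t) \<and> length (growl d (k - leaves t) ts) = length ts \<and>
        sum_list (map leaves (growl d (k - leaves t) ts)) = sum_list (map leaves ts) + d - 1 \<and>
        leaf_addrs_list (Suc i) (growl d (k - leaves t) ts) = expand_at d (k - leaves t) (leaf_addrs_list (Suc i) ts)"
      using Cons.IH[of "k - leaves t" "Suc i"] Cons.prems False by simp
    have "expand_at d k (leaf_addrs_list i (t # ts)) =
        map (Cons i) (leaf_addrs t) @ expand_at d (k - leaves t) (leaf_addrs_list (Suc i) ts)"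
      using expand_at_append_right[of "map (Cons i) (leaf_addrs t)" k "leaf_addrs_list (Suc i) ts"] False Cons.prems(4)
      by (simp add: length_leaf_addrs length_leaf_addrs_list)
    moreover have "sum_list (map leaves ts) \<ge> 1" using False Cons.prems(4) by simp
    ultimately show ?thesis using IH False Cons.prems(2) by auto
  qed
qed

lemma grow_props:
  assumes "dvalid d T" "1 \<le> k" "k \<le> leaves T"
  shows "dvalid d (grow d k T) \<and> leaves (grow d k T) = leaves T + d - 1 \<and>
    leaf_addrs (grow d k T) = expand_at d k (leaf_addrs T)"
  using assms
proof (induction T arbitrary: k)
  case Leaf
  then have k: "k = 1" by simp
  have "leaf_addrs_list i (replicate m Leaf) = map (\<lambda>j. [j]) [i..<i+m]" for i m
    by (induction m arbitrary: i) (auto simp: upt_rec)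
  then have "leaf_addrs (grow d k Leaf) = child_addrs d []"
    by (simp add: k child_addrs_def)
  also have "\<dots> = expand_at d k (leaf_addrs Leaf)"
    using expand_at_append[of d "[]" "[]" "[]"] by (simp add: k)
  finally show ?case by (simp add: k sum_list_replicate)
next
  case (Node ts)
  have valid: "\<forall>t\<in>set ts. dvalid d t" using Node.prems(1) by simp
  have "dvalid d (grow d k t) \<and> leaves (grow d k t) = leaves t + d - 1 \<and>
      leaf_addrs (grow d k t) = expand_at d k (leaf_addrs t)"
    if "t \<in> set ts" "1 \<le> k" "k \<le> leaves t" for t k
    using Node.IH that valid by blast
  then have "(\<forall>t\<in>set (growl d k ts). dvalid d t) \<and> length (growl d k ts) = length ts \<and>
      sum_list (map leaves (growl d k ts)) = sum_list (map leaves ts) + d - 1 \<and>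
      leaf_addrs_list 0 (growl d k ts) = expand_at d k (leaf_addrs_list 0 ts)"
    by (rule growl_props) (use valid Node.prems in simp_all)
  then show ?case using Node.prems(1) by simp
qed

lemma grow_valid: "dvalid d T \<Longrightarrow> 1 \<le> k \<Longrightarrow> k \<le> leaves T \<Longrightarrow> dvalid d (grow d k T)"
  using grow_props by blast

lemma grow_leaves: "dvalid d T \<Longrightarrow> 1 \<le> k \<Longrightarrow> k \<le> leaves T \<Longrightarrow>
    leaves (grow d k T) = leaves T + d - 1"
  using grow_props by blast

lemma leaf_addrs_grow:
  "dvalid d T \<Longrightarrow> 1 \<le> k \<Longrightarrow> k \<le> leaves T \<Longrightarrow> leaf_addrs (grow d k T) = expand_at d k (leaf_addrs T)"
  using grow_props by blast

lemma grow_inj: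
  assumes "d \<ge> 1" "dvalid d T" "dvalid d T'" "1 \<le> k" "k \<le> leaves T" "k \<le> leaves T'"
    and "grow d k T = grow d k T'"
  shows "T = T'"
proof -
  have "leaves T + d - 1 = leaves T' + d - 1" using grow_leaves assms by metis
  then have "length (leaf_addrs T) = length (leaf_addrs T')"
    using assms(1) by (simp add: length_leaf_addrs)
  moreover have "expand_at d k (leaf_addrs T) = expand_at d k (leaf_addrs T')"
    using leaf_addrs_grow assms by metis
  ultimately have "leaf_addrs T = leaf_addrs T'"
    using expand_at_inj[of d k] assms(1,4,5) by (simp add: length_leaf_addrs)
  then show ?thesis using leaf_addrs_inj assms by blast
qed

text \<open>blk_start d a b is the position of the old leaf b after attaching a caret at leaf a.\<close>

lemma grow_diamond:
  assumes "d \<ge> 1" "dvalid d T" "1 \<le> a" "a \<le> leaves T" "1 \<le> b" "b \<le> leaves T" "a \<noteq> b"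
  shows "grow d (blk_start d a b) (grow d a T) = grow d (blk_start d b a) (grow d b T)"
proof -
  have commute: "grow d (q + d - 1) (grow d p T) = grow d p (grow d q T)"
    if "1 \<le> p" "p < q" "q \<le> leaves T" for p q
  proof (rule leaf_addrs_inj[of d])
    show "dvalid d (grow d (q + d - 1) (grow d p T))" "dvalid d (grow d p (grow d q T))"
      using that assms(2) grow_valid grow_leaves by simp_all
    show "leaf_addrs (grow d (q + d - 1) (grow d p T)) = leaf_addrs (grow d p (grow d q T))"
      using that assms(2) expand_at_commute[of p q "leaf_addrs T" d]
      by (simp add: grow_valid grow_leaves leaf_addrs_grow length_leaf_addrs)
  qed
  show ?thesis
  proof (cases "a < b")
    case True then show ?thesis using commute[of a b] assms by (simp add: blk_start_def)
  next
    case False then show ?thesis using commute[of b a] assms by (simp add: blk_start_def)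
  qed
qed

lemma set_leaf_addrs_grow:
  assumes "dvalid d V" "1 \<le> k" "k \<le> leaves V"
  shows "set (leaf_addrs (grow d k V)) =
    (set (leaf_addrs V) - {leaf_addrs V ! (k-1)}) \<union> set (child_addrs d (leaf_addrs V ! (k-1)))"
  using set_expand_at[OF distinct_leaf_addrs] leaf_addrs_grow[OF assms] assms(2,3)
  by (simp add: length_leaf_addrs)

lemma leaf_addr_grow_block:
  assumes "dvalid d V" "1 \<le> k" "k \<le> leaves V" "i < d"
  shows "leaf_addrs (grow d k V) ! (k - 1 + i) = leaf_addrs V ! (k - 1) @ [i]"
  using nth_expand_at_block[of k "leaf_addrs V" i d] leaf_addrs_grow[OF assms(1-3)] assms(2-4)
  by (simp only: length_leaf_addrs)

lemma leaf_addr_grow_before: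
  assumes "dvalid d V" "1 \<le> j" "j < k" "k \<le> leaves V"
  shows "leaf_addrs (grow d k V) ! (j - 1) = leaf_addrs V ! (j - 1)"
  using nth_expand_at_before[of j k "leaf_addrs V" d] leaf_addrs_grow[of d V k] assms
  by (simp only: length_leaf_addrs)

lemma leaf_addr_grow_shift:
  assumes "dvalid d V" "1 \<le> k" "k \<le> leaves V" "1 \<le> j" "j \<le> leaves V" "j \<noteq> k"
  shows "leaf_addrs (grow d k V) ! (blk_start d k j - 1) = leaf_addrs V ! (j - 1)"
proof (cases "j < k")
  case True
  then show ?thesis using assms leaf_addr_grow_before by (simp add: blk_start_def)
next
  case False
  then have "k < j" "blk_start d k j - 1 = j + d - 2" using assms(6) by (auto simp: blk_start_def)
  then show ?thesis using assms nth_expand_at_after[of k j "leaf_addrs V" d] leaf_addrs_grow[OF assms(1-3)]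
    by (simp only: length_leaf_addrs)
qed

section \<open>Refinement of trees\<close>

text \<open>tree_le V W holds iff W arises from V by attaching carets.\<close>

definition tree_le :: "dtree \<Rightarrow> dtree \<Rightarrow> bool" where
  "tree_le V W \<longleftrightarrow> (\<forall>w\<in>set (leaf_addrs W). \<exists>v\<in>set (leaf_addrs V). \<exists>c. w = v @ c)"

lemma tree_le_refl: "tree_le V V" by (auto simp: tree_le_def)

lemma tree_le_trans: "tree_le U V \<Longrightarrow> tree_le V W \<Longrightarrow> tree_le U W"
  unfolding tree_le_def by (metis append.assoc)

lemma tree_le_Leaf: "tree_le Leaf W" by (simp add: tree_le_def)

fun tree_join :: "dtree \<Rightarrow> dtree \<Rightarrow> dtree" and tree_join_list :: "dtree list \<Rightarrow> dtree list \<Rightarrow> dtree list" where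
  "tree_join Leaf W = W"
| "tree_join (Node vs) Leaf = Node vs"
| "tree_join (Node vs) (Node ws) = Node (tree_join_list vs ws)"
| "tree_join_list [] ws = ws"
| "tree_join_list (v # vs) [] = v # vs"
| "tree_join_list (v # vs) (w # ws) = tree_join v w # tree_join_list vs ws"

lemma length_tree_join_list: "length vs = length ws \<Longrightarrow> length (tree_join_list vs ws) = length vs"
proof (induction vs arbitrary: ws)
  case Nil then show ?case by simp
next
  case (Cons v vs)
  then obtain w ws' where "ws = w # ws'" by (cases ws) auto
  then show ?case using Cons by simp
qed

lemma nth_tree_join_list: "length vs = length ws \<Longrightarrow> i < length vs \<Longrightarrow> tree_join_list vs ws ! i = tree_join (vs!i) (ws!i)"
proof (induction vs arbitrary: ws i)
  case Nil then show ?case by simp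
next
  case (Cons v vs)
  then obtain w ws' where "ws = w # ws'" by (cases ws) auto
  then show ?case using Cons by (cases i) auto
qed

lemma tree_join_props:
  "dvalid d V \<Longrightarrow> dvalid d W \<Longrightarrow> dvalid d (tree_join V W) \<and>
     (\<forall>a. a \<in> set (leaf_addrs (tree_join V W)) \<longrightarrow> ((\<exists>v\<in>set (leaf_addrs V). \<exists>c. a = v @ c) \<and> (\<exists>v\<in>set (leaf_addrs W). \<exists>c. a = v @ c))) \<and>
     (\<forall>a. a \<in> set (leaf_addrs V) \<longrightarrow> a \<in> set (leaf_addrs W) \<longrightarrow> a \<in> set (leaf_addrs (tree_join V W)))"
proof (induction V arbitrary: W)
  case Leaf
  then show ?case by auto
next
  case (Node vs)
  show ?case
  proof (cases W)
    case Leaf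
    then show ?thesis using Node.prems by auto
  next
    case (Node ws)
    have l: "length vs = d" "length ws = d" using Node.prems \<open>W = Node ws\<close> by auto
    have jl: "length (tree_join_list vs ws) = d" using l length_tree_join_list by simp
    have IH: "dvalid d (tree_join (vs!i) (ws!i)) \<and>
     (\<forall>a. a \<in> set (leaf_addrs (tree_join (vs!i) (ws!i))) \<longrightarrow> ((\<exists>v\<in>set (leaf_addrs (vs!i)). \<exists>c. a = v @ c) \<and> (\<exists>v\<in>set (leaf_addrs (ws!i)). \<exists>c. a = v @ c))) \<and>
     (\<forall>a. a \<in> set (leaf_addrs (vs!i)) \<longrightarrow> a \<in> set (leaf_addrs (ws!i)) \<longrightarrow> a \<in> set (leaf_addrs (tree_join (vs!i) (ws!i))))"
      if "i < d" for i
      using Node.IH[of "vs!i" "ws!i"] Node.prems \<open>W = Node ws\<close> l that by (auto simp: nth_mem)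
    have jn: "tree_join_list vs ws ! i = tree_join (vs!i) (ws!i)" if "i < d" for i using nth_tree_join_list l that by simp
    have v: "dvalid d (tree_join (Node vs) W)"
      using IH jn jl \<open>W = Node ws\<close> by (auto simp: in_set_conv_nth)
    have a1: "(\<exists>v\<in>set (leaf_addrs (Node vs)). \<exists>c. a = v @ c) \<and> (\<exists>v\<in>set (leaf_addrs W). \<exists>c. a = v @ c)"
      if "a \<in> set (leaf_addrs (tree_join (Node vs) W))" for a
    proof -
      from that obtain j a' where j: "j < d" "a = j # a'" "a' \<in> set (leaf_addrs (tree_join_list vs ws ! j))"
        using \<open>W = Node ws\<close> mem_leaf_addrs_Node[of a "tree_join_list vs ws"] jl by auto
      then obtain v1 c1 v2 c2 where "v1 \<in> set (leaf_addrs (vs!j))" "a' = v1 @ c1" "v2 \<in> set (leaf_addrs (ws!j))" "a' = v2 @ c2"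
        using IH jn by metis
      then show ?thesis using j l \<open>W = Node ws\<close> mem_leaf_addrs_Node
        by (metis Cons_eq_appendI)
    qed
    have a2: "a \<in> set (leaf_addrs (tree_join (Node vs) W))" if "a \<in> set (leaf_addrs (Node vs))" "a \<in> set (leaf_addrs W)" for a
    proof -
      from that(1) obtain j a' where j: "j < d" "a = j # a'" "a' \<in> set (leaf_addrs (vs ! j))"
        using mem_leaf_addrs_Node l by auto
      moreover have "a' \<in> set (leaf_addrs (ws ! j))" using that(2) j \<open>W = Node ws\<close> l mem_leaf_addrs_Node by auto
      ultimately have "a' \<in> set (leaf_addrs (tree_join_list vs ws ! j))" using IH jn by metis
      then show ?thesis using j jl \<open>W = Node ws\<close> mem_leaf_addrs_Node[of a "tree_join_list vs ws"] by auto
    qed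
    show ?thesis using v a1 a2 by blast
  qed
qed

lemma dvalid_tree_join: "dvalid d V \<Longrightarrow> dvalid d W \<Longrightarrow> dvalid d (tree_join V W)"
  using tree_join_props by blast
lemma tree_le_join1: "dvalid d V \<Longrightarrow> dvalid d W \<Longrightarrow> tree_le V (tree_join V W)"
  using tree_join_props unfolding tree_le_def by blast
lemma tree_le_join2: "dvalid d V \<Longrightarrow> dvalid d W \<Longrightarrow> tree_le W (tree_join V W)"
  using tree_join_props unfolding tree_le_def by blast
lemma leaf_addrs_tree_join: "dvalid d V \<Longrightarrow> dvalid d W \<Longrightarrow> a \<in> set (leaf_addrs V) \<Longrightarrow> a \<in> set (leaf_addrs W) \<Longrightarrow>
    a \<in> set (leaf_addrs (tree_join V W))"
  using tree_join_props by blast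

lemma finite_common_upper_bound:
  assumes "finite S" "\<forall>Y\<in>S. dvalid d (D Y)"
  shows "\<exists>Z. dvalid d Z \<and> (\<forall>Y\<in>S. tree_le (D Y) Z)"
  using assms
proof (induction S rule: finite_induct)
  case empty then show ?case by (intro exI[of _ Leaf]) simp
next
  case (insert y S)
  then obtain Z where Z: "dvalid d Z" "\<forall>Y\<in>S. tree_le (D Y) Z" by auto
  have vy: "dvalid d (D y)" using insert by simp
  have "dvalid d (tree_join Z (D y))" "tree_le Z (tree_join Z (D y))" "tree_le (D y) (tree_join Z (D y))"
    using dvalid_tree_join[OF Z(1) vy] tree_le_join1[OF Z(1) vy] tree_le_join2[OF Z(1) vy] by auto
  then show ?case using Z tree_le_trans by blast
qed

lemma comparable_leaf:
  assumes "d \<ge> 1" "dvalid d T" "\<forall>x\<in>set a. x < d"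
  shows "\<exists>w\<in>set (leaf_addrs T). (\<exists>c. a = w @ c) \<or> (\<exists>c. w = a @ c)"
  using assms(2,3)
proof (induction T arbitrary: a)
  case Leaf then show ?case by simp
next
  case (Node ts)
  show ?case
  proof (cases a)
    case Nil
    have "leaf_addrs (Node ts) \<noteq> []" using leaf_addrs_nonempty[OF assms(1) Node.prems(1)] .
    then obtain w where "w \<in> set (leaf_addrs (Node ts))" by (meson list.set_sel(1))
    then show ?thesis using Nil by auto
  next
    case (Cons i a')
    then have i: "i < length ts" using Node.prems by auto
    have "ts!i \<in> set ts" using i by (rule nth_mem)
    moreover have "\<forall>x\<in>set a'. x < d" using Node.prems Cons by auto
    ultimately obtain w where w: "w \<in> set (leaf_addrs (ts!i))" "(\<exists>c. a' = w @ c) \<or> (\<exists>c. w = a' @ c)"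
      using Node.IH[of "ts!i" a'] Node.prems by auto
    have "i # w \<in> set (leaf_addrs (Node ts))" using mem_leaf_addrs_Node[of "i # w" ts] i w(1) by blast
    moreover have "(\<exists>c. a = (i#w) @ c) \<or> (\<exists>c. i#w = a @ c)" using w(2) Cons by auto
    ultimately show ?thesis by blast
  qed
qed

lemma leaf_below_sibling:
  assumes "d \<ge> 1" "dvalid d T" "b @ x # c \<in> set (leaf_addrs T)" "\<forall>z\<in>set b. z < d" "y < d"
  obtains e where "b @ y # e \<in> set (leaf_addrs T)"
proof -
  have "\<forall>z\<in>set (b @ [y]). z < d" using assms(4,5) by simp
  then obtain w where w: "w \<in> set (leaf_addrs T)" "(\<exists>e. b @ [y] = w @ e) \<or> (\<exists>e. w = (b @ [y]) @ e)"
    using comparable_leaf[OF assms(1,2)] by blast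
  show thesis
  proof (cases "\<exists>e. w = (b @ [y]) @ e")
    case True then show ?thesis using that w(1) by auto
  next
    case False
    then obtain e where e: "b @ [y] = w @ e" using w by blast
    show ?thesis
    proof (cases e rule: rev_exhaust)
      case Nil then show ?thesis using that[of "[]"] e w(1) by simp
    next
      case (snoc e0 z)
      then have "b = w @ e0" using e by simp
      then have "w @ (e0 @ x # c) \<in> set (leaf_addrs T)" using assms(3) by simp
      then show ?thesis using leaf_addrs_antichain[OF w(1)] by blast
    qed
  qed
qed

lemma tree_le_leaves:
  assumes "d \<ge> 1" "dvalid d V" "dvalid d W" "tree_le V W"
  shows "leaves V \<le> leaves W"
proof -
  have below: "\<exists>w. w \<in> set (leaf_addrs W) \<and> (\<exists>c. w = v @ c)" if v: "v \<in> set (leaf_addrs V)" for v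
  proof -
    have "\<forall>x\<in>set v. x < d" using leaf_addrs_digits assms v by blast
    then obtain w where w: "w \<in> set (leaf_addrs W)" "(\<exists>c. v = w @ c) \<or> (\<exists>c. w = v @ c)"
      using comparable_leaf assms by blast
    show ?thesis
    proof (cases "\<exists>c. w = v @ c")
      case True then show ?thesis using w by blast
    next
      case False
      then obtain c where c: "v = w @ c" using w by blast
      obtain v' c' where v': "v' \<in> set (leaf_addrs V)" "w = v' @ c'"
        using assms(4) w unfolding tree_le_def by blast
      then have "c' @ c = []" using leaf_addrs_antichain v c by (metis append.assoc)
      then show ?thesis using c w by auto
    qed
  qed
  define g where "g v = (SOME w. w \<in> set (leaf_addrs W) \<and> (\<exists>c. w = v @ c))" for v
  have g: "g v \<in> set (leaf_addrs W) \<and> (\<exists>c. g v = v @ c)" if "v \<in> set (leaf_addrs V)" for v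
    unfolding g_def using someI_ex[OF below[OF that]] .
  have "inj_on g (set (leaf_addrs V))"
  proof (rule inj_onI)
    fix v v' assume v: "v \<in> set (leaf_addrs V)" "v' \<in> set (leaf_addrs V)" "g v = g v'"
    then obtain c c' where "v @ c = v' @ c'" using g by metis
    then show "v = v'" using leaf_prefix_unique v(1,2) by blast
  qed
  then have "card (set (leaf_addrs V)) \<le> card (set (leaf_addrs W))"
    using g by (intro card_inj_on_le) auto
  then show ?thesis by (simp add: distinct_card[OF distinct_leaf_addrs] length_leaf_addrs)
qed

lemma tree_le_grow: "dvalid d V \<Longrightarrow> 1 \<le> k \<Longrightarrow> k \<le> leaves V \<Longrightarrow> tree_le V (grow d k V)"
  unfolding tree_le_def
proof
  fix w assume a: "dvalid d V" "1 \<le> k" "k \<le> leaves V" "w \<in> set (leaf_addrs (grow d k V))"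
  then consider "w \<in> set (leaf_addrs V)" | "w \<in> set (child_addrs d (leaf_addrs V ! (k-1)))" using set_leaf_addrs_grow by blast
  then show "\<exists>v\<in>set (leaf_addrs V). \<exists>c. w = v @ c"
  proof cases
    case 1 then show ?thesis by (intro bexI[of _ w]) auto
  next
    case 2
    have "leaf_addrs V ! (k-1) \<in> set (leaf_addrs V)" using a by (simp add: length_leaf_addrs)
    then show ?thesis using 2 by (auto simp: child_addrs_def)
  qed
qed

lemma tree_le_grow_internal:
  assumes "dvalid d V" "dvalid d W" "tree_le V W" "1 \<le> k" "k \<le> leaves V" "leaf_addrs V ! (k-1) \<notin> set (leaf_addrs W)"
  shows "tree_le (grow d k V) W"
  unfolding tree_le_def
proof
  fix w assume w: "w \<in> set (leaf_addrs W)"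
  then obtain v c where v: "v \<in> set (leaf_addrs V)" "w = v @ c" using assms(3) tree_le_def by blast
  show "\<exists>v\<in>set (leaf_addrs (grow d k V)). \<exists>c. w = v @ c"
  proof (cases "v = leaf_addrs V ! (k-1)")
    case False
    then show ?thesis using v set_leaf_addrs_grow[OF assms(1,4,5)] by blast
  next
    case True
    then have "c \<noteq> []" using assms(6) w v by auto
    then obtain x c' where "c = x # c'" by (cases c) auto
    moreover have "x < d" using leaf_addrs_digits[OF assms(2) w] v \<open>c = x # c'\<close> by simp
    ultimately have "v @ [x] \<in> set (leaf_addrs (grow d k V))" "w = (v @ [x]) @ c'"
      using set_leaf_addrs_grow[OF assms(1,4,5)] True v by (auto simp: child_addrs_def)
    then show ?thesis by blast
  qed
qed

lemma grown_leaf_not_leaf: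
  assumes "dvalid d V" "1 \<le> k" "k \<le> leaves V" "tree_le (grow d k V) W"
  shows "leaf_addrs V ! (k - 1) \<notin> set (leaf_addrs W)"
proof
  let ?a = "leaf_addrs V ! (k - 1)"
  assume "?a \<in> set (leaf_addrs W)"
  then obtain v c where v: "v \<in> set (leaf_addrs (grow d k V))" "?a = v @ c"
    using assms(4) unfolding tree_le_def by blast
  have a: "?a \<in> set (leaf_addrs V)" using assms(2,3) by (simp add: length_leaf_addrs)
  from v(1) consider "v \<in> set (leaf_addrs V)" "v \<noteq> ?a" | j where "v = ?a @ [j]"
    using set_leaf_addrs_grow[OF assms(1-3)] by (auto simp: child_addrs_def)
  then show False
  proof cases
    case 1
    then show False using leaf_addrs_antichain[of v V c] v(2) a by simp
  next
    case 2
    have "length ?a = length v + length c" using v(2) by (metis length_append)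
    then show False using 2 by simp
  qed
qed

lemma tree_le_grow_blk_start:
  assumes "d \<ge> 1" "dvalid d V" "dvalid d W" "1 \<le> k" "k \<le> leaves V" "1 \<le> j" "j \<le> leaves V" "j \<noteq> k"
    and "tree_le (grow d k V) W" "tree_le (grow d j V) W"
  shows "tree_le (grow d (blk_start d k j) (grow d k V)) W"
proof (rule tree_le_grow_internal[OF _ assms(3,9)])
  show "dvalid d (grow d k V)" using grow_valid assms by blast
  show "1 \<le> blk_start d k j" "blk_start d k j \<le> leaves (grow d k V)"
    using assms grow_leaves by (auto simp: blk_start_def)
  have "leaf_addrs (grow d k V) ! (blk_start d k j - 1) = leaf_addrs V ! (j - 1)"
    using leaf_addr_grow_shift assms by blast
  then show "leaf_addrs (grow d k V) ! (blk_start d k j - 1) \<notin> set (leaf_addrs W)"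
    using grown_leaf_not_leaf[OF assms(2,6,7,10)] by simp
qed

lemma tree_le_internal_leaf:
  assumes "dvalid d V" "dvalid d W" "tree_le V W" "V \<noteq> W"
  shows "\<exists>k. 1 \<le> k \<and> k \<le> leaves V \<and> leaf_addrs V ! (k-1) \<notin> set (leaf_addrs W)"
proof (rule ccontr)
  assume "\<not> ?thesis"
  then have "\<forall>k. 1 \<le> k \<and> k \<le> leaves V \<longrightarrow> leaf_addrs V ! (k-1) \<in> set (leaf_addrs W)" by blast
  have sub: "set (leaf_addrs V) \<subseteq> set (leaf_addrs W)"
  proof
    fix v assume "v \<in> set (leaf_addrs V)"
    then obtain i where i: "i < length (leaf_addrs V)" "v = leaf_addrs V ! i" by (auto simp: in_set_conv_nth)
    then have "1 \<le> Suc i \<and> Suc i \<le> leaves V" by (simp add: length_leaf_addrs)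
    then have "leaf_addrs V ! (Suc i - 1) \<in> set (leaf_addrs W)" using \<open>\<forall>k. _\<close> by blast
    then show "v \<in> set (leaf_addrs W)" using i by simp
  qed
  have "set (leaf_addrs W) \<subseteq> set (leaf_addrs V)"
  proof
    fix w assume w: "w \<in> set (leaf_addrs W)"
    then obtain v c where "v \<in> set (leaf_addrs V)" "w = v @ c" using assms(3) tree_le_def by blast
    then have "c = []" using leaf_addrs_antichain[of v W c] sub w by blast
    then show "w \<in> set (leaf_addrs V)" using \<open>v \<in> set (leaf_addrs V)\<close> \<open>w = v @ c\<close> by simp
  qed
  then have "V = W" using sub set_leaf_addrs_inj assms by blast
  then show False using assms by simp
qed

section \<open>Trees with prescribed leaves\<close>

fun grow_iter :: "nat \<Rightarrow> nat \<Rightarrow> nat \<Rightarrow> dtree \<Rightarrow> dtree" where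
  "grow_iter d k 0 T = T"
| "grow_iter d k (Suc i) T = grow d k (grow_iter d k i T)"

lemma grow_iter_props:
  assumes "dvalid d T" "1 \<le> k" "k \<le> leaves T" "d \<ge> 1"
  shows "dvalid d (grow_iter d k i T) \<and> leaves (grow_iter d k i T) = leaves T + i * (d - 1) \<and>
    tree_le T (grow_iter d k i T) \<and>
    (\<forall>j. 1 \<le> j \<and> j < k \<longrightarrow> leaf_addrs (grow_iter d k i T) ! (j-1) = leaf_addrs T ! (j-1)) \<and>
    leaf_addrs (grow_iter d k i T) ! (k-1) = leaf_addrs T ! (k-1) @ replicate i 0"
proof (induction i)
  case 0 then show ?case using assms by (simp add: tree_le_refl)
next
  case (Suc i)
  let ?T = "grow_iter d k i T"
  have k2: "k \<le> leaves ?T" using Suc assms by simp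
  have v: "dvalid d (grow d k ?T)" "leaves (grow d k ?T) = leaves ?T + d - 1"
    using grow_valid grow_leaves Suc assms k2 by auto
  have l: "tree_le T (grow d k ?T)" using tree_le_trans Suc tree_le_grow[of d ?T k] assms k2 by blast
  have b: "\<forall>j. 1 \<le> j \<and> j < k \<longrightarrow> leaf_addrs (grow d k ?T) ! (j-1) = leaf_addrs T ! (j-1)"
    using leaf_addr_grow_before[of d ?T _ k] Suc assms k2 by auto
  have "leaf_addrs (grow d k ?T) ! (k-1) = leaf_addrs ?T ! (k-1) @ [0]"
    using leaf_addr_grow_block[of d ?T k 0] Suc assms k2 by simp
  then have c: "leaf_addrs (grow d k ?T) ! (k-1) = leaf_addrs T ! (k-1) @ replicate (Suc i) 0"
    using Suc by (simp add: replicate_append_same)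
  have "leaves (grow d k ?T) = leaves T + Suc i * (d - 1)" using v Suc assms(4) by simp
  then show ?case using v l b c by simp
qed

lemma refinement_with_many_leaves:
  assumes "d \<ge> 2" "dvalid d V" "dvalid d V'"
  obtains Z where "dvalid d Z" "tree_le V Z" "tree_le V' Z" "leaves Z \<ge> m"
proof -
  let ?J = "tree_join V V'"
  have J: "dvalid d ?J" "tree_le V ?J" "tree_le V' ?J"
    using dvalid_tree_join[OF assms(2,3)] tree_le_join1[OF assms(2,3)] tree_le_join2[OF assms(2,3)] by auto
  have "1 \<le> leaves ?J" using leaves_pos[OF _ J(1)] assms(1) by simp
  have Z: "dvalid d (grow_iter d 1 m ?J)" "leaves (grow_iter d 1 m ?J) = leaves ?J + m * (d - 1)"
    "tree_le ?J (grow_iter d 1 m ?J)"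
    using grow_iter_props[OF J(1) _ \<open>1 \<le> leaves ?J\<close>] assms(1) by auto
  have "1 \<le> d - 1" using assms(1) by simp
  then have "m * 1 \<le> m * (d - 1)" by (rule mult_le_mono2)
  then have "m \<le> leaves (grow_iter d 1 m ?J)" using Z(2) by linarith
  moreover have "tree_le V (grow_iter d 1 m ?J)" "tree_le V' (grow_iter d 1 m ?J)"
    using Z(3) J(2,3) tree_le_trans by blast+
  ultimately show thesis using that Z(1) by blast
qed

lemma last_leaf_addrs_list: "ts \<noteq> [] \<Longrightarrow> (\<forall>t\<in>set ts. leaf_addrs t \<noteq> []) \<Longrightarrow>
  leaf_addrs_list i ts \<noteq> [] \<and> last (leaf_addrs_list i ts) = (i + length ts - 1) # last (leaf_addrs (last ts))"
proof (induction ts arbitrary: i)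
  case Nil then show ?case by simp
next
  case (Cons t ts)
  show ?case
  proof (cases "ts = []")
    case True then show ?thesis using Cons by (simp add: last_map)
  next
    case False
    then have "leaf_addrs_list (Suc i) ts \<noteq> [] \<and> last (leaf_addrs_list (Suc i) ts) = (Suc i + length ts - 1) # last (leaf_addrs (last ts))"
      using Cons by simp
    then show ?thesis using False by simp
  qed
qed

lemma last_leaf_addr_digits: "d \<ge> 1 \<Longrightarrow> dvalid d T \<Longrightarrow> \<forall>x\<in>set (last (leaf_addrs T)). x = d - 1"
proof (induction T)
  case Leaf then show ?case by simp
next
  case (Node ts)
  have l: "length ts = d" "ts \<noteq> []" using Node.prems by auto
  have ne: "\<forall>t\<in>set ts. leaf_addrs t \<noteq> []" using leaf_addrs_nonempty Node.prems by auto
  have L: "leaf_addrs_list 0 ts \<noteq> [] \<and> last (leaf_addrs_list 0 ts) = (length ts - 1) # last (leaf_addrs (last ts))"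
    using last_leaf_addrs_list[OF l(2) ne, of 0] by simp
  have "last ts \<in> set ts" using l by simp
  then have "\<forall>x\<in>set (last (leaf_addrs (last ts))). x = d - 1" using Node by auto
  then show ?case using L l by auto
qed

definition incomparable :: "nat list \<Rightarrow> nat list \<Rightarrow> bool" where
  "incomparable a b \<longleftrightarrow> \<not>(\<exists>c. a = b @ c) \<and> \<not>(\<exists>c. b = a @ c)"

lemma incomparable_append: "incomparable a b \<Longrightarrow> incomparable (a @ c) (b @ e)"
  unfolding incomparable_def
proof (intro conjI notI)
  assume a: "\<not> (\<exists>c. a = b @ c) \<and> \<not> (\<exists>c. b = a @ c)"
  { assume "\<exists>f. a @ c = (b @ e) @ f"
    then obtain f where "a @ c = b @ (e @ f)" by auto
    then show False using prefix_cases[of a c b "e @ f"] a by blast }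
  { assume "\<exists>f. b @ e = (a @ c) @ f"
    then obtain f where "b @ e = a @ (c @ f)" by auto
    then show False using prefix_cases[of b e a "c @ f"] a by blast }
qed

lemma incomparable_sym: "incomparable a b \<Longrightarrow> incomparable b a" unfolding incomparable_def by blast

lemma leaf_addrs_incomparable: "a \<in> set (leaf_addrs T) \<Longrightarrow> b \<in> set (leaf_addrs T) \<Longrightarrow> a \<noteq> b \<Longrightarrow>
    incomparable a b"
  unfolding incomparable_def
proof (intro conjI notI)
  assume a: "a \<in> set (leaf_addrs T)" "b \<in> set (leaf_addrs T)" "a \<noteq> b"
  { assume "\<exists>c. a = b @ c"
    then obtain c where "a = b @ c" by blast
    then show False using leaf_addrs_antichain[of b T c] a by simp }
  { assume "\<exists>c. b = a @ c"
    then obtain c where "b = a @ c" by blast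
    then show False using leaf_addrs_antichain[of a T c] a by simp }
qed

lemma mem_leaf_addrs_NodeI: "j < length ts \<Longrightarrow> a' \<in> set (leaf_addrs (ts!j)) \<Longrightarrow>
    j # a' \<in> set (leaf_addrs (Node ts))"
  by (subst mem_leaf_addrs_Node) auto

lemma node_valid: "dvalid d (Node (map f [0..<d])) \<longleftrightarrow> (\<forall>j<d. dvalid d (f j))"
  by auto

lemma tree_with_leaf: "d \<ge> 1 \<Longrightarrow> \<forall>x\<in>set a. x < d \<Longrightarrow>
    \<exists>P. dvalid d P \<and> a \<in> set (leaf_addrs P)"
proof (induction a)
  case Nil then show ?case by (intro exI[of _ Leaf]) simp
next
  case (Cons i a)
  have "\<forall>x\<in>set a. x < d" using Cons.prems by simp
  then obtain P where P: "dvalid d P" "a \<in> set (leaf_addrs P)" using Cons.IH Cons.prems(1) by blast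
  have id: "i < d" using Cons.prems by simp
  let ?ts = "map (\<lambda>j. if j = i then P else Leaf) [0..<d]"
  have v: "dvalid d (Node ?ts)" unfolding node_valid using P by simp
  have "i < length ?ts" "?ts ! i = P" using id by simp_all
  then have "i # a \<in> set (leaf_addrs (Node ?ts))" using mem_leaf_addrs_NodeI[of i ?ts a] P(2) by simp
  then show ?case using v by blast
qed

lemma tree_with_two_leaves: "d \<ge> 1 \<Longrightarrow> \<forall>x\<in>set a. x < d \<Longrightarrow> \<forall>x\<in>set b. x < d \<Longrightarrow>
    incomparable a b \<Longrightarrow>
  \<exists>P. dvalid d P \<and> a \<in> set (leaf_addrs P) \<and> b \<in> set (leaf_addrs P)"
proof (induction a arbitrary: b)
  case Nil then show ?case by (simp add: incomparable_def)
next
  case (Cons i a)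
  obtain j b' where b: "b = j # b'" using Cons.prems(4) by (cases b) (auto simp: incomparable_def)
  show ?case
  proof (cases "i = j")
    case True
    then have "incomparable a b'" using Cons.prems(4) b by (auto simp: incomparable_def)
    then obtain P where P: "dvalid d P" "a \<in> set (leaf_addrs P)" "b' \<in> set (leaf_addrs P)"
      using Cons.IH[of b'] Cons.prems b by auto
    let ?ts = "map (\<lambda>k. if k = i then P else Leaf) [0..<d]"
    have v: "dvalid d (Node ?ts)" unfolding node_valid using P by simp
    have "i < length ?ts" "?ts ! i = P" using Cons.prems by auto
    then have "i # a \<in> set (leaf_addrs (Node ?ts))" "j # b' \<in> set (leaf_addrs (Node ?ts))"
      using mem_leaf_addrs_NodeI[of i ?ts a] mem_leaf_addrs_NodeI[of i ?ts b'] P True by simp_all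
    then show ?thesis using v b by blast
  next
    case False
    obtain P1 where P1: "dvalid d P1" "a \<in> set (leaf_addrs P1)" using tree_with_leaf[of d a] Cons.prems(1,2) by auto
    obtain P2 where P2: "dvalid d P2" "b' \<in> set (leaf_addrs P2)" using tree_with_leaf[of d b'] Cons.prems(1,3) b by auto
    let ?ts = "map (\<lambda>k. if k = i then P1 else if k = j then P2 else Leaf) [0..<d]"
    have v: "dvalid d (Node ?ts)" unfolding node_valid using P1 P2 by simp
    have "i < length ?ts" "?ts ! i = P1" "j < length ?ts" "?ts ! j = P2" using Cons.prems b False by auto
    then have "i # a \<in> set (leaf_addrs (Node ?ts))" "j # b' \<in> set (leaf_addrs (Node ?ts))"
      using mem_leaf_addrs_NodeI[of i ?ts a] mem_leaf_addrs_NodeI[of j ?ts b'] P1 P2 by simp_all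
    then show ?thesis using v b by blast
  qed
qed

lemma leaf_position:
  assumes "a \<in> set (leaf_addrs P)"
  obtains p where "1 \<le> p" "p \<le> leaves P" "leaf_addrs P ! (p - 1) = a"
proof -
  obtain i where "i < length (leaf_addrs P)" "leaf_addrs P ! i = a"
    using assms by (auto simp: in_set_conv_nth)
  then show thesis using that[of "Suc i"] by (simp add: length_leaf_addrs)
qed

lemma two_leaves_not_last:
  assumes "2 \<le> d" "incomparable a b" "0 \<in> set a" "0 \<in> set b" "\<forall>z\<in>set a. z < d" "\<forall>z\<in>set b. z < d"
  obtains P p q where "dvalid d P" "1 \<le> p" "p < leaves P" "1 \<le> q" "q < leaves P" "p \<noteq> q"
    "leaf_addrs P ! (p - 1) = a" "leaf_addrs P ! (q - 1) = b"
proof -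
  obtain P where P: "dvalid d P" "a \<in> set (leaf_addrs P)" "b \<in> set (leaf_addrs P)"
    using tree_with_two_leaves assms by (metis Suc_1 Suc_leD)
  obtain p where p: "1 \<le> p" "p \<le> leaves P" "leaf_addrs P ! (p - 1) = a" using leaf_position P(2) .
  obtain q where q: "1 \<le> q" "q \<le> leaves P" "leaf_addrs P ! (q - 1) = b" using leaf_position P(3) .
  have "leaf_addrs P \<noteq> []" using leaf_addrs_nonempty[of d P] P(1) assms(1) by simp
  then have last: "leaf_addrs P ! (leaves P - 1) = last (leaf_addrs P)"
    by (simp add: last_conv_nth length_leaf_addrs)
  have "\<forall>z\<in>set (last (leaf_addrs P)). z = d - 1" using last_leaf_addr_digits[of d P] P(1) assms(1) by simp
  then have "p \<noteq> leaves P" "q \<noteq> leaves P" using last p q assms(1,3,4) by force+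
  moreover have "p \<noteq> q" using p q assms(2) unfolding incomparable_def by force
  ultimately show thesis using that P(1) p q by simp
qed

section \<open>Consequences of the cloning axioms\<close>

locale cloning_sys =
  fixes d :: nat and G :: "nat \<Rightarrow> 'g monoid" and \<rho> :: "nat \<Rightarrow> 'g \<Rightarrow> nat \<Rightarrow> nat"
    and \<kappa> :: "nat \<Rightarrow> nat \<Rightarrow> 'g \<Rightarrow> 'g"
  assumes cs: "cloning_system d G \<rho> \<kappa>"
begin

lemma arity_ge_2: "2 \<le> d"
  using cs unfolding cloning_system_def by auto

lemma arity_pos: "1 \<le> d"
  using arity_ge_2 by simp

lemma group_G: "1 \<le> n \<Longrightarrow> group (G n)"
  using cs unfolding cloning_system_def by auto

lemma rho_hom: "1 \<le> n \<Longrightarrow> \<rho> n \<in> hom (G n) (sym_group n)"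
  using cs unfolding cloning_system_def by auto

lemma kappa_closed: "1 \<le> n \<Longrightarrow> 1 \<le> k \<Longrightarrow> k \<le> n \<Longrightarrow> g \<in> carrier (G n) \<Longrightarrow>
    \<kappa> n k g \<in> carrier (G (n+d-1))"
  using cs unfolding cloning_system_def by (auto simp: Pi_def)

lemma kappa_inj_on: "1 \<le> n \<Longrightarrow> 1 \<le> k \<Longrightarrow> k \<le> n \<Longrightarrow> inj_on (\<kappa> n k) (carrier (G n))"
  using cs unfolding cloning_system_def by auto

text \<open>kappa_mult, kappa_kappa and rho_kappa_outside are the axioms (C1), (C2) and (C3).\<close>

lemma kappa_mult: "1 \<le> n \<Longrightarrow> 1 \<le> k \<Longrightarrow> k \<le> n \<Longrightarrow> g \<in> carrier (G n) \<Longrightarrow>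
    h \<in> carrier (G n) \<Longrightarrow>
  \<kappa> n k (g \<otimes>\<^bsub>G n\<^esub> h) = \<kappa> n (\<rho> n h k) g \<otimes>\<^bsub>G (n + d - 1)\<^esub> \<kappa> n k h"
  using cs unfolding cloning_system_def by auto

lemma kappa_kappa: "1 \<le> n \<Longrightarrow> 1 \<le> k \<Longrightarrow> k < l \<Longrightarrow> l \<le> n \<Longrightarrow>
    g \<in> carrier (G n) \<Longrightarrow>
  \<kappa> (n + d - 1) k (\<kappa> n l g) = \<kappa> (n + d - 1) (l + d - 1) (\<kappa> n k g)"
  using cs unfolding cloning_system_def by auto

lemma rho_kappa_outside: "1 \<le> n \<Longrightarrow> 1 \<le> k \<Longrightarrow> k \<le> n \<Longrightarrow> g \<in> carrier (G n) \<Longrightarrow>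
    i \<notin> {k..k + d - 1} \<Longrightarrow>
  \<rho> (n + d - 1) (\<kappa> n k g) i = sclone d n k (\<rho> n g) i"
  using cs unfolding cloning_system_def by auto

lemma rho_permutes: "1 \<le> n \<Longrightarrow> g \<in> carrier (G n) \<Longrightarrow> \<rho> n g permutes {1..n}"
proof -
  assume "1 \<le> n" "g \<in> carrier (G n)"
  then have "\<rho> n g \<in> carrier (sym_group n)" using rho_hom[of n] unfolding hom_def by auto
  then show ?thesis by (simp add: sym_group_carrier)
qed

lemma rho_range: "1 \<le> n \<Longrightarrow> g \<in> carrier (G n) \<Longrightarrow> 1 \<le> k \<Longrightarrow> k \<le> n \<Longrightarrow>
    1 \<le> \<rho> n g k \<and> \<rho> n g k \<le> n"
  using rho_permutes permutes_in_image by fastforce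

lemma rho_inj: "1 \<le> n \<Longrightarrow> g \<in> carrier (G n) \<Longrightarrow> \<rho> n g k = \<rho> n g j \<Longrightarrow> k = j"
  using rho_permutes permutes_inj by (metis injD)

lemma rho_mult: "1 \<le> n \<Longrightarrow> g \<in> carrier (G n) \<Longrightarrow> h \<in> carrier (G n) \<Longrightarrow>
    \<rho> n (g \<otimes>\<^bsub>G n\<^esub> h) = \<rho> n g \<circ> \<rho> n h"
  using rho_hom hom_mult sym_group_mult by metis

lemma rho_one: "1 \<le> n \<Longrightarrow> \<rho> n \<one>\<^bsub>G n\<^esub> = id"
proof -
  assume n: "1 \<le> n"
  interpret group "G n" using group_G n .
  let ?p = "\<rho> n \<one>\<^bsub>G n\<^esub>"
  have "?p = ?p \<circ> ?p" using rho_mult[OF n, of "\<one>\<^bsub>G n\<^esub>" "\<one>\<^bsub>G n\<^esub>"] by simp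
  moreover have "inj ?p" using rho_permutes[OF n one_closed] permutes_inj by simp
  ultimately show ?thesis by (metis comp_apply eq_id_iff injD)
qed

lemma rho_inv: "1 \<le> n \<Longrightarrow> g \<in> carrier (G n) \<Longrightarrow> \<rho> n (inv\<^bsub>G n\<^esub> g) (\<rho> n g k) = k"
proof -
  assume n: "1 \<le> n" and g: "g \<in> carrier (G n)"
  interpret group "G n" using group_G n .
  have "\<rho> n (inv\<^bsub>G n\<^esub> g \<otimes>\<^bsub>G n\<^esub> g) = id" using rho_one n g by simp
  then show ?thesis using rho_mult[OF n, of "inv\<^bsub>G n\<^esub> g" g] g by (metis comp_apply id_apply inv_closed)
qed

lemma rho_inv': "1 \<le> n \<Longrightarrow> g \<in> carrier (G n) \<Longrightarrow> \<rho> n g (\<rho> n (inv\<^bsub>G n\<^esub> g) k) = k"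
proof -
  assume n: "1 \<le> n" and g: "g \<in> carrier (G n)"
  interpret group "G n" using group_G n .
  have "\<rho> n (g \<otimes>\<^bsub>G n\<^esub> inv\<^bsub>G n\<^esub> g) = id" using rho_one n g by simp
  then show ?thesis using rho_mult[OF n, of g "inv\<^bsub>G n\<^esub> g"] g by (metis comp_apply id_apply inv_closed)
qed

lemma kappa_one: "1 \<le> n \<Longrightarrow> 1 \<le> k \<Longrightarrow> k \<le> n \<Longrightarrow>
    \<kappa> n k \<one>\<^bsub>G n\<^esub> = \<one>\<^bsub>G (n+d-1)\<^esub>"
proof -
  assume a: "1 \<le> n" "1 \<le> k" "k \<le> n"
  interpret H: group "G (n+d-1)" using group_G[of "n+d-1"] a arity_pos by simp
  interpret group "G n" using group_G a by simp
  let ?x = "\<kappa> n k \<one>\<^bsub>G n\<^esub>"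
  have x: "?x \<in> carrier (G (n+d-1))" using kappa_closed a by simp
  have "?x = ?x \<otimes>\<^bsub>G (n+d-1)\<^esub> ?x" using kappa_mult[OF a, of "\<one>\<^bsub>G n\<^esub>" "\<one>\<^bsub>G n\<^esub>"] rho_one a by simp
  then show ?thesis using x H.l_cancel_one' by blast
qed

lemma kappa_inv: "1 \<le> n \<Longrightarrow> 1 \<le> k \<Longrightarrow> k \<le> n \<Longrightarrow> g \<in> carrier (G n) \<Longrightarrow>
  \<kappa> n (\<rho> n g k) (inv\<^bsub>G n\<^esub> g) = inv\<^bsub>G (n+d-1)\<^esub> (\<kappa> n k g)"
proof -
  assume a: "1 \<le> n" "1 \<le> k" "k \<le> n" and g: "g \<in> carrier (G n)"
  interpret H: group "G (n+d-1)" using group_G[of "n+d-1"] a arity_pos by simp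
  interpret group "G n" using group_G a by simp
  have "\<kappa> n k (inv\<^bsub>G n\<^esub> g \<otimes>\<^bsub>G n\<^esub> g) = \<kappa> n (\<rho> n g k) (inv\<^bsub>G n\<^esub> g) \<otimes>\<^bsub>G (n + d - 1)\<^esub> \<kappa> n k g"
    using kappa_mult[OF a, of "inv\<^bsub>G n\<^esub> g" g] g by simp
  then have "\<kappa> n (\<rho> n g k) (inv\<^bsub>G n\<^esub> g) \<otimes>\<^bsub>G (n + d - 1)\<^esub> \<kappa> n k g = \<one>\<^bsub>G (n+d-1)\<^esub>"
    using kappa_one a g by simp
  moreover have "\<kappa> n (\<rho> n g k) (inv\<^bsub>G n\<^esub> g) \<in> carrier (G (n+d-1))"
    using kappa_closed rho_range a g by simp
  moreover have "\<kappa> n k g \<in> carrier (G (n+d-1))" using kappa_closed a g by simp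
  ultimately show ?thesis using H.inv_equality by metis
qed

lemma blk_start_range: "1 \<le> j \<Longrightarrow> j \<le> n \<Longrightarrow> 1 \<le> blk_start d m j \<and> blk_start d m j \<le> n + d - 1"
  using arity_pos by (auto simp: blk_start_def)

lemma blk_start_out: "1 \<le> j \<Longrightarrow> j \<noteq> m \<Longrightarrow> blk_start d m j \<notin> {m..m+d-1}"
  using arity_pos by (auto simp: blk_start_def)

lemma blk_of_start: "1 \<le> j \<Longrightarrow> j \<noteq> m \<Longrightarrow> blk_of d m (blk_start d m j) = j"
  using arity_pos by (auto simp: blk_start_def blk_of_def)

lemma blk_start_cover: "1 \<le> x \<Longrightarrow> x \<le> n + d - 1 \<Longrightarrow> x \<notin> {m..m+d-1} \<Longrightarrow> 1 \<le> m \<Longrightarrow>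
    m \<le> n \<Longrightarrow>
  \<exists>j. 1 \<le> j \<and> j \<le> n \<and> j \<noteq> m \<and> x = blk_start d m j"
proof -
  assume a: "1 \<le> x" "x \<le> n + d - 1" "x \<notin> {m..m+d-1}" "1 \<le> m" "m \<le> n"
  show ?thesis
  proof (cases "x < m")
    case True then show ?thesis using a by (intro exI[of _ x]) (auto simp: blk_start_def)
  next
    case False
    then have "x \<ge> m + d" using a by auto
    then show ?thesis using a arity_pos by (intro exI[of _ "x - d + 1"]) (auto simp: blk_start_def)
  qed
qed

lemma sclone_blk_start: "1 \<le> n \<Longrightarrow> \<sigma> permutes {1..n} \<Longrightarrow> 1 \<le> k \<Longrightarrow> k \<le> n \<Longrightarrow> 1 \<le> j \<Longrightarrow> j \<le> n \<Longrightarrow>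
    j \<noteq> k \<Longrightarrow>
  sclone d n k \<sigma> (blk_start d k j) = blk_start d (\<sigma> k) (\<sigma> j)"
  using blk_start_range[of j n k] blk_of_start[of j k] by (simp add: sclone_def)

lemma rho_kappa_blk_start: "1 \<le> n \<Longrightarrow> 1 \<le> k \<Longrightarrow> k \<le> n \<Longrightarrow> g \<in> carrier (G n) \<Longrightarrow> 1 \<le> j \<Longrightarrow> j \<le> n \<Longrightarrow>
    j \<noteq> k \<Longrightarrow>
  \<rho> (n+d-1) (\<kappa> n k g) (blk_start d k j) = blk_start d (\<rho> n g k) (\<rho> n g j)"
  using rho_kappa_outside[of n k g "blk_start d k j"] blk_start_out[of j k] sclone_blk_start rho_permutes by simp

lemma rho_kappa_block:
  assumes a: "1 \<le> n" "1 \<le> k" "k \<le> n" "g \<in> carrier (G n)" "i < d"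
  shows "\<exists>i'<d. \<rho> (n+d-1) (\<kappa> n k g) (k + i) = \<rho> n g k + i'"
proof (rule ccontr)
  assume nc: "\<not> ?thesis"
  let ?p = "\<rho> (n+d-1) (\<kappa> n k g)" and ?s = "\<rho> n g"
  have n1: "1 \<le> n + d - 1" using a arity_pos by simp
  have pp: "?p permutes {1..n+d-1}" using rho_permutes[OF n1] kappa_closed a by simp
  have sk: "1 \<le> ?s k \<and> ?s k \<le> n" using rho_range a by simp
  have "k + i \<in> {1..n+d-1}" using a by auto
  then have x: "?p (k+i) \<in> {1..n+d-1}" using pp permutes_in_image by metis
  have "?p (k+i) \<notin> {?s k..?s k + d - 1}"
  proof
    assume "?p (k+i) \<in> {?s k..?s k + d - 1}"
    then have "?p (k+i) - ?s k < d" "?p (k+i) = ?s k + (?p (k+i) - ?s k)" using arity_pos by auto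
    then show False using nc by blast
  qed
  then obtain j' where j': "1 \<le> j'" "j' \<le> n" "j' \<noteq> ?s k" "?p (k+i) = blk_start d (?s k) j'"
    using blk_start_cover[of "?p (k+i)" n "?s k"] x sk by auto
  define j where "j = \<rho> n (inv\<^bsub>G n\<^esub> g) j'"
  interpret group "G n" using group_G a by simp
  have gi: "inv\<^bsub>G n\<^esub> g \<in> carrier (G n)" using a by simp
  have jr: "1 \<le> j \<and> j \<le> n" unfolding j_def using rho_range[OF a(1) gi] j' by simp
  have sj: "?s j = j'" unfolding j_def using rho_inv' a by simp
  have jk: "j \<noteq> k" using sj j' by auto
  have "?p (blk_start d k j) = ?p (k+i)" using rho_kappa_blk_start[OF a(1-4)] jr jk sj j' by simp
  then have "blk_start d k j = k + i" using pp permutes_inj by (metis injD)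
  then show False using blk_start_out[of j k] jr jk a by auto
qed

lemma rho_kappa_block_surj:
  assumes a: "1 \<le> n" "1 \<le> k" "k \<le> n" "g \<in> carrier (G n)" "i' < d"
  shows "\<exists>i<d. \<rho> (n+d-1) (\<kappa> n k g) (k + i) = \<rho> n g k + i'"
proof -
  let ?p = "\<rho> (n+d-1) (\<kappa> n k g)" and ?s = "\<rho> n g"
  have n1: "1 \<le> n + d - 1" using a arity_pos by simp
  have pp: "?p permutes {1..n+d-1}" using rho_permutes[OF n1] kappa_closed a by simp
  have sk: "1 \<le> ?s k \<and> ?s k \<le> n" using rho_range a by simp
  have "?s k + i' \<in> {1..n+d-1}" using a sk by auto
  then obtain x where x: "x \<in> {1..n+d-1}" "?p x = ?s k + i'" using permutes_image[OF pp] by (metis imageE)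
  show ?thesis
  proof (cases "x \<in> {k..k+d-1}")
    case True
    then show ?thesis using x arity_pos by (intro exI[of _ "x - k"]) auto
  next
    case False
    then obtain j where j: "1 \<le> j" "j \<le> n" "j \<noteq> k" "x = blk_start d k j"
      using blk_start_cover[of x n k] x a by auto
    then have "?p x = blk_start d (?s k) (?s j)" using rho_kappa_blk_start a by simp
    moreover have "?s j \<noteq> ?s k" using rho_inj a j by metis
    moreover have "1 \<le> ?s j" using rho_range a j by simp
    ultimately have "?p x \<notin> {?s k..?s k + d - 1}" using blk_start_out by metis
    then show ?thesis using x a by simp
  qed
qed

section \<open>Expansions and normal forms\<close>

abbreviation valid :: "dtree \<times> 'g \<times> dtree \<Rightarrow> bool" where "valid \<equiv> valid_triple d G"

definition ltree :: "dtree \<times> 'g \<times> dtree \<Rightarrow> dtree" where "ltree t = fst t"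
definition elem :: "dtree \<times> 'g \<times> dtree \<Rightarrow> 'g" where "elem t = fst (snd t)"
definition rtree :: "dtree \<times> 'g \<times> dtree \<Rightarrow> dtree" where "rtree t = snd (snd t)"

lemma triple_sel[simp]: "ltree (T,g,U) = T" "elem (T,g,U) = g" "rtree (T,g,U) = U"
  by (simp_all add: ltree_def elem_def rtree_def)

definition expand :: "dtree \<times> 'g \<times> dtree \<Rightarrow> nat \<Rightarrow> dtree \<times> 'g \<times> dtree" where
  "expand t k = (grow d (\<rho> (leaves (ltree t)) (elem t) k) (ltree t), \<kappa> (leaves (ltree t)) k (elem t), grow d k (rtree t))"

lemma expand_simp: "expand (T,g,U) k = (grow d (\<rho> (leaves T) g k) T, \<kappa> (leaves T) k g, grow d k U)"
  by (simp add: expand_def)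

lemma valid_simp: "valid (T,g,U) \<longleftrightarrow> dvalid d T \<and> dvalid d U \<and> leaves T = leaves U \<and> g \<in> carrier (G (leaves T))"
  by (simp add: valid_triple_def)

lemma validD: "valid t \<Longrightarrow>
    1 \<le> leaves (ltree t) \<and> leaves (rtree t) = leaves (ltree t) \<and> dvalid d (ltree t) \<and> dvalid d (rtree t) \<and> elem t \<in> carrier (G (leaves (ltree t)))"
  using leaves_pos[OF arity_pos] by (cases t) (auto simp: valid_triple_def)

lemma valid_expand: "valid t \<Longrightarrow> 1 \<le> k \<Longrightarrow> k \<le> leaves (rtree t) \<Longrightarrow>
    valid (expand t k) \<and> leaves (ltree (expand t k)) = leaves (ltree t) + d - 1"
proof -
  assume a: "valid t" "1 \<le> k" "k \<le> leaves (rtree t)"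
  obtain T g U where t: "t = (T,g,U)" by (cases t)
  let ?n = "leaves T"
  have v: "dvalid d T" "dvalid d U" "leaves T = leaves U" "g \<in> carrier (G ?n)" "1 \<le> ?n"
    using validD[OF a(1)] t by auto
  have r: "1 \<le> \<rho> ?n g k \<and> \<rho> ?n g k \<le> ?n" using rho_range v a t by simp
  have "dvalid d (grow d (\<rho> ?n g k) T)" "leaves (grow d (\<rho> ?n g k) T) = ?n + d - 1"
    using grow_valid grow_leaves v r by auto
  moreover have "dvalid d (grow d k U)" "leaves (grow d k U) = ?n + d - 1"
    using grow_valid grow_leaves v a t by auto
  moreover have "\<kappa> ?n k g \<in> carrier (G (?n + d - 1))" using kappa_closed v a t by simp
  ultimately show ?thesis using t by (simp add: expand_simp valid_simp)
qed

lemma expand_rel_eq: "expand_rel d G \<rho> \<kappa> = {(t, expand t k) | t k. valid t \<and> 1 \<le> k \<and> k \<le> leaves (ltree t)}"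
  unfolding expand_rel_def by (auto simp: expand_simp)

lemma expand_in_rel: "valid t \<Longrightarrow> 1 \<le> k \<Longrightarrow> k \<le> leaves (rtree t) \<Longrightarrow>
    (t, expand t k) \<in> expand_rel d G \<rho> \<kappa>"
  unfolding expand_rel_eq using validD by fastforce

lemma expand_diamond:
  assumes "valid t" "1 \<le> k" "k \<le> leaves (rtree t)" "1 \<le> j" "j \<le> leaves (rtree t)" "k \<noteq> j"
  shows "expand (expand t k) (blk_start d k j) = expand (expand t j) (blk_start d j k)"
proof -
  obtain T g U where t: "t = (T,g,U)" by (cases t)
  let ?n = "leaves T" and ?s = "\<rho> (leaves T) g"
  have v: "dvalid d T" "dvalid d U" "leaves T = leaves U" "g \<in> carrier (G ?n)" "1 \<le> ?n"
    using validD[OF assms(1)] t by auto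
  have kr: "1 \<le> k" "k \<le> ?n" "1 \<le> j" "j \<le> ?n" using assms t v by auto
  have sk: "1 \<le> ?s k \<and> ?s k \<le> ?n" "1 \<le> ?s j \<and> ?s j \<le> ?n" using rho_range v kr by auto
  have sjk: "?s k \<noteq> ?s j" using rho_inj v kr assms(6) by metis
  have lk: "leaves (grow d (?s k) T) = ?n + d - 1" "leaves (grow d (?s j) T) = ?n + d - 1"
    using grow_leaves v sk by auto
  have L: "grow d (\<rho> (?n+d-1) (\<kappa> ?n k g) (blk_start d k j)) (grow d (?s k) T)
      = grow d (\<rho> (?n+d-1) (\<kappa> ?n j g) (blk_start d j k)) (grow d (?s j) T)"
    using rho_kappa_blk_start[of ?n k g j] rho_kappa_blk_start[of ?n j g k] v kr assms(6)
      grow_diamond[OF arity_pos v(1), of "?s k" "?s j"] sk sjk by simp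
  have M: "\<kappa> (?n+d-1) (blk_start d k j) (\<kappa> ?n k g) = \<kappa> (?n+d-1) (blk_start d j k) (\<kappa> ?n j g)"
  proof (cases "j < k")
    case True
    then show ?thesis using kappa_kappa[of ?n j k g] v kr by (simp add: blk_start_def)
  next
    case False
    then have "k < j" using assms(6) by simp
    then show ?thesis using kappa_kappa[of ?n k j g] v kr by (simp add: blk_start_def)
  qed
  have R: "grow d (blk_start d k j) (grow d k U) = grow d (blk_start d j k) (grow d j U)"
    using grow_diamond[OF arity_pos v(2), of k j] kr v assms(6) by simp
  show ?thesis using L M R lk t by (simp add: expand_simp)
qed

lemma expand_inj:
  assumes "valid t" "valid s" "rtree t = rtree s" "1 \<le> k" "k \<le> leaves (rtree t)" "expand t k = expand s k"
  shows "t = s"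
proof -
  obtain T g U where t: "t = (T,g,U)" by (cases t)
  obtain T' g' U' where s: "s = (T',g',U')" by (cases s)
  have v: "dvalid d T" "dvalid d U" "leaves T = leaves U" "g \<in> carrier (G (leaves T))" "1 \<le> leaves T"
    using validD[OF assms(1)] t by auto
  have v': "dvalid d T'" "dvalid d U'" "leaves T' = leaves U'" "g' \<in> carrier (G (leaves T'))"
    using validD[OF assms(2)] s by auto
  have UU: "U = U'" using assms t s by simp
  have n: "leaves T' = leaves T" using v v' UU by simp
  have "\<kappa> (leaves T) k g = \<kappa> (leaves T) k g'" using assms(6) t s n by (simp add: expand_simp)
  then have gg: "g = g'" using kappa_inj_on[of "leaves T" k] v v' n assms t by (auto dest: inj_onD)
  have "grow d (\<rho> (leaves T) g k) T = grow d (\<rho> (leaves T) g k) T'" using assms(6) t s n gg by (simp add: expand_simp)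
  moreover have "1 \<le> \<rho> (leaves T) g k \<and> \<rho> (leaves T) g k \<le> leaves T"
    using rho_range[of "leaves T" g k] v assms t by simp
  ultimately have "T = T'" using grow_inj[OF arity_pos v(1) v'(1)] n by (metis (no_types) order_trans order_refl)
  then show ?thesis using t s UU gg by simp
qed

definition first_internal :: "dtree \<Rightarrow> dtree \<Rightarrow> nat" where
  "first_internal V W = (LEAST k. 1 \<le> k \<and> k \<le> leaves V \<and> leaf_addrs V ! (k-1) \<notin> set (leaf_addrs W))"

lemma first_internal: "dvalid d V \<Longrightarrow> dvalid d W \<Longrightarrow> tree_le V W \<Longrightarrow> V \<noteq> W \<Longrightarrow>
   1 \<le> first_internal V W \<and> first_internal V W \<le> leaves V \<and> leaf_addrs V ! (first_internal V W - 1) \<notin> set (leaf_addrs W)"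
  unfolding first_internal_def using tree_le_internal_leaf[of d V W] by (rule LeastI_ex) simp_all

lemma expand_to_decreases: "valid t \<Longrightarrow> dvalid d W \<Longrightarrow> tree_le (rtree t) W \<Longrightarrow>
    rtree t \<noteq> W \<Longrightarrow>
  leaves W - leaves (rtree (expand t (first_internal (rtree t) W))) < leaves W - leaves (rtree t)"
proof -
  assume a: "valid t" "dvalid d W" "tree_le (rtree t) W" "rtree t \<noteq> W"
  let ?k = "first_internal (rtree t) W"
  have f: "1 \<le> ?k" "?k \<le> leaves (rtree t)" "leaf_addrs (rtree t) ! (?k - 1) \<notin> set (leaf_addrs W)"
    using first_internal[of "rtree t" W] a validD by auto
  have rg: "rtree (expand t ?k) = grow d ?k (rtree t)" by (simp add: expand_def)
  have vg: "dvalid d (grow d ?k (rtree t))" "leaves (grow d ?k (rtree t)) = leaves (rtree t) + d - 1"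
    using grow_valid grow_leaves f validD a by auto
  have "tree_le (grow d ?k (rtree t)) W" using tree_le_grow_internal f a validD by blast
  then have "leaves (grow d ?k (rtree t)) \<le> leaves W" using tree_le_leaves[OF arity_pos] vg a by blast
  then show ?thesis using rg vg arity_ge_2 by simp
qed

function expand_to :: "dtree \<times> 'g \<times> dtree \<Rightarrow> dtree \<Rightarrow> dtree \<times> 'g \<times> dtree" where
  "expand_to t W = (if valid t \<and> dvalid d W \<and> tree_le (rtree t) W \<and> rtree t \<noteq> W then expand_to (expand t (first_internal (rtree t) W)) W else t)"
  by auto
termination
  by (relation "measure (\<lambda>(t,W). leaves W - leaves (rtree t))") (auto intro: expand_to_decreases)

declare expand_to.simps[simp del]

abbreviation sim where "sim \<equiv> triple_equiv d G \<rho> \<kappa>"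
abbreviation expansion where "expansion \<equiv> expand_rel d G \<rho> \<kappa>"

lemma expansion_sim: "(t,s) \<in> expansion \<Longrightarrow> (t,s) \<in> sim"
  unfolding triple_equiv_def by blast

lemma expansion_rtrancl_sim: "(t,s) \<in> expansion\<^sup>* \<Longrightarrow> (t,s) \<in> sim"
  unfolding triple_equiv_def by (meson in_rtrancl_UnI)

lemma expand_to_props:
  "valid t \<Longrightarrow> dvalid d W \<Longrightarrow> tree_le (rtree t) W \<Longrightarrow>
   valid (expand_to t W) \<and> rtree (expand_to t W) = W \<and> (t, expand_to t W) \<in> expansion\<^sup>* \<and> tree_le (ltree t) (ltree (expand_to t W))"
proof (induction t W rule: expand_to.induct)
  case (1 t W)
  show ?case
  proof (cases "rtree t = W")
    case True
    then show ?thesis using 1 expand_to.simps[of t W] by (simp add: tree_le_refl)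
  next
    case False
    let ?k = "first_internal (rtree t) W"
    have f: "1 \<le> ?k" "?k \<le> leaves (rtree t)" "leaf_addrs (rtree t) ! (?k - 1) \<notin> set (leaf_addrs W)"
      using first_internal[of "rtree t" W] 1 False validD by auto
    have e: "expand_to t W = expand_to (expand t ?k) W" using expand_to.simps[of t W] 1 False by simp
    have ve: "valid (expand t ?k)" using valid_expand 1 f by blast
    have "tree_le (grow d ?k (rtree t)) W" using tree_le_grow_internal f 1 validD by blast
    then have le2: "tree_le (rtree (expand t ?k)) W" by (simp add: expand_def)
    have IH: "valid (expand_to (expand t ?k) W) \<and> rtree (expand_to (expand t ?k) W) = W \<and> (expand t ?k, expand_to (expand t ?k) W) \<in> expansion\<^sup>* \<and> tree_le (ltree (expand t ?k)) (ltree (expand_to (expand t ?k) W))"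
      using 1 False ve le2 by blast
    have "(t, expand t ?k) \<in> expansion" using expand_in_rel 1 f by blast
    moreover have "tree_le (ltree t) (ltree (expand t ?k))"
    proof -
      have "1 \<le> \<rho> (leaves (ltree t)) (elem t) ?k \<and> \<rho> (leaves (ltree t)) (elem t) ?k \<le> leaves (ltree t)"
        using rho_range validD[OF 1(2)] f by auto
      then show ?thesis using tree_le_grow validD[OF 1(2)] by (simp add: expand_def)
    qed
    ultimately have "(t, expand_to t W) \<in> expansion\<^sup>*" "tree_le (ltree t) (ltree (expand_to t W))"
      using IH e tree_le_trans by (auto intro: converse_rtrancl_into_rtrancl)
    then show ?thesis using IH e by simp
  qed
qed

text \<open>Confluence: any admissible first expansion leads to the same result, because two expansions at
  distinct leaves commute (expand_diamond).\<close>

lemma expand_to_expand: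
  assumes "valid t" "dvalid d W" "1 \<le> k" "k \<le> leaves (rtree t)" "tree_le (grow d k (rtree t)) W"
  shows "expand_to (expand t k) W = expand_to t W"
  using assms
proof (induction "leaves W - leaves (rtree t)" arbitrary: t k rule: less_induct)
  case less
  let ?V = "rtree t"
  have vV: "dvalid d ?V" using validD less.prems by blast
  have leV: "tree_le ?V W" using tree_le_trans[OF tree_le_grow[OF vV less.prems(3,4)] less.prems(5)] .
  have neq: "?V \<noteq> W"
  proof
    assume "?V = W"
    then have "leaves (grow d k ?V) \<le> leaves ?V" using tree_le_leaves[OF arity_pos] grow_valid vV less.prems by metis
    then show False using grow_leaves vV less.prems arity_ge_2 by simp
  qed
  let ?k0 = "first_internal ?V W"
  have f: "1 \<le> ?k0" "?k0 \<le> leaves ?V" "leaf_addrs ?V ! (?k0 - 1) \<notin> set (leaf_addrs W)"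
    using first_internal[of ?V W] vV less.prems leV neq by auto
  have e: "expand_to t W = expand_to (expand t ?k0) W" using expand_to.simps[of t W] less.prems leV neq by simp
  show ?case
  proof (cases "k = ?k0")
    case True then show ?thesis using e by simp
  next
    case False
    let ?k' = "blk_start d ?k0 k" and ?k0' = "blk_start d k ?k0"
    have vk0: "valid (expand t ?k0)" and vk: "valid (expand t k)" using valid_expand less.prems f by auto
    have rk0: "rtree (expand t ?k0) = grow d ?k0 ?V" and rk: "rtree (expand t k) = grow d k ?V" by (simp_all add: expand_def)
    have lg0: "leaves (grow d ?k0 ?V) = leaves ?V + d - 1" and lg: "leaves (grow d k ?V) = leaves ?V + d - 1"
      using grow_leaves vV f less.prems by auto
    have le0: "tree_le (grow d ?k0 ?V) W" using tree_le_grow_internal vV less.prems(2) leV f by blast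
    have k'r: "1 \<le> ?k'" "?k' \<le> leaves (grow d ?k0 ?V)" using blk_start_range[of k "leaves ?V" ?k0] less.prems lg0 by simp_all
    have k0'r: "1 \<le> ?k0'" "?k0' \<le> leaves (grow d k ?V)" using blk_start_range[of ?k0 "leaves ?V" k] f lg by simp_all
    have le1: "tree_le (grow d ?k' (grow d ?k0 ?V)) W"
      using tree_le_grow_blk_start[OF arity_pos vV less.prems(2)] f less.prems(3-5) le0 False by simp
    have le2: "tree_le (grow d ?k0' (grow d k ?V)) W"
      using tree_le_grow_blk_start[OF arity_pos vV less.prems(2)] f less.prems(3-5) le0 False by simp
    have m0: "leaves W - leaves (rtree (expand t ?k0)) < leaves W - leaves (rtree t)"
      using expand_to_decreases less.prems leV neq by blast
    have m1: "leaves W - leaves (rtree (expand t k)) < leaves W - leaves (rtree t)"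
    proof -
      have "leaves (grow d k ?V) \<le> leaves W"
      using tree_le_leaves[OF arity_pos _ less.prems(2) less.prems(5)] grow_valid vV less.prems(3,4) by blast
      then show ?thesis using rk lg arity_ge_2 by simp
    qed
    have "expand_to (expand (expand t ?k0) ?k') W = expand_to (expand t ?k0) W"
      using less.hyps[OF m0 vk0 less.prems(2)] k'r rk0 le1 by simp
    moreover have "expand_to (expand (expand t k) ?k0') W = expand_to (expand t k) W"
      using less.hyps[OF m1 vk less.prems(2)] k0'r rk le2 by simp
    moreover have "expand (expand t ?k0) ?k' = expand (expand t k) ?k0'"
      using expand_diamond less.prems f False by metis
    ultimately show ?thesis using e by simp
  qed
qed

lemma sim_refl: "(t,t) \<in> sim" unfolding triple_equiv_def by simp

lemma sim_sym: "(t,s) \<in> sim \<Longrightarrow> (s,t) \<in> sim"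
proof -
  assume "(t,s) \<in> sim"
  then have "(s,t) \<in> ((expansion \<union> expansion\<inverse>)\<inverse>)\<^sup>*" unfolding triple_equiv_def by (simp add: rtrancl_converseI)
  moreover have "(expansion \<union> expansion\<inverse>)\<inverse> = expansion \<union> expansion\<inverse>" by auto
  ultimately show ?thesis unfolding triple_equiv_def by simp
qed

lemma sim_trans: "(t,s) \<in> sim \<Longrightarrow> (s,u) \<in> sim \<Longrightarrow> (t,u) \<in> sim"
  unfolding triple_equiv_def by (rule rtrancl_trans)

abbreviation cls where "cls \<equiv> tclass d G \<rho> \<kappa>"

lemma cls_eq_iff: "cls t = cls s \<longleftrightarrow> (t,s) \<in> sim"
proof
  assume "cls t = cls s"
  then have "s \<in> cls t" using sim_refl unfolding tclass_def by auto
  then show "(t,s) \<in> sim" unfolding tclass_def by auto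
next
  assume a: "(t,s) \<in> sim"
  show "cls t = cls s" unfolding tclass_def using a sim_sym sim_trans by blast
qed

lemma expansion_valid: "(t,s) \<in> expansion \<Longrightarrow> valid t \<and> valid s"
  unfolding expand_rel_eq using valid_expand validD by fastforce

lemma sim_valid: "(t,s) \<in> sim \<Longrightarrow> valid t \<Longrightarrow> valid s"
  unfolding triple_equiv_def
proof (induction rule: rtrancl_induct)
  case base then show ?case by simp
next
  case (step u s) then show ?case using expansion_valid by blast
qed

lemma sim_expand_to_eq:
  assumes "(t,s) \<in> sim" "valid t"
  shows "\<exists>W0. dvalid d W0 \<and> tree_le (rtree t) W0 \<and> tree_le (rtree s) W0 \<and>
    (\<forall>W. dvalid d W \<and> tree_le W0 W \<longrightarrow> expand_to t W = expand_to s W)"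
  using assms unfolding triple_equiv_def
proof (induction rule: rtrancl_induct)
  case base
  have "dvalid d (rtree t)" using validD base by blast
  then show ?case using tree_le_refl by blast
next
  case (step u s)
  from step.IH step.prems obtain W0 where W0: "dvalid d W0" "tree_le (rtree t) W0" "tree_le (rtree u) W0" "\<forall>W. dvalid d W \<and> tree_le W0 W \<longrightarrow> expand_to t W = expand_to u W"
    by blast
  have vu: "valid u" using sim_valid step(1) step.prems unfolding triple_equiv_def by blast
  from step(2) show ?case
  proof
    assume "(u,s) \<in> expansion"
    then obtain k where k: "s = expand u k" "1 \<le> k" "k \<le> leaves (ltree u)" unfolding expand_rel_eq by blast
    have k2: "k \<le> leaves (rtree u)" using k validD[OF vu] by simp
    have rs: "rtree s = grow d k (rtree u)" using k by (simp add: expand_def)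
    have vs: "valid s" using valid_expand[OF vu k(2) k2] k by simp
    have vrs: "dvalid d (rtree s)" using validD[OF vs] by blast
    let ?W0 = "tree_join W0 (rtree s)"
    have v0: "dvalid d ?W0" using dvalid_tree_join W0(1) vrs by blast
    have l1: "tree_le W0 ?W0" "tree_le (rtree s) ?W0" using tree_le_join1[OF W0(1) vrs] tree_le_join2[OF W0(1) vrs] by auto
    have "expand_to t W = expand_to s W" if "dvalid d W" "tree_le ?W0 W" for W
    proof -
      have "tree_le W0 W" using tree_le_trans[OF l1(1) that(2)] .
      then have "expand_to t W = expand_to u W" using W0(4) that(1) by blast
      also have "\<dots> = expand_to s W" using expand_to_expand[OF vu that(1) k(2) k2] rs tree_le_trans[OF l1(2) that(2)] k(1) by simp
      finally show ?thesis .
    qed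
    moreover have "tree_le (rtree t) ?W0" using tree_le_trans[OF W0(2) l1(1)] .
    ultimately show ?thesis using v0 l1(2) by blast
  next
    assume "(u,s) \<in> expansion\<inverse>"
    then obtain k where k: "u = expand s k" "1 \<le> k" "k \<le> leaves (ltree s)" "valid s" unfolding expand_rel_eq by blast
    have k2: "k \<le> leaves (rtree s)" using k validD[OF k(4)] by simp
    have ru: "rtree u = grow d k (rtree s)" using k by (simp add: expand_def)
    have "tree_le (rtree s) (rtree u)" using tree_le_grow[of d "rtree s" k] validD[OF k(4)] k(2) k2 ru by simp
    then have l: "tree_le (rtree s) W0" using W0(3) tree_le_trans by blast
    have "expand_to t W = expand_to s W" if "dvalid d W" "tree_le W0 W" for W
    proof -
      have "expand_to t W = expand_to u W" using W0(4) that by blast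
      also have "\<dots> = expand_to s W" using expand_to_expand[OF k(4) that(1) k(2) k2] k(1) ru tree_le_trans[OF W0(3) that(2)] by simp
      finally show ?thesis .
    qed
    then show ?thesis using l W0(1,2) by blast
  qed
qed

lemma expand_to_rtree: "rtree t = W \<Longrightarrow> expand_to t W = t"
  using expand_to.simps[of t W] by simp

lemma expand_to_step: "valid t \<Longrightarrow> dvalid d W \<Longrightarrow> tree_le (rtree t) W \<Longrightarrow> rtree t \<noteq> W \<Longrightarrow>
    expand_to t W = expand_to (expand t (first_internal (rtree t) W)) W"
  using expand_to.simps[of t W] by simp

lemma expand_to_inj:
  "valid t \<Longrightarrow> valid s \<Longrightarrow> rtree t = rtree s \<Longrightarrow> dvalid d W \<Longrightarrow> tree_le (rtree t) W \<Longrightarrow> expand_to t W = expand_to s W \<Longrightarrow>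
    t = s"
proof (induction t W arbitrary: s rule: expand_to.induct)
  case (1 t W)
  show ?case
  proof (cases "rtree t = W")
    case True
    then show ?thesis using 1(7) expand_to_rtree[of t W] expand_to_rtree[of s W] 1(4) by simp
  next
    case False
    let ?k = "first_internal (rtree t) W"
    have f: "1 \<le> ?k" "?k \<le> leaves (rtree t)" "leaf_addrs (rtree t) ! (?k - 1) \<notin> set (leaf_addrs W)"
      using first_internal[of "rtree t" W] 1 False validD by auto
    have et: "expand_to t W = expand_to (expand t ?k) W" using expand_to_step 1 False by blast
    have es: "expand_to s W = expand_to (expand s ?k) W" using expand_to_step[of s W] 1 False by simp
    have ve: "valid (expand t ?k)" "valid (expand s ?k)" using valid_expand 1 f by auto
    have "tree_le (grow d ?k (rtree t)) W" using tree_le_grow_internal f 1 validD by blast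
    then have le2: "tree_le (rtree (expand t ?k)) W" by (simp add: expand_def)
    have rr: "rtree (expand t ?k) = rtree (expand s ?k)" using 1 by (simp add: expand_def)
    have ee: "expand_to (expand t ?k) W = expand_to (expand s ?k) W" using et es 1(7) by simp
    have c: "valid t \<and> dvalid d W \<and> tree_le (rtree t) W \<and> rtree t \<noteq> W" using 1 False by blast
    have "expand t ?k = expand s ?k" using 1(1)[OF c ve(1) ve(2) rr 1(5) le2 ee] .
    then show ?thesis using expand_inj 1 f by blast
  qed
qed

lemma sim_rtree_unique: "valid t \<Longrightarrow> valid s \<Longrightarrow> (t,s) \<in> sim \<Longrightarrow> rtree t = rtree s \<Longrightarrow>
    t = s"
proof -
  assume a: "valid t" "valid s" "(t,s) \<in> sim" "rtree t = rtree s"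
  obtain W0 where W0: "dvalid d W0" "tree_le (rtree t) W0" "\<forall>W. dvalid d W \<and> tree_le W0 W \<longrightarrow> expand_to t W = expand_to s W"
    using sim_expand_to_eq a by blast
  then show ?thesis using expand_to_inj[of t s W0] a tree_le_refl by blast
qed

lemma sim_expand_to: "valid t \<Longrightarrow> dvalid d W \<Longrightarrow> tree_le (rtree t) W \<Longrightarrow> (t, expand_to t W) \<in> sim"
  using expand_to_props expansion_rtrancl_sim by blast

section \<open>The group structure\<close>

definition triple_inv :: "dtree \<times> 'g \<times> dtree \<Rightarrow> dtree \<times> 'g \<times> dtree" where
  "triple_inv t = (rtree t, inv\<^bsub>G (leaves (ltree t))\<^esub> (elem t), ltree t)"

lemma triple_inv_simp: "triple_inv (T,g,U) = (U, inv\<^bsub>G (leaves T)\<^esub> g, T)"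
  by (simp add: triple_inv_def)

lemma triple_inv_sel [simp]: "ltree (triple_inv t) = rtree t" "rtree (triple_inv t) = ltree t"
  by (simp_all add: triple_inv_def)

lemma valid_triple_inv: "valid t \<Longrightarrow> valid (triple_inv t)"
proof -
  assume a: "valid t"
  obtain T g U where t: "t = (T,g,U)" by (cases t)
  have v: "dvalid d T" "dvalid d U" "leaves T = leaves U" "g \<in> carrier (G (leaves T))" "1 \<le> leaves T"
    using validD[OF a] t by auto
  interpret group "G (leaves T)" using group_G v by simp
  have "inv\<^bsub>G (leaves T)\<^esub> g \<in> carrier (G (leaves T))" using v(4) by simp
  then show ?thesis using v(1,2) t v(3)[symmetric] by (simp add: triple_inv_simp valid_simp)
qed

lemma triple_inv_triple_inv: "valid t \<Longrightarrow> triple_inv (triple_inv t) = t"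
proof -
  assume a: "valid t"
  obtain T g U where t: "t = (T,g,U)" by (cases t)
  have v: "dvalid d T" "dvalid d U" "leaves T = leaves U" "g \<in> carrier (G (leaves T))" "1 \<le> leaves T"
    using validD[OF a] t by auto
  interpret group "G (leaves T)" using group_G v by simp
  have "inv\<^bsub>G (leaves T)\<^esub> (inv\<^bsub>G (leaves T)\<^esub> g) = g" using v(4) by simp
  then show ?thesis using t v(3)[symmetric] by (simp add: triple_inv_simp)
qed

lemma triple_inv_expand: "valid t \<Longrightarrow> 1 \<le> k \<Longrightarrow> k \<le> leaves (rtree t) \<Longrightarrow>
  triple_inv (expand t k) = expand (triple_inv t) (\<rho> (leaves (ltree t)) (elem t) k)"
proof -
  assume a: "valid t" "1 \<le> k" "k \<le> leaves (rtree t)"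
  obtain T g U where t: "t = (T,g,U)" by (cases t)
  let ?n = "leaves T"
  have v: "dvalid d T" "dvalid d U" "leaves T = leaves U" "g \<in> carrier (G ?n)" "1 \<le> ?n"
    using validD[OF a(1)] t by auto
  have r: "1 \<le> \<rho> ?n g k \<and> \<rho> ?n g k \<le> ?n" using rho_range v a t by simp
  have lg: "leaves (grow d (\<rho> ?n g k) T) = ?n + d - 1" using grow_leaves v r by simp
  show ?thesis using t v a r lg rho_inv kappa_inv by (simp add: expand_simp triple_inv_simp)
qed

lemma triple_inv_expansion: "(t,s) \<in> expansion \<Longrightarrow> (triple_inv t, triple_inv s) \<in> expansion"
proof -
  assume "(t,s) \<in> expansion"
  then obtain k where k: "s = expand t k" "valid t" "1 \<le> k" "k \<le> leaves (ltree t)" unfolding expand_rel_eq by blast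
  have "triple_inv s = expand (triple_inv t) (\<rho> (leaves (ltree t)) (elem t) k)" using triple_inv_expand k validD by simp
  moreover have "valid (triple_inv t)" using valid_triple_inv k by blast
  moreover have "1 \<le> \<rho> (leaves (ltree t)) (elem t) k \<and> \<rho> (leaves (ltree t)) (elem t) k \<le> leaves (ltree (triple_inv t))"
    using rho_range validD[OF k(2)] k by (auto simp: triple_inv_def)
  ultimately show ?thesis unfolding expand_rel_eq by blast
qed

lemma triple_inv_sim: "(t,s) \<in> sim \<Longrightarrow> (triple_inv t, triple_inv s) \<in> sim"
  unfolding triple_equiv_def
proof (induction rule: rtrancl_induct)
  case base then show ?case by simp
next
  case (step u s)
  then have "(triple_inv u, triple_inv s) \<in> expansion \<union> expansion\<inverse>" using triple_inv_expansion by blast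
  then show ?case using step by (meson rtrancl.rtrancl_into_rtrancl)
qed

lemma sim_ltree_unique: "valid t \<Longrightarrow> valid s \<Longrightarrow> (t,s) \<in> sim \<Longrightarrow> ltree t = ltree s \<Longrightarrow>
    t = s"
proof -
  assume a: "valid t" "valid s" "(t,s) \<in> sim" "ltree t = ltree s"
  have "triple_inv t = triple_inv s" using sim_rtree_unique[OF valid_triple_inv[OF a(1)] valid_triple_inv[OF a(2)] triple_inv_sim[OF a(3)]] a(4)
    by (simp add: triple_inv_def)
  then show ?thesis using triple_inv_triple_inv a by metis
qed

definition expand_left_to where "expand_left_to s W = triple_inv (expand_to (triple_inv s) W)"

lemma expand_left_to_props: "valid s \<Longrightarrow> dvalid d W \<Longrightarrow> tree_le (ltree s) W \<Longrightarrow>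
    valid (expand_left_to s W) \<and> ltree (expand_left_to s W) = W \<and> (s, expand_left_to s W) \<in> sim"
proof -
  assume a: "valid s" "dvalid d W" "tree_le (ltree s) W"
  have vi: "valid (triple_inv s)" using valid_triple_inv a by blast
  have r: "rtree (triple_inv s) = ltree s" by (simp add: triple_inv_def)
  have P: "valid (expand_to (triple_inv s) W) \<and> rtree (expand_to (triple_inv s) W) = W \<and> (triple_inv s, expand_to (triple_inv s) W) \<in> sim"
    using expand_to_props[OF vi a(2)] a r expansion_rtrancl_sim by auto
  then have "(triple_inv (triple_inv s), expand_left_to s W) \<in> sim" unfolding expand_left_to_def using triple_inv_sim by blast
  then have "(s, expand_left_to s W) \<in> sim" using triple_inv_triple_inv a by simp
  moreover have "valid (expand_left_to s W)" unfolding expand_left_to_def using P valid_triple_inv by blast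
  moreover have "ltree (expand_left_to s W) = W" unfolding expand_left_to_def using P by (simp add: triple_inv_def ltree_def rtree_def)
  ultimately show ?thesis by blast
qed

definition triple_mult :: "dtree \<times> 'g \<times> dtree \<Rightarrow> dtree \<times> 'g \<times> dtree \<Rightarrow> dtree \<times> 'g \<times> dtree" where
  "triple_mult t s = (ltree t, elem t \<otimes>\<^bsub>G (leaves (ltree t))\<^esub> elem s, rtree s)"

lemma triple_mult_simp: "triple_mult (T,g,U) (U',h,W) = (T, g \<otimes>\<^bsub>G (leaves T)\<^esub> h, W)"
  by (simp add: triple_mult_def)

lemma triple_mult_sel [simp]: "ltree (triple_mult t s) = ltree t" "rtree (triple_mult t s) = rtree s"
  by (simp_all add: triple_mult_def)

lemma valid_triple_mult: "valid t \<Longrightarrow> valid s \<Longrightarrow> rtree t = ltree s \<Longrightarrow> valid (triple_mult t s)"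
proof -
  assume a: "valid t" "valid s" "rtree t = ltree s"
  obtain T g U where t: "t = (T,g,U)" by (cases t)
  obtain U' h W where s: "s = (U',h,W)" by (cases s)
  have v: "dvalid d T" "dvalid d U" "leaves T = leaves U" "g \<in> carrier (G (leaves T))" "1 \<le> leaves T"
    using validD[OF a(1)] t by auto
  have v': "dvalid d W" "leaves U' = leaves W" "h \<in> carrier (G (leaves U'))" "U' = U"
    using validD[OF a(2)] s a(3) t by auto
  interpret group "G (leaves T)" using group_G v by simp
  have "leaves U' = leaves T" using v'(4) v(3) by simp
  then have "h \<in> carrier (G (leaves T))" using v'(3) by simp
  then have c: "g \<otimes>\<^bsub>G (leaves T)\<^esub> h \<in> carrier (G (leaves T))" using v(4) by (rule m_closed[rotated])
  have lw: "leaves T = leaves W" using v'(2,4) v(3) by simp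
  have "triple_mult t s = (T, g \<otimes>\<^bsub>G (leaves T)\<^esub> h, W)" using t s by (simp add: triple_mult_simp)
  moreover have "valid (T, g \<otimes>\<^bsub>G (leaves T)\<^esub> h, W)" unfolding valid_simp using v(1) v'(1) lw c by blast
  ultimately show ?thesis by simp
qed

text \<open>By (C1), expanding the left factor at the k-th leaf of its right tree is matched by expanding the
  right factor at the leaf m; this makes multiplication of representatives compatible with \<sim>.\<close>

lemma triple_mult_expand:
  assumes "valid t" "valid s" "rtree t = ltree s" "1 \<le> k" "k \<le> leaves (rtree t)"
  defines "m \<equiv> \<rho> (leaves (ltree t)) (inv\<^bsub>G (leaves (ltree t))\<^esub> (elem s)) k"
  shows "1 \<le> m \<and> m \<le> leaves (rtree s) \<and> ltree (expand s m) = rtree (expand t k) \<and>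
    triple_mult (expand t k) (expand s m) = expand (triple_mult t s) m"
proof -
  obtain T g U where t: "t = (T,g,U)" by (cases t)
  obtain U' h W where s: "s = (U',h,W)" by (cases s)
  let ?n = "leaves T"
  have v: "dvalid d T" "dvalid d U" "leaves T = leaves U" "g \<in> carrier (G ?n)" "1 \<le> ?n"
    using validD[OF assms(1)] t by auto
  have v': "dvalid d W" "leaves U' = leaves W" "h \<in> carrier (G ?n)" "U' = U"
    using validD[OF assms(2)] s assms(3) t v by auto
  interpret group "G ?n" using group_G v by simp
  have kr: "1 \<le> k" "k \<le> ?n" using assms t v by auto
  have hi: "inv\<^bsub>G ?n\<^esub> h \<in> carrier (G ?n)" using v' by simp
  have mr: "1 \<le> m \<and> m \<le> ?n" unfolding m_def using rho_range[OF v(5) hi kr] t s by simp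
  have hm: "\<rho> ?n h m = k" unfolding m_def using rho_inv'[OF v(5) v'(3)] t s by simp
  have gr: "1 \<le> \<rho> ?n g k \<and> \<rho> ?n g k \<le> ?n" using rho_range v kr by simp
  have lg: "leaves (grow d (\<rho> ?n g k) T) = ?n + d - 1" using grow_leaves v gr by simp
  have c1: "\<kappa> ?n m (g \<otimes>\<^bsub>G ?n\<^esub> h) = \<kappa> ?n k g \<otimes>\<^bsub>G (?n + d - 1)\<^esub> \<kappa> ?n m h"
    using kappa_mult[of ?n m g h] v v' mr hm by simp
  have r1: "\<rho> ?n (g \<otimes>\<^bsub>G ?n\<^esub> h) m = \<rho> ?n g k" using rho_mult[OF v(5) v(4) v'(3)] hm by simp
  have "ltree (expand s m) = rtree (expand t k)" using s t v' v hm by (simp add: expand_simp)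
  moreover have "triple_mult (expand t k) (expand s m) = expand (triple_mult t s) m"
    using s t v' v hm c1 r1 lg by (simp add: expand_simp triple_mult_simp)
  ultimately show ?thesis using mr v v' s t by simp
qed

lemma triple_mult_expand_to:
  "valid t \<Longrightarrow> valid s \<Longrightarrow> rtree t = ltree s \<Longrightarrow> dvalid d W \<Longrightarrow>
    tree_le (rtree t) W \<Longrightarrow>
   \<exists>s'. (s,s') \<in> sim \<and> valid s' \<and> ltree s' = W \<and> (triple_mult t s, triple_mult (expand_to t W) s') \<in> sim"
proof (induction t W arbitrary: s rule: expand_to.induct)
  case (1 t W)
  show ?case
  proof (cases "rtree t = W")
    case True
    have "expand_to t W = t" using expand_to_rtree True by blast
    then have "(s,s) \<in> sim \<and> valid s \<and> ltree s = W \<and> (triple_mult t s, triple_mult (expand_to t W) s) \<in> sim"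
      using 1(2-4) True sim_refl by simp
    then show ?thesis by blast
  next
    case False
    let ?k = "first_internal (rtree t) W"
    have f: "1 \<le> ?k" "?k \<le> leaves (rtree t)" "leaf_addrs (rtree t) ! (?k - 1) \<notin> set (leaf_addrs W)"
      using first_internal[of "rtree t" W] 1 False validD by auto
    have et: "expand_to t W = expand_to (expand t ?k) W" using expand_to_step 1 False by blast
    have ve: "valid (expand t ?k)" using valid_expand 1 f by auto
    have "tree_le (grow d ?k (rtree t)) W" using tree_le_grow_internal f 1 validD by blast
    then have le2: "tree_le (rtree (expand t ?k)) W" by (simp add: expand_def)
    let ?m = "\<rho> (leaves (ltree t)) (inv\<^bsub>G (leaves (ltree t))\<^esub> (elem s)) ?k"
    have P: "1 \<le> ?m \<and> ?m \<le> leaves (rtree s) \<and> ltree (expand s ?m) = rtree (expand t ?k) \<and> triple_mult (expand t ?k) (expand s ?m) = expand (triple_mult t s) ?m"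
      using triple_mult_expand[of t s ?k] 1 f by blast
    have vs: "valid (expand s ?m)" using valid_expand 1 P by blast
    have c: "valid t \<and> dvalid d W \<and> tree_le (rtree t) W \<and> rtree t \<noteq> W" using 1 False by blast
    obtain s' where s': "(expand s ?m, s') \<in> sim" "valid s'" "ltree s' = W" "(triple_mult (expand t ?k) (expand s ?m), triple_mult (expand_to (expand t ?k) W) s') \<in> sim"
      using 1(1)[OF c ve vs] P 1(5) le2 by metis
    have "(s, expand s ?m) \<in> sim" using expand_in_rel 1 P expansion_sim by blast
    moreover have "(triple_mult t s, triple_mult (expand t ?k) (expand s ?m)) \<in> sim"
    proof -
      have vp: "valid (triple_mult t s)" using valid_triple_mult 1 by blast
      have "leaves (rtree (triple_mult t s)) = leaves (rtree s)" by (simp add: triple_mult_def)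
      then have "(triple_mult t s, expand (triple_mult t s) ?m) \<in> expansion" using expand_in_rel[OF vp] P by simp
      then show ?thesis using P expansion_sim by simp
    qed
    ultimately show ?thesis using s' et sim_trans by metis
  qed
qed

lemma triple_mult_sim:
  assumes "valid t1" "valid s1" "valid t2" "valid s2" "rtree t1 = ltree s1" "rtree t2 = ltree s2" "(t1,t2) \<in> sim" "(s1,s2) \<in> sim"
  shows "(triple_mult t1 s1, triple_mult t2 s2) \<in> sim"
proof -
  obtain W0 where W0: "dvalid d W0" "tree_le (rtree t1) W0" "tree_le (rtree t2) W0" "\<forall>W. dvalid d W \<and> tree_le W0 W \<longrightarrow> expand_to t1 W = expand_to t2 W"
    using sim_expand_to_eq assms by blast
  have ee: "expand_to t1 W0 = expand_to t2 W0" using W0 tree_le_refl by blast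
  obtain s1' where s1': "(s1,s1') \<in> sim" "valid s1'" "ltree s1' = W0" "(triple_mult t1 s1, triple_mult (expand_to t1 W0) s1') \<in> sim"
    using triple_mult_expand_to[OF assms(1,2,5) W0(1,2)] by blast
  obtain s2' where s2': "(s2,s2') \<in> sim" "valid s2'" "ltree s2' = W0" "(triple_mult t2 s2, triple_mult (expand_to t2 W0) s2') \<in> sim"
    using triple_mult_expand_to[OF assms(3,4,6) W0(1,3)] by blast
  have "(s1', s1) \<in> sim" using s1'(1) sim_sym by blast
  then have "(s1', s2) \<in> sim" using assms(8) sim_trans by blast
  then have "(s1', s2') \<in> sim" using s2'(1) sim_trans by blast
  then have eq: "s1' = s2'" using sim_ltree_unique[OF s1'(2) s2'(2)] s1'(3) s2'(3) by simp
  have "(triple_mult (expand_to t2 W0) s2', triple_mult t2 s2) \<in> sim" using s2'(4) sim_sym by blast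
  then have "(triple_mult (expand_to t1 W0) s1', triple_mult t2 s2) \<in> sim" using eq ee by simp
  then show ?thesis using s1'(4) sim_trans by blast
qed

abbreviation TGd where "TGd \<equiv> TG d G \<rho> \<kappa>"

lemma tmult_cls:
  assumes "valid t" "valid s" "rtree t = ltree s"
  shows "tmult d G \<rho> \<kappa> (cls t) (cls s) = cls (triple_mult t s)"
proof -
  define P where "P = (\<lambda>(T, g, U, h, W). valid (T, g, U) \<and> valid (U, h, W) \<and>
           cls t = cls (T, g, U) \<and> cls s = cls (U, h, W))"
  have P_ex: "\<exists>x. P x"
  proof -
    obtain T g U where t: "t = (T,g,U)" by (cases t)
    obtain U' h W where s: "s = (U',h,W)" by (cases s)
    have "P (T, g, U, h, W)" using assms t s unfolding P_def by simp
    then show ?thesis by blast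
  qed
  obtain T0 g0 U0 h0 W0 where x0: "(SOME x. P x) = (T0, g0, U0, h0, W0)" by (metis prod_cases5)
  have P0: "P (T0, g0, U0, h0, W0)" using someI_ex[OF P_ex] x0 by simp
  have "tmult d G \<rho> \<kappa> (cls t) (cls s) = cls (T0, g0 \<otimes>\<^bsub>G (leaves T0)\<^esub> h0, W0)"
    unfolding tmult_def using x0 unfolding P_def by simp
  also have "\<dots> = cls (triple_mult (T0,g0,U0) (U0,h0,W0))" by (simp add: triple_mult_simp)
  also have "\<dots> = cls (triple_mult t s)"
  proof -
    have "valid (T0,g0,U0)" "valid (U0,h0,W0)" "(t, (T0,g0,U0)) \<in> sim" "(s, (U0,h0,W0)) \<in> sim"
      using P0 cls_eq_iff unfolding P_def by auto
    then show ?thesis using triple_mult_sim[of "(T0,g0,U0)" "(U0,h0,W0)" t s] assms cls_eq_iff sim_sym by simp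
  qed
  finally show ?thesis .
qed

lemma TG_carrier: "carrier TGd = {cls x | x. valid x}"
  by (simp add: TG_def)
lemma TG_mult: "x \<otimes>\<^bsub>TGd\<^esub> y = tmult d G \<rho> \<kappa> x y" by (simp add: TG_def)
lemma TG_one: "\<one>\<^bsub>TGd\<^esub> = cls (Leaf, \<one>\<^bsub>G 1\<^esub>, Leaf)" by (simp add: TG_def)

lemma cls_carrier: "valid t \<Longrightarrow> cls t \<in> carrier TGd"
  using TG_carrier by blast

lemma mult_cls: "valid t \<Longrightarrow> valid s \<Longrightarrow> rtree t = ltree s \<Longrightarrow>
    cls t \<otimes>\<^bsub>TGd\<^esub> cls s = cls (triple_mult t s)"
  using tmult_cls TG_mult by simp

lemma sim_aligned: "valid t \<Longrightarrow> valid s \<Longrightarrow>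
    \<exists>t' s'. valid t' \<and> valid s' \<and> (t,t') \<in> sim \<and> (s,s') \<in> sim \<and> rtree t' = ltree s'"
proof -
  assume a: "valid t" "valid s"
  let ?J = "tree_join (rtree t) (ltree s)"
  have v1: "dvalid d (rtree t)" "dvalid d (ltree s)" using validD a by auto
  have vJ: "dvalid d ?J" "tree_le (rtree t) ?J" "tree_le (ltree s) ?J"
    using dvalid_tree_join[OF v1] tree_le_join1[OF v1] tree_le_join2[OF v1] by auto
  have P1: "valid (expand_to t ?J) \<and> rtree (expand_to t ?J) = ?J \<and> (t, expand_to t ?J) \<in> sim"
    using expand_to_props[OF a(1) vJ(1,2)] sim_expand_to[OF a(1) vJ(1,2)] by blast
  have P2: "valid (expand_left_to s ?J) \<and> ltree (expand_left_to s ?J) = ?J \<and> (s, expand_left_to s ?J) \<in> sim"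
    using expand_left_to_props[OF a(2) vJ(1,3)] by blast
  show ?thesis by (rule exI[of _ "expand_to t ?J"], rule exI[of _ "expand_left_to s ?J"]) (use P1 P2 in simp)
qed

lemma valid_one: "dvalid d A \<Longrightarrow> dvalid d B \<Longrightarrow> leaves A = leaves B \<Longrightarrow>
    valid (A, \<one>\<^bsub>G (leaves A)\<^esub>, B)"
proof -
  assume a: "dvalid d A" "dvalid d B" "leaves A = leaves B"
  have n: "1 \<le> leaves A" using leaves_pos[OF arity_pos a(1)] .
  interpret group "G (leaves A)" using group_G n by simp
  have "\<one>\<^bsub>G (leaves A)\<^esub> \<in> carrier (G (leaves A))" by (rule one_closed)
  then show ?thesis unfolding valid_simp using a by blast
qed

lemma expand_to_one: "dvalid d S \<Longrightarrow> dvalid d W \<Longrightarrow> tree_le S W \<Longrightarrow>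
    expand_to (S, \<one>\<^bsub>G (leaves S)\<^esub>, S) W = (W, \<one>\<^bsub>G (leaves W)\<^esub>, W)"
proof (induction "(S, \<one>\<^bsub>G (leaves S)\<^esub>, S)" W arbitrary: S rule: expand_to.induct)
  case (1 W S)
  have vS: "valid (S, \<one>\<^bsub>G (leaves S)\<^esub>, S)"
  proof -
    have "1 \<le> leaves S" using leaves_pos[OF arity_pos] 1 by blast
    then interpret group "G (leaves S)" using group_G by simp
    show ?thesis using 1 by (simp add: valid_simp)
  qed
  show ?case
  proof (cases "S = W")
    case True then show ?thesis using expand_to_rtree[of "(S, \<one>\<^bsub>G (leaves S)\<^esub>, S)" W] by simp
  next
    case False
    let ?k = "first_internal S W"
    have f: "1 \<le> ?k" "?k \<le> leaves S" "leaf_addrs S ! (?k - 1) \<notin> set (leaf_addrs W)"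
      using first_internal[of S W] 1 False by auto
    have n: "1 \<le> leaves S" using leaves_pos[OF arity_pos] 1 by blast
    have e: "expand_to (S, \<one>\<^bsub>G (leaves S)\<^esub>, S) W = expand_to (expand (S, \<one>\<^bsub>G (leaves S)\<^esub>, S) ?k) W"
      using expand_to_step[of "(S, \<one>\<^bsub>G (leaves S)\<^esub>, S)" W] vS 1 False by simp
    have ex1: "expand (S, \<one>\<^bsub>G (leaves S)\<^esub>, S) ?k = (grow d ?k S, \<one>\<^bsub>G (leaves (grow d ?k S))\<^esub>, grow d ?k S)"
      using rho_one[OF n] kappa_one[OF n f(1,2)] grow_leaves[OF 1(2) f(1,2)] by (simp add: expand_simp)
    have vg: "dvalid d (grow d ?k S)" using grow_valid 1 f by blast
    have lg: "tree_le (grow d ?k S) W" using tree_le_grow_internal 1 f by blast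
    have "expand_to (grow d ?k S, \<one>\<^bsub>G (leaves (grow d ?k S))\<^esub>, grow d ?k S) W = (W, \<one>\<^bsub>G (leaves W)\<^esub>, W)"
      using 1(1)[of "grow d ?k S"] vS 1 False vg lg ex1 by simp
    then show ?thesis using e ex1 by simp
  qed
qed

lemma one_cls: "dvalid d T \<Longrightarrow> \<one>\<^bsub>TGd\<^esub> = cls (T, \<one>\<^bsub>G (leaves T)\<^esub>, T)"
proof -
  assume vT: "dvalid d T"
  have v: "valid (Leaf, \<one>\<^bsub>G 1\<^esub>, Leaf)" using valid_one[of Leaf Leaf] by simp
  have "(Leaf, \<one>\<^bsub>G 1\<^esub>, Leaf) = (Leaf, \<one>\<^bsub>G (leaves Leaf)\<^esub>, Leaf)" by simp
  then have "expand_to (Leaf, \<one>\<^bsub>G 1\<^esub>, Leaf) T = (T, \<one>\<^bsub>G (leaves T)\<^esub>, T)"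
    using expand_to_one[of Leaf T] vT tree_le_Leaf by simp
  then have "((Leaf, \<one>\<^bsub>G 1\<^esub>, Leaf), (T, \<one>\<^bsub>G (leaves T)\<^esub>, T)) \<in> sim"
    using sim_expand_to[OF v vT] tree_le_Leaf by simp
  then show ?thesis using TG_one cls_eq_iff by simp
qed

lemma triple_mult_assoc:
  assumes "valid a" "valid b" "valid c" "rtree a = ltree b" "rtree b = ltree c"
  shows "triple_mult (triple_mult a b) c = triple_mult a (triple_mult b c)"
proof -
  obtain A g B where a: "a = (A, g, B)" by (cases a)
  obtain B' h C where b: "b = (B', h, C)" by (cases b)
  obtain C' k D where c: "c = (C', k, D)" by (cases c)
  have n: "1 \<le> leaves A" "leaves B' = leaves A" "leaves C' = leaves A"
    using validD assms a b c by auto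
  interpret group "G (leaves A)" using group_G n by simp
  have "g \<in> carrier (G (leaves A))" "h \<in> carrier (G (leaves A))" "k \<in> carrier (G (leaves A))"
    using validD[OF assms(1)] validD[OF assms(2)] validD[OF assms(3)] a b c n by auto
  then show ?thesis using a b c n by (simp add: triple_mult_simp m_assoc)
qed

lemma triple_mult_one_left:
  "valid t \<Longrightarrow> triple_mult (ltree t, \<one>\<^bsub>G (leaves (ltree t))\<^esub>, ltree t) t = t"
proof -
  assume t: "valid t"
  obtain T g U where tt: "t = (T, g, U)" by (cases t)
  interpret group "G (leaves T)" using group_G validD[OF t] tt by simp
  show ?thesis using validD[OF t] tt by (simp add: triple_mult_simp)
qed

lemma triple_mult_inv_left:
  "valid t \<Longrightarrow> triple_mult (triple_inv t) t = (rtree t, \<one>\<^bsub>G (leaves (rtree t))\<^esub>, rtree t)"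
proof -
  assume t: "valid t"
  obtain T g U where tt: "t = (T, g, U)" by (cases t)
  interpret group "G (leaves T)" using group_G validD[OF t] tt by simp
  show ?thesis using validD[OF t] tt by (simp add: triple_mult_simp triple_inv_simp)
qed

lemma sim_aligned3:
  assumes "valid a" "valid b" "valid c"
  obtains a' b' c' where "valid a'" "valid b'" "valid c'"
    "(a, a') \<in> sim" "(b, b') \<in> sim" "(c, c') \<in> sim" "rtree a' = ltree b'" "rtree b' = ltree c'"
proof -
  obtain a1 b1 where ab: "valid a1" "valid b1" "(a, a1) \<in> sim" "(b, b1) \<in> sim" "rtree a1 = ltree b1"
    using sim_aligned assms(1,2) by blast
  let ?C = "tree_join (rtree b1) (ltree c)"
  have v1: "dvalid d (rtree b1)" "dvalid d (ltree c)" using validD ab(2) assms(3) by auto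
  have C: "dvalid d ?C" "tree_le (rtree b1) ?C" "tree_le (ltree c) ?C"
    using dvalid_tree_join[OF v1] tree_le_join1[OF v1] tree_le_join2[OF v1] by auto
  define b2 where "b2 = expand_to b1 ?C"
  have b2: "valid b2" "rtree b2 = ?C" "(b1, b2) \<in> sim" "tree_le (ltree b1) (ltree b2)"
    using expand_to_props[OF ab(2) C(1,2)] sim_expand_to[OF ab(2) C(1,2)] unfolding b2_def by auto
  define c2 where "c2 = expand_left_to c ?C"
  have c2: "valid c2" "ltree c2 = ?C" "(c, c2) \<in> sim"
    using expand_left_to_props[OF assms(3) C(1,3)] unfolding c2_def by auto
  have "dvalid d (ltree b2)" using validD b2 by blast
  define a2 where "a2 = expand_to a1 (ltree b2)"
  have a2: "valid a2" "rtree a2 = ltree b2" "(a1, a2) \<in> sim"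
    using expand_to_props[OF ab(1) \<open>dvalid d (ltree b2)\<close>] sim_expand_to[OF ab(1) \<open>dvalid d (ltree b2)\<close>]
      ab(5) b2(4) unfolding a2_def by auto
  show thesis
    by (rule that[OF a2(1) b2(1) c2(1)]) (use ab a2 b2 c2 sim_trans in auto)
qed

lemma TG_mult_closed: "x \<in> carrier TGd \<Longrightarrow> y \<in> carrier TGd \<Longrightarrow> x \<otimes>\<^bsub>TGd\<^esub> y \<in> carrier TGd"
proof -
  assume "x \<in> carrier TGd" "y \<in> carrier TGd"
  then obtain t s where ts: "valid t" "valid s" "x = cls t" "y = cls s" using TG_carrier by auto
  then obtain t' s' where al: "valid t'" "valid s'" "(t, t') \<in> sim" "(s, s') \<in> sim" "rtree t' = ltree s'"
    using sim_aligned by blast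
  then have "x = cls t'" "y = cls s'" using ts cls_eq_iff by auto
  then have "x \<otimes>\<^bsub>TGd\<^esub> y = cls (triple_mult t' s')" using al mult_cls by simp
  then show ?thesis using cls_carrier valid_triple_mult al by simp
qed

lemma cls_inv_mult: "valid t \<Longrightarrow> cls (triple_inv t) \<otimes>\<^bsub>TGd\<^esub> cls t = \<one>\<^bsub>TGd\<^esub>"
proof -
  assume t: "valid t"
  have "cls (triple_inv t) \<otimes>\<^bsub>TGd\<^esub> cls t = cls (rtree t, \<one>\<^bsub>G (leaves (rtree t))\<^esub>, rtree t)"
    using mult_cls valid_triple_inv t triple_mult_inv_left by simp
  then show ?thesis using one_cls[of "rtree t"] validD[OF t] by simp
qed

lemma TG_group: "group TGd"
proof (rule groupI)
  show "\<one>\<^bsub>TGd\<^esub> \<in> carrier TGd" using TG_one cls_carrier valid_one[of Leaf Leaf] by simp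
next
  fix x y z assume "x \<in> carrier TGd" "y \<in> carrier TGd" "z \<in> carrier TGd"
  then obtain a b c where abc: "valid a" "valid b" "valid c" "x = cls a" "y = cls b" "z = cls c"
    using TG_carrier by auto
  obtain a' b' c' where al: "valid a'" "valid b'" "valid c'" "(a, a') \<in> sim" "(b, b') \<in> sim" "(c, c') \<in> sim"
    "rtree a' = ltree b'" "rtree b' = ltree c'"
    using sim_aligned3[OF abc(1-3)] .
  then have xyz: "x = cls a'" "y = cls b'" "z = cls c'" using abc cls_eq_iff by auto
  have "x \<otimes>\<^bsub>TGd\<^esub> y \<otimes>\<^bsub>TGd\<^esub> z = cls (triple_mult (triple_mult a' b') c')"
    using xyz al mult_cls valid_triple_mult by simp
  also have "\<dots> = cls (triple_mult a' (triple_mult b' c'))"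
    using triple_mult_assoc al by simp
  also have "\<dots> = x \<otimes>\<^bsub>TGd\<^esub> (y \<otimes>\<^bsub>TGd\<^esub> z)"
    using xyz al mult_cls valid_triple_mult by simp
  finally show "x \<otimes>\<^bsub>TGd\<^esub> y \<otimes>\<^bsub>TGd\<^esub> z = x \<otimes>\<^bsub>TGd\<^esub> (y \<otimes>\<^bsub>TGd\<^esub> z)" .
next
  fix x assume "x \<in> carrier TGd"
  then obtain t where t: "valid t" "x = cls t" using TG_carrier by auto
  have "\<one>\<^bsub>TGd\<^esub> = cls (ltree t, \<one>\<^bsub>G (leaves (ltree t))\<^esub>, ltree t)" using one_cls validD[OF t(1)] by blast
  moreover have "valid (ltree t, \<one>\<^bsub>G (leaves (ltree t))\<^esub>, ltree t)" using valid_one validD[OF t(1)] by blast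
  ultimately show "\<one>\<^bsub>TGd\<^esub> \<otimes>\<^bsub>TGd\<^esub> x = x" using mult_cls t triple_mult_one_left by simp
  show "\<exists>y\<in>carrier TGd. y \<otimes>\<^bsub>TGd\<^esub> x = \<one>\<^bsub>TGd\<^esub>"
    using cls_inv_mult cls_carrier valid_triple_inv t by blast
qed (rule TG_mult_closed)

lemma inv_cls: "valid t \<Longrightarrow> inv\<^bsub>TGd\<^esub> (cls t) = cls (triple_inv t)"
  using group.inv_equality[OF TG_group] cls_inv_mult cls_carrier valid_triple_inv by blast

section \<open>Leaf correspondences\<close>

text \<open>sends t a b: the leaf of rtree t with address a is carried by \<rho> (elem t) to the leaf of ltree t
  with address b.\<close>

definition sends :: "dtree \<times> 'g \<times> dtree \<Rightarrow> nat list \<Rightarrow> nat list \<Rightarrow> bool" where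
  "sends t a b \<longleftrightarrow> valid t \<and> (\<exists>k. 1 \<le> k \<and> k \<le> leaves (rtree t) \<and> leaf_addrs (rtree t) ! (k-1) = a \<and>
      leaf_addrs (ltree t) ! (\<rho> (leaves (ltree t)) (elem t) k - 1) = b)"

lemma sends_mem: "sends t a b \<Longrightarrow> a \<in> set (leaf_addrs (rtree t)) \<and> b \<in> set (leaf_addrs (ltree t))"
proof -
  assume m: "sends t a b"
  then obtain k where k: "valid t" "1 \<le> k" "k \<le> leaves (rtree t)" "leaf_addrs (rtree t) ! (k-1) = a"
    "leaf_addrs (ltree t) ! (\<rho> (leaves (ltree t)) (elem t) k - 1) = b" unfolding sends_def by blast
  have n: "1 \<le> leaves (ltree t)" "leaves (rtree t) = leaves (ltree t)" "elem t \<in> carrier (G (leaves (ltree t)))" using validD k(1) by auto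
  have r: "1 \<le> \<rho> (leaves (ltree t)) (elem t) k \<and> \<rho> (leaves (ltree t)) (elem t) k \<le> leaves (ltree t)"
    using rho_range[OF n(1) n(3)] k n by simp
  have "k - 1 < length (leaf_addrs (rtree t))" using k by (simp add: length_leaf_addrs)
  moreover have "\<rho> (leaves (ltree t)) (elem t) k - 1 < leaves (ltree t)" using r by linarith
  then have "\<rho> (leaves (ltree t)) (elem t) k - 1 < length (leaf_addrs (ltree t))" by (simp add: length_leaf_addrs)
  ultimately show ?thesis using k by (metis nth_mem)
qed

lemma sends_functional: "sends t a b \<Longrightarrow> sends t a b' \<Longrightarrow> b = b'"
proof -
  assume m1: "sends t a b" and m2: "sends t a b'"
  obtain k where k: "valid t" "1 \<le> k" "k \<le> leaves (rtree t)" "leaf_addrs (rtree t) ! (k-1) = a"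
    "leaf_addrs (ltree t) ! (\<rho> (leaves (ltree t)) (elem t) k - 1) = b" using m1 unfolding sends_def by blast
  obtain k' where k': "1 \<le> k'" "k' \<le> leaves (rtree t)" "leaf_addrs (rtree t) ! (k'-1) = a"
    "leaf_addrs (ltree t) ! (\<rho> (leaves (ltree t)) (elem t) k' - 1) = b'" using m2 unfolding sends_def by blast
  have "k = k'" using nth_leaf_addrs_inj k k' by metis
  then show ?thesis using k k' by simp
qed

lemma sends_injective: "sends t a b \<Longrightarrow> sends t a' b \<Longrightarrow> a = a'"
proof -
  assume m1: "sends t a b" and m2: "sends t a' b"
  obtain k where k: "valid t" "1 \<le> k" "k \<le> leaves (rtree t)" "leaf_addrs (rtree t) ! (k-1) = a"
    "leaf_addrs (ltree t) ! (\<rho> (leaves (ltree t)) (elem t) k - 1) = b" using m1 unfolding sends_def by blast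
  obtain k' where k': "1 \<le> k'" "k' \<le> leaves (rtree t)" "leaf_addrs (rtree t) ! (k'-1) = a'"
    "leaf_addrs (ltree t) ! (\<rho> (leaves (ltree t)) (elem t) k' - 1) = b" using m2 unfolding sends_def by blast
  have n: "1 \<le> leaves (ltree t)" "leaves (rtree t) = leaves (ltree t)" "elem t \<in> carrier (G (leaves (ltree t)))"
    using validD k(1) by auto
  let ?s = "\<rho> (leaves (ltree t)) (elem t)"
  have "1 \<le> ?s k" "?s k \<le> leaves (ltree t)" "1 \<le> ?s k'" "?s k' \<le> leaves (ltree t)"
    using rho_range[OF n(1) n(3)] k k' n by auto
  then have "?s k = ?s k'" using nth_leaf_addrs_inj k(5) k'(4) by metis
  then have "k = k'" using rho_inj[OF n(1) n(3)] by blast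
  then show ?thesis using k k' by simp
qed

lemma sends_expand:
  assumes m: "sends t a b" and k: "1 \<le> k" "k \<le> leaves (rtree t)" "leaf_addrs (rtree t) ! (k-1) \<noteq> a"
  shows "sends (expand t k) a b"
proof -
  obtain T g U where t: "t = (T,g,U)" by (cases t)
  obtain j where j: "valid t" "1 \<le> j" "j \<le> leaves U" "leaf_addrs U ! (j-1) = a"
    "leaf_addrs T ! (\<rho> (leaves T) g j - 1) = b" using m t unfolding sends_def by auto
  let ?n = "leaves T" and ?s = "\<rho> (leaves T) g"
  have v: "dvalid d T" "dvalid d U" "leaves T = leaves U" "g \<in> carrier (G ?n)" "1 \<le> ?n"
    using validD[OF j(1)] t by auto
  have kn: "1 \<le> k" "k \<le> ?n" using k t v by auto
  have jn: "1 \<le> j" "j \<le> ?n" using j v by auto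
  have jk: "j \<noteq> k" using j k t by auto
  have sk: "1 \<le> ?s k \<and> ?s k \<le> ?n" "1 \<le> ?s j \<and> ?s j \<le> ?n" using rho_range[OF v(5) v(4)] kn jn by auto
  have sjk: "?s j \<noteq> ?s k" using rho_inj[OF v(5) v(4)] jk by blast
  have ve: "valid (expand t k)" and lex: "leaves (ltree (expand t k)) = ?n + d - 1" using valid_expand[OF j(1) k(1,2)] t by auto
  let ?j' = "blk_start d k j"
  have j'r: "1 \<le> ?j' \<and> ?j' \<le> ?n + d - 1" using blk_start_range[of j ?n k] jn by simp
  have rt': "rtree (expand t k) = grow d k U" and lt': "ltree (expand t k) = grow d (?s k) T" and mid': "elem (expand t k) = \<kappa> ?n k g"
    using t by (simp_all add: expand_simp)
  have lr: "leaves (grow d k U) = ?n + d - 1" using grow_leaves[OF v(2)] kn v by simp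
  have a1: "leaf_addrs (grow d k U) ! (?j' - 1) = a" using leaf_addr_grow_shift[OF v(2), of k j] kn jn v jk j(4) by simp
  have r1: "\<rho> (?n + d - 1) (\<kappa> ?n k g) ?j' = blk_start d (?s k) (?s j)" using rho_kappa_blk_start[OF v(5) kn v(4) jn jk] .
  have a2: "leaf_addrs (grow d (?s k) T) ! (blk_start d (?s k) (?s j) - 1) = b"
    using leaf_addr_grow_shift[OF v(1), of "?s k" "?s j"] sk sjk j(5) by simp
  show ?thesis unfolding sends_def
    using ve rt' lt' mid' lex lr j'r a1 r1 a2 by (intro conjI exI[of _ ?j']) simp_all
qed

lemma sends_expand_to: "sends t a b \<Longrightarrow> dvalid d W \<Longrightarrow> tree_le (rtree t) W \<Longrightarrow> a \<in> set (leaf_addrs W) \<Longrightarrow>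
    sends (expand_to t W) a b"
proof (induction t W rule: expand_to.induct)
  case (1 t W)
  have vt_t: "valid t" using 1(2) unfolding sends_def by blast
  show ?case
  proof (cases "rtree t = W")
    case True
    then show ?thesis using 1(2) expand_to_rtree[of t W] by simp
  next
    case False
    let ?k = "first_internal (rtree t) W"
    have f: "1 \<le> ?k" "?k \<le> leaves (rtree t)" "leaf_addrs (rtree t) ! (?k - 1) \<notin> set (leaf_addrs W)"
      using first_internal[of "rtree t" W] 1 False validD vt_t by auto
    have et: "expand_to t W = expand_to (expand t ?k) W" using expand_to_step vt_t 1 False by blast
    have "tree_le (grow d ?k (rtree t)) W" using tree_le_grow_internal f 1 validD vt_t by blast
    then have le2: "tree_le (rtree (expand t ?k)) W" by (simp add: expand_def)
    have ne: "leaf_addrs (rtree t) ! (?k - 1) \<noteq> a" using f(3) 1(5) by blast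
    have me: "sends (expand t ?k) a b" using sends_expand[OF 1(2) f(1,2) ne] .
    have c: "valid t \<and> dvalid d W \<and> tree_le (rtree t) W \<and> rtree t \<noteq> W" using vt_t 1 False by blast
    show ?thesis using 1(1)[OF c me 1(3) le2 1(5)] et by simp
  qed
qed

lemma sends_triple_inv: "sends t a b \<Longrightarrow> sends (triple_inv t) b a"
proof -
  assume m: "sends t a b"
  obtain T g U where t: "t = (T,g,U)" by (cases t)
  obtain j where j: "valid t" "1 \<le> j" "j \<le> leaves U" "leaf_addrs U ! (j-1) = a"
    "leaf_addrs T ! (\<rho> (leaves T) g j - 1) = b" using m t unfolding sends_def by auto
  let ?n = "leaves T" and ?s = "\<rho> (leaves T) g"
  have v: "dvalid d T" "dvalid d U" "leaves T = leaves U" "g \<in> carrier (G ?n)" "1 \<le> ?n"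
    using validD[OF j(1)] t by auto
  have sj: "1 \<le> ?s j \<and> ?s j \<le> ?n" using rho_range[OF v(5) v(4)] j v by auto
  have inv: "\<rho> (leaves T) (inv\<^bsub>G (leaves T)\<^esub> g) (?s j) = j" using rho_inv[OF v(5) v(4)] .
  have vi: "valid (triple_inv t)" using valid_triple_inv j(1) by blast
  have ti: "triple_inv t = (U, inv\<^bsub>G (leaves T)\<^esub> g, T)" using t by (simp add: triple_inv_simp)
  have "leaves U = leaves T" using v by simp
  then show ?thesis unfolding sends_def using vi ti sj inv j
    by (intro conjI exI[of _ "?s j"]) simp_all
qed

definition leaf_rel :: "(dtree \<times> 'g \<times> dtree) set \<Rightarrow> (nat list \<times> nat list) set" where
  "leaf_rel X = {(a,b). \<exists>t. sends t a b \<and> cls t = X}"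

lemma sends_common_representative:
  assumes "sends t1 a b" "sends t2 a b'" "cls t1 = cls t2"
  shows "\<exists>e. sends e a b \<and> sends e a b'"
proof -
  have v: "valid t1" "valid t2" using assms unfolding sends_def by auto
  have a: "a \<in> set (leaf_addrs (rtree t1))" "a \<in> set (leaf_addrs (rtree t2))" using sends_mem assms by auto
  have vv: "dvalid d (rtree t1)" "dvalid d (rtree t2)" using validD v by auto
  let ?W = "tree_join (rtree t1) (rtree t2)"
  have W: "dvalid d ?W" "tree_le (rtree t1) ?W" "tree_le (rtree t2) ?W" "a \<in> set (leaf_addrs ?W)"
    using dvalid_tree_join[OF vv] tree_le_join1[OF vv] tree_le_join2[OF vv] leaf_addrs_tree_join[OF vv a] by auto
  have e1: "valid (expand_to t1 ?W)" "rtree (expand_to t1 ?W) = ?W" "(t1, expand_to t1 ?W) \<in> sim"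
    using expand_to_props[OF v(1) W(1,2)] sim_expand_to[OF v(1) W(1,2)] by auto
  have e2: "valid (expand_to t2 ?W)" "rtree (expand_to t2 ?W) = ?W" "(t2, expand_to t2 ?W) \<in> sim"
    using expand_to_props[OF v(2) W(1,3)] sim_expand_to[OF v(2) W(1,3)] by auto
  have "(t1, t2) \<in> sim" using assms(3) cls_eq_iff by blast
  then have "(expand_to t1 ?W, expand_to t2 ?W) \<in> sim" using e1(3) e2(3) sim_sym sim_trans by blast
  then have eq: "expand_to t1 ?W = expand_to t2 ?W" using sim_rtree_unique[OF e1(1) e2(1)] e1(2) e2(2) by simp
  have "sends (expand_to t1 ?W) a b" using sends_expand_to[OF assms(1) W(1,2,4)] .
  moreover have "sends (expand_to t2 ?W) a b'" using sends_expand_to[OF assms(2) W(1,3,4)] .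
  ultimately have "sends (expand_to t1 ?W) a b \<and> sends (expand_to t1 ?W) a b'" using eq by simp
  then show ?thesis by blast
qed

lemma leaf_rel_functional: "(a,b) \<in> leaf_rel X \<Longrightarrow> (a,b') \<in> leaf_rel X \<Longrightarrow> b = b'"
proof -
  assume "(a,b) \<in> leaf_rel X" "(a,b') \<in> leaf_rel X"
  then obtain t1 t2 where "sends t1 a b" "sends t2 a b'" "cls t1 = X" "cls t2 = X" unfolding leaf_rel_def by auto
  then obtain e where "sends e a b" "sends e a b'" using sends_common_representative by metis
  then show ?thesis using sends_functional by blast
qed

lemma leaf_rel_injective: "(a,b) \<in> leaf_rel X \<Longrightarrow> (a',b) \<in> leaf_rel X \<Longrightarrow> a = a'"
proof -
  assume "(a,b) \<in> leaf_rel X" "(a',b) \<in> leaf_rel X"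
  then obtain t1 t2 where m: "sends t1 a b" "sends t2 a' b" "cls t1 = X" "cls t2 = X" unfolding leaf_rel_def by auto
  have v: "valid t1" "valid t2" using m unfolding sends_def by auto
  have "sends (triple_inv t1) b a" "sends (triple_inv t2) b a'" using sends_triple_inv m by auto
  moreover have "cls (triple_inv t1) = cls (triple_inv t2)"
  proof -
    have "(t1,t2) \<in> sim" using m(3,4) cls_eq_iff[of t1 t2] by simp
    then show ?thesis using triple_inv_sim cls_eq_iff by blast
  qed
  ultimately obtain e where "sends e b a" "sends e b a'" using sends_common_representative by metis
  then show ?thesis using sends_functional by blast
qed

lemma sends_triple_mult:
  assumes "valid t" "valid s" "rtree t = ltree s" "sends s c a" "sends t a b"
  shows "sends (triple_mult t s) c b"
proof -
  obtain T g U where t: "t = (T,g,U)" by (cases t)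
  obtain U' h W where s: "s = (U',h,W)" by (cases s)
  let ?n = "leaves T"
  have v: "dvalid d T" "dvalid d U" "leaves T = leaves U" "g \<in> carrier (G ?n)" "1 \<le> ?n"
    using validD[OF assms(1)] t by auto
  have UU: "U' = U" using assms(3) t s by simp
  have v': "dvalid d W" "leaves U = leaves W" "h \<in> carrier (G ?n)"
    using validD[OF assms(2)] s UU v by auto
  obtain k where k: "1 \<le> k" "k \<le> leaves W" "leaf_addrs W ! (k-1) = c" "leaf_addrs U ! (\<rho> ?n h k - 1) = a"
    using assms(4) s UU v unfolding sends_def by auto
  obtain j where j: "1 \<le> j" "j \<le> leaves U" "leaf_addrs U ! (j-1) = a" "leaf_addrs T ! (\<rho> ?n g j - 1) = b"
    using assms(5) t unfolding sends_def by auto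
  have hk: "1 \<le> \<rho> ?n h k \<and> \<rho> ?n h k \<le> ?n" using rho_range[OF v(5) v'(3)] k v v' by simp
  have hkj: "\<rho> ?n h k = j" using nth_leaf_addrs_inj[of "\<rho> ?n h k" U j] hk j k(4) v(3) by simp
  have r: "\<rho> ?n (g \<otimes>\<^bsub>G ?n\<^esub> h) k = \<rho> ?n g j" using rho_mult[OF v(5) v(4) v'(3)] hkj by simp
  have vp: "valid (triple_mult t s)" using valid_triple_mult assms by blast
  have tp: "triple_mult t s = (T, g \<otimes>\<^bsub>G ?n\<^esub> h, W)" using t s by (simp add: triple_mult_simp)
  show ?thesis unfolding sends_def using vp tp k j r v v'
    by (intro conjI exI[of _ k]) simp_all
qed

lemma leaf_rel_mult:
  assumes "(c,a) \<in> leaf_rel Y" "(a,b) \<in> leaf_rel X"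
  shows "(c,b) \<in> leaf_rel (X \<otimes>\<^bsub>TGd\<^esub> Y)"
proof -
  obtain tY where tY: "sends tY c a" "cls tY = Y" using assms(1) unfolding leaf_rel_def by auto
  obtain tX where tX: "sends tX a b" "cls tX = X" using assms(2) unfolding leaf_rel_def by auto
  have v: "valid tY" "valid tX" using tY tX unfolding sends_def by auto
  have a: "a \<in> set (leaf_addrs (ltree tY))" "a \<in> set (leaf_addrs (rtree tX))" using sends_mem tY tX by auto
  have vv: "dvalid d (ltree tY)" "dvalid d (rtree tX)" using validD v by auto
  let ?M = "tree_join (ltree tY) (rtree tX)"
  have M: "dvalid d ?M" "tree_le (ltree tY) ?M" "tree_le (rtree tX) ?M" "a \<in> set (leaf_addrs ?M)"
    using dvalid_tree_join[OF vv] tree_le_join1[OF vv] tree_le_join2[OF vv] leaf_addrs_tree_join[OF vv a] by auto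
  define tX' where "tX' = expand_to tX ?M"
  have X': "valid tX'" "rtree tX' = ?M" "(tX, tX') \<in> sim" "sends tX' a b"
    using expand_to_props[OF v(2) M(1,3)] sim_expand_to[OF v(2) M(1,3)] sends_expand_to[OF tX(1) M(1,3,4)] unfolding tX'_def by auto
  have vi: "valid (triple_inv tY)" using valid_triple_inv v by blast
  have ri: "rtree (triple_inv tY) = ltree tY" by (simp add: triple_inv_def)
  have mi: "sends (triple_inv tY) a c" using sends_triple_inv tY by blast
  define e where "e = expand_to (triple_inv tY) ?M"
  have e: "valid e" "rtree e = ?M" "(triple_inv tY, e) \<in> sim" "sends e a c"
    using expand_to_props[OF vi M(1)] sim_expand_to[OF vi M(1)] sends_expand_to[OF mi M(1)] M(2,4) ri unfolding e_def by auto
  define tY' where "tY' = triple_inv e"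
  have Y'1: "valid tY'" unfolding tY'_def using valid_triple_inv[OF e(1)] .
  have Y'2: "ltree tY' = ?M" unfolding tY'_def using e(2) by (simp add: triple_inv_def)
  have Y'3: "sends tY' c a" unfolding tY'_def using sends_triple_inv[OF e(4)] .
  note Y' = Y'1 Y'2 Y'3
  have "(triple_inv (triple_inv tY), tY') \<in> sim" using triple_inv_sim[OF e(3)] unfolding tY'_def .
  then have "(tY, tY') \<in> sim" using triple_inv_triple_inv v by simp
  then have cY: "cls tY' = Y" using tY cls_eq_iff by (metis)
  have cX: "cls tX' = X" using tX X' cls_eq_iff by metis
  have r: "rtree tX' = ltree tY'" using X' Y' by simp
  have "cls (triple_mult tX' tY') = X \<otimes>\<^bsub>TGd\<^esub> Y" using mult_cls[OF X'(1) Y'(1) r] cX cY by simp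
  moreover have "sends (triple_mult tX' tY') c b" using sends_triple_mult[OF X'(1) Y'(1) r Y'(3) X'(4)] .
  ultimately show ?thesis unfolding leaf_rel_def by blast
qed

lemma sends_children:
  assumes "sends t a b"
  shows "\<exists>k. 1 \<le> k \<and> k \<le> leaves (rtree t) \<and>
    (\<forall>i<d. \<exists>i'<d. sends (expand t k) (a @ [i]) (b @ [i'])) \<and> (\<forall>i'<d. \<exists>i<d. sends (expand t k) (a @ [i]) (b @ [i']))"
proof -
  obtain T g U where t: "t = (T,g,U)" by (cases t)
  obtain k where k: "valid t" "1 \<le> k" "k \<le> leaves U" "leaf_addrs U ! (k-1) = a"
    "leaf_addrs T ! (\<rho> (leaves T) g k - 1) = b" using assms t unfolding sends_def by auto
  let ?n = "leaves T" and ?s = "\<rho> (leaves T) g"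
  have v: "dvalid d T" "dvalid d U" "leaves T = leaves U" "g \<in> carrier (G ?n)" "1 \<le> ?n"
    using validD[OF k(1)] t by auto
  have kn: "1 \<le> k" "k \<le> ?n" using k v by auto
  have sk: "1 \<le> ?s k \<and> ?s k \<le> ?n" using rho_range[OF v(5) v(4)] kn by auto
  have ve: "valid (expand t k)" and lex: "leaves (ltree (expand t k)) = ?n + d - 1" using valid_expand[OF k(1)] kn t v by auto
  have rt': "rtree (expand t k) = grow d k U" and lt': "ltree (expand t k) = grow d (?s k) T" and mid': "elem (expand t k) = \<kappa> ?n k g"
    using t by (simp_all add: expand_simp)
  have lr: "leaves (grow d k U) = ?n + d - 1" using grow_leaves[OF v(2)] kn v by simp
  have M: "sends (expand t k) (a @ [i]) (b @ [i'])" if ii: "i < d" "i' < d" "\<rho> (?n + d - 1) (\<kappa> ?n k g) (k + i) = ?s k + i'" for i i'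
  proof -
    have a1: "leaf_addrs (grow d k U) ! (k + i - 1) = a @ [i]"
      using leaf_addr_grow_block[OF v(2), of k i] kn v ii k(4) by simp
    have a2: "leaf_addrs (grow d (?s k) T) ! (?s k + i' - 1) = b @ [i']"
      using leaf_addr_grow_block[OF v(1), of "?s k" i'] sk ii k(5) by simp
    have r: "1 \<le> k + i \<and> k + i \<le> ?n + d - 1" using kn ii by simp
    show ?thesis unfolding sends_def using ve rt' lt' mid' lex lr r a1 a2 ii(3)
      by (intro conjI exI[of _ "k+i"]) simp_all
  qed
  have "\<forall>i<d. \<exists>i'<d. sends (expand t k) (a @ [i]) (b @ [i'])"
    using rho_kappa_block[OF v(5) kn v(4)] M by metis
  moreover have "\<forall>i'<d. \<exists>i<d. sends (expand t k) (a @ [i]) (b @ [i'])"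
    using rho_kappa_block_surj[OF v(5) kn v(4)] M by metis
  moreover have "k \<le> leaves (rtree t)" using k t by simp
  ultimately show ?thesis using kn by blast
qed

lemma sends_one:
  assumes "dvalid d P" "dvalid d Q" "leaves P = leaves Q" "1 \<le> j" "j \<le> leaves Q"
  shows "sends (P, \<one>\<^bsub>G (leaves P)\<^esub>, Q) (leaf_addrs Q ! (j-1)) (leaf_addrs P ! (j-1))"
proof -
  have n: "1 \<le> leaves P" using assms by simp
  interpret group "G (leaves P)" using group_G n by simp
  have "\<one>\<^bsub>G (leaves P)\<^esub> \<in> carrier (G (leaves P))" by (rule one_closed)
  then have "valid (P, \<one>\<^bsub>G (leaves P)\<^esub>, Q)" unfolding valid_simp using assms(1-3) by blast
  then show ?thesis unfolding sends_def using rho_one[OF n] assms by (intro conjI exI[of _ j]) simp_all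
qed

lemma sends_exists: "valid t \<Longrightarrow> w \<in> set (leaf_addrs (rtree t)) \<Longrightarrow> \<exists>b. sends t w b"
proof -
  assume v: "valid t" and w: "w \<in> set (leaf_addrs (rtree t))"
  then obtain i where i: "i < length (leaf_addrs (rtree t))" "leaf_addrs (rtree t) ! i = w" by (auto simp: in_set_conv_nth)
  have "1 \<le> Suc i" "Suc i \<le> leaves (rtree t)" using i by (simp_all add: length_leaf_addrs)
  then have "sends t w (leaf_addrs (ltree t) ! (\<rho> (leaves (ltree t)) (elem t) (Suc i) - 1))"
    unfolding sends_def using v i by (intro conjI exI[of _ "Suc i"]) simp_all
  then show ?thesis by blast
qed

lemma sends_distinct_pair: "valid t \<Longrightarrow> ltree t \<noteq> rtree t \<Longrightarrow> \<exists>a b. sends t a b \<and> a \<noteq> b"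
proof (rule ccontr)
  assume v: "valid t" and ne: "ltree t \<noteq> rtree t" and nc: "\<not> (\<exists>a b. sends t a b \<and> a \<noteq> b)"
  have sub: "set (leaf_addrs (rtree t)) \<subseteq> set (leaf_addrs (ltree t))"
  proof
    fix w assume w: "w \<in> set (leaf_addrs (rtree t))"
    then obtain b where m: "sends t w b" using sends_exists v by blast
    then have "w = b" using nc by blast
    then show "w \<in> set (leaf_addrs (ltree t))" using sends_mem m by blast
  qed
  have "card (set (leaf_addrs (rtree t))) = card (set (leaf_addrs (ltree t)))"
    using distinct_card[OF distinct_leaf_addrs] length_leaf_addrs validD[OF v] by metis
  then have "set (leaf_addrs (rtree t)) = set (leaf_addrs (ltree t))" using card_subset_eq[OF _ sub] by simp
  then have "rtree t = ltree t" using set_leaf_addrs_inj validD[OF v] by blast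
  then show False using ne by simp
qed

lemma sends_incomparable_of_prefix:
  assumes m: "sends t a b" and ab: "a = b @ (x # c)"
  shows "\<exists>a' b'. sends t a' b' \<and> incomparable a' b'"
proof -
  have v: "valid t" using m unfolding sends_def by blast
  have mem: "a \<in> set (leaf_addrs (rtree t))" "b \<in> set (leaf_addrs (ltree t))" using sends_mem m by auto
  define y where "y = (if x = 0 then 1 else (0::nat))"
  have y: "y < d" "y \<noteq> x" using arity_ge_2 unfolding y_def by auto
  have "\<forall>z\<in>set b. z < d" using leaf_addrs_digits validD[OF v] mem(2) by blast
  then obtain e where w: "b @ y # e \<in> set (leaf_addrs (rtree t))"
    using leaf_below_sibling[OF arity_pos _ _ _ y(1)] validD[OF v] mem(1) ab by blast
  obtain b' where m': "sends t (b @ y # e) b'" using sends_exists v w by blast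
  have "b' \<noteq> b" using sends_injective[OF m'] m ab y by auto
  moreover have "b' \<in> set (leaf_addrs (ltree t))" using sends_mem m' by blast
  ultimately have "incomparable b b'" using leaf_addrs_incomparable mem(2) by metis
  then have "incomparable (b @ y # e) b'" using incomparable_append[of b b' "y # e" "[]"] by simp
  then show ?thesis using m' by blast
qed

lemma sends_incomparable_pair:
  assumes m: "sends t a b" and ab: "a \<noteq> b"
  shows "\<exists>a' b'. sends t a' b' \<and> incomparable a' b'"
proof (cases "incomparable a b")
  case True then show ?thesis using m by blast
next
  case False
  then consider c where "a = b @ c" | c where "b = a @ c" unfolding incomparable_def by blast
  then show ?thesis
  proof cases
    case 1
    then obtain x c' where "a = b @ (x # c')" using ab by (cases c) auto
    then show ?thesis using sends_incomparable_of_prefix m by blast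
  next
    case 2
    then obtain x c' where bc: "b = a @ (x # c')" using ab by (cases c) auto
    have v: "valid t" using m unfolding sends_def by blast
    have "sends (triple_inv t) b a" using sends_triple_inv m by blast
    then obtain a' b' where "sends (triple_inv t) a' b'" "incomparable a' b'" using sends_incomparable_of_prefix bc by blast
    then have "sends (triple_inv (triple_inv t)) b' a'" "incomparable b' a'" using sends_triple_inv incomparable_sym by auto
    then show ?thesis using triple_inv_triple_inv v by auto
  qed
qed

lemma cls_expand: "valid t \<Longrightarrow> 1 \<le> k \<Longrightarrow> k \<le> leaves (rtree t) \<Longrightarrow> cls (expand t k) = cls t"
  using expand_in_rel expansion_sim cls_eq_iff sim_sym by metis

lemma sends_incomparable_pair_zero:
  assumes m: "sends t a b" and ab: "incomparable a b"
  shows "\<exists>t2 a2 b2. sends t2 a2 b2 \<and> cls t2 = cls t \<and> incomparable a2 b2 \<and> 0 \<in> set a2 \<and> 0 \<in> set b2"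
proof -
  have v: "valid t" using m unfolding sends_def by blast
  obtain k where k: "1 \<le> k" "k \<le> leaves (rtree t)" "\<forall>i<d. \<exists>i'<d. sends (expand t k) (a @ [i]) (b @ [i'])"
    using sends_children[OF m] by blast
  obtain i' where i': "sends (expand t k) (a @ [0]) (b @ [i'])" using k(3) arity_ge_2 by fastforce
  let ?t1 = "expand t k"
  have c1: "cls ?t1 = cls t" using cls_expand v k by blast
  have v1: "valid ?t1" using i' unfolding sends_def by blast
  obtain k' where k': "1 \<le> k'" "k' \<le> leaves (rtree ?t1)" "\<forall>j'<d. \<exists>j<d. sends (expand ?t1 k') ((a @ [0]) @ [j]) ((b @ [i']) @ [j'])"
    using sends_children[OF i'] by blast
  obtain j where j: "sends (expand ?t1 k') ((a @ [0]) @ [j]) ((b @ [i']) @ [0])" using k'(3) arity_ge_2 by fastforce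
  have c2: "cls (expand ?t1 k') = cls t" using cls_expand v1 k' c1 by simp
  have "incomparable (a @ ([0] @ [j])) (b @ ([i'] @ [0]))" using incomparable_append ab by blast
  then have "incomparable ((a @ [0]) @ [j]) ((b @ [i']) @ [0])" by simp
  moreover have "0 \<in> set ((a @ [0]) @ [j])" "0 \<in> set ((b @ [i']) @ [0])" by simp_all
  ultimately show ?thesis using j c2 by blast
qed

lemma Fd_copy_subset: "Fd_copy d G \<rho> \<kappa> \<subseteq> carrier TGd"
proof
  fix f assume "f \<in> Fd_copy d G \<rho> \<kappa>"
  then obtain T U where f: "f = cls (T, \<one>\<^bsub>G (leaves T)\<^esub>, U)" "dvalid d T" "dvalid d U" "leaves T = leaves U"
    unfolding Fd_copy_def by blast
  have n: "1 \<le> leaves T" using leaves_pos[OF arity_pos f(2)] .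
  interpret group "G (leaves T)" using group_G n by simp
  have "\<one>\<^bsub>G (leaves T)\<^esub> \<in> carrier (G (leaves T))" by (rule one_closed)
  then have "valid (T, \<one>\<^bsub>G (leaves T)\<^esub>, U)" unfolding valid_simp using f by blast
  then show "f \<in> carrier TGd" using f cls_carrier by simp
qed

lemma Fd_copyI: "dvalid d A \<Longrightarrow> dvalid d B \<Longrightarrow> leaves A = leaves B \<Longrightarrow>
    cls (A, \<one>\<^bsub>G (leaves A)\<^esub>, B) \<in> Fd_copy d G \<rho> \<kappa>"
  unfolding Fd_copy_def by blast

lemma inv_Fd_copy: "dvalid d A \<Longrightarrow> dvalid d B \<Longrightarrow> leaves A = leaves B \<Longrightarrow>
  inv\<^bsub>TGd\<^esub> (cls (A, \<one>\<^bsub>G (leaves A)\<^esub>, B)) = cls (B, \<one>\<^bsub>G (leaves A)\<^esub>, A)"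
proof -
  assume a: "dvalid d A" "dvalid d B" "leaves A = leaves B"
  have n: "1 \<le> leaves A" using leaves_pos[OF arity_pos a(1)] .
  interpret group "G (leaves A)" using group_G n by simp
  have "triple_inv (A, \<one>\<^bsub>G (leaves A)\<^esub>, B) = (B, \<one>\<^bsub>G (leaves A)\<^esub>, A)" by (simp add: triple_inv_simp)
  then show ?thesis using inv_cls[OF valid_one[OF a]] by simp
qed

lemma conj_diagonal_by_Fd:
  assumes "dvalid d A" "dvalid d B" "leaves A = leaves B" "valid t" "ltree t = A" "rtree t = A"
  shows "inv\<^bsub>TGd\<^esub> (cls (A, \<one>\<^bsub>G (leaves A)\<^esub>, B)) \<otimes>\<^bsub>TGd\<^esub> cls t \<otimes>\<^bsub>TGd\<^esub> cls (A, \<one>\<^bsub>G (leaves A)\<^esub>, B)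
    = cls (B, elem t, B)"
proof -
  have n: "1 \<le> leaves A" using leaves_pos[OF arity_pos assms(1)] .
  interpret group "G (leaves A)" using group_G n by simp
  have g: "elem t \<in> carrier (G (leaves A))" using validD[OF assms(4)] assms(5) by simp
  have t: "t = (A, elem t, A)" using assms(5,6) by (cases t) (simp add: ltree_def rtree_def elem_def)
  have v1: "valid (B, \<one>\<^bsub>G (leaves A)\<^esub>, A)" using valid_one[OF assms(2,1)] assms(3) by simp
  have v2: "valid (A, \<one>\<^bsub>G (leaves A)\<^esub>, B)" using valid_one[OF assms(1,2,3)] .
  have vBA: "valid (B, elem t, A)" unfolding valid_simp using assms g by simp
  have "inv\<^bsub>TGd\<^esub> (cls (A, \<one>\<^bsub>G (leaves A)\<^esub>, B)) \<otimes>\<^bsub>TGd\<^esub> cls t = cls (B, \<one>\<^bsub>G (leaves A)\<^esub>, A) \<otimes>\<^bsub>TGd\<^esub> cls (A, elem t, A)"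
    using inv_Fd_copy[OF assms(1-3)] t by simp
  also have "\<dots> = cls (triple_mult (B, \<one>\<^bsub>G (leaves A)\<^esub>, A) (A, elem t, A))"
    using mult_cls[OF v1] assms(4) t by (metis triple_sel(1) triple_sel(3))
  also have "triple_mult (B, \<one>\<^bsub>G (leaves A)\<^esub>, A) (A, elem t, A) = (B, elem t, A)"
    using g assms(3)[symmetric] by (simp add: triple_mult_simp)
  finally have e1: "inv\<^bsub>TGd\<^esub> (cls (A, \<one>\<^bsub>G (leaves A)\<^esub>, B)) \<otimes>\<^bsub>TGd\<^esub> cls t = cls (B, elem t, A)" .
  have "cls (B, elem t, A) \<otimes>\<^bsub>TGd\<^esub> cls (A, \<one>\<^bsub>G (leaves A)\<^esub>, B) = cls (triple_mult (B, elem t, A) (A, \<one>\<^bsub>G (leaves A)\<^esub>, B))"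
    using mult_cls[OF vBA v2] by simp
  also have "triple_mult (B, elem t, A) (A, \<one>\<^bsub>G (leaves A)\<^esub>, B) = (B, elem t, B)"
    using g assms(3)[symmetric] by (simp add: triple_mult_simp)
  finally show ?thesis using e1 by simp
qed

section \<open>Infinitely many conjugates\<close>

lemma cls_expand_grow_elem:
  assumes "valid s" "rtree s = Z" "1 \<le> k" "k \<le> leaves Z"
    and "valid (T, g, grow d k Z)" "cls s = cls (T, g, grow d k Z)"
  shows "g \<in> \<kappa> (leaves Z) k ` carrier (G (leaves Z))"
proof -
  have k: "1 \<le> k" "k \<le> leaves (rtree s)" using assms(2-4) by auto
  have "(expand s k, (T, g, grow d k Z)) \<in> sim"
    using cls_expand[OF assms(1) k] assms(6) cls_eq_iff by simp
  moreover have "rtree (expand s k) = grow d k Z" using assms(2) by (simp add: expand_def)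
  ultimately have "expand s k = (T, g, grow d k Z)"
    using sim_rtree_unique valid_expand[OF assms(1) k] assms(5) by auto
  then have "g = \<kappa> (leaves Z) k (elem s)"
    using assms(2) validD[OF assms(1)] by (auto simp: expand_def)
  then show ?thesis using validD[OF assms(1)] assms(2) by simp
qed

lemma finite_subset_common_rtree:
  assumes "finite S" "S \<subseteq> carrier TGd"
  obtains Z0 where "dvalid d Z0"
    "\<And>Y W. Y \<in> S \<Longrightarrow> dvalid d W \<Longrightarrow> tree_le Z0 W \<Longrightarrow> \<exists>r. valid r \<and> cls r = Y \<and> rtree r = W"
proof -
  have "\<exists>r. valid r \<and> cls r = Y" if "Y \<in> S" for Y using that assms(2) unfolding TG_carrier by blast
  then obtain rep where rep: "\<And>Y. Y \<in> S \<Longrightarrow> valid (rep Y) \<and> cls (rep Y) = Y" by metis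
  obtain Z0 where Z0: "dvalid d Z0" "\<forall>Y\<in>S. tree_le (rtree (rep Y)) Z0"
    using finite_common_upper_bound[OF assms(1), of d "\<lambda>Y. rtree (rep Y)"] rep validD by blast
  show thesis
  proof (rule that[OF Z0(1)])
    fix Y W assume Y: "Y \<in> S" and W: "dvalid d W" "tree_le Z0 W"
    have le: "tree_le (rtree (rep Y)) W" using Z0(2) Y W(2) tree_le_trans by blast
    have "cls (expand_to (rep Y) W) = Y"
      using sim_expand_to[OF _ W(1) le] rep[OF Y] cls_eq_iff sim_sym by metis
    then show "\<exists>r. valid r \<and> cls r = Y \<and> rtree r = W"
      using expand_to_props[OF _ W(1) le] rep[OF Y] by blast
  qed
qed

lemma diverse_not_in_kappa_image:
  assumes "diverse d G \<kappa>"
  obtains n0 where "\<And>n g. n \<ge> n0 \<Longrightarrow> n \<ge> 1 \<Longrightarrow> g \<noteq> \<one>\<^bsub>G (n + d - 1)\<^esub> \<Longrightarrow>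
    \<exists>k\<in>{1..n}. g \<notin> \<kappa> n k ` carrier (G n)"
proof -
  obtain n0 where n0: "\<forall>n\<ge>max n0 1. (\<Inter>k\<in>{1..n}. \<kappa> n k ` carrier (G n)) = {\<one>\<^bsub>G (n + d - 1)\<^esub>}"
    using assms unfolding diverse_def by blast
  then show thesis
  proof (intro that[of n0])
    fix n g assume "n \<ge> n0" "n \<ge> 1" "g \<noteq> \<one>\<^bsub>G (n + d - 1)\<^esub>"
    then have "g \<notin> (\<Inter>k\<in>{1..n}. \<kappa> n k ` carrier (G n))" using n0 by simp
    then show "\<exists>k\<in>{1..n}. g \<notin> \<kappa> n k ` carrier (G n)" by blast
  qed
qed

definition Fd_conjugates :: "(dtree \<times> 'g \<times> dtree) set \<Rightarrow> (dtree \<times> 'g \<times> dtree) set set" where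
  "Fd_conjugates x = {inv\<^bsub>TGd\<^esub> f \<otimes>\<^bsub>TGd\<^esub> x \<otimes>\<^bsub>TGd\<^esub> f | f. f \<in> Fd_copy d G \<rho> \<kappa>}"

lemma Fd_conjugates_subset: "x \<in> carrier TGd \<Longrightarrow> Fd_conjugates x \<subseteq> carrier TGd"
proof
  interpret TGd: group TGd by (rule TG_group)
  fix y assume "x \<in> carrier TGd" "y \<in> Fd_conjugates x"
  then show "y \<in> carrier TGd" using Fd_copy_subset unfolding Fd_conjugates_def by blast
qed

lemma infinite_conjugates_diagonal:
  assumes t0: "valid t0" "x = cls t0" and nx: "x \<noteq> \<one>\<^bsub>TGd\<^esub>"
    and diagonal: "\<And>t. valid t \<Longrightarrow> cls t = x \<Longrightarrow> ltree t = rtree t" and div: "diverse d G \<kappa>"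
  shows "infinite (Fd_conjugates x)"
proof
  assume fin: "finite (Fd_conjugates x)"
  have xc: "x \<in> carrier TGd" using t0 cls_carrier by simp
  obtain Z0 where Z0: "dvalid d Z0" "\<And>Y W. Y \<in> Fd_conjugates x \<Longrightarrow> dvalid d W \<Longrightarrow> tree_le Z0 W \<Longrightarrow>
      \<exists>r. valid r \<and> cls r = Y \<and> rtree r = W"
    using finite_subset_common_rtree[OF fin Fd_conjugates_subset[OF xc]] by blast
  obtain n0 where n0: "\<And>n g. n \<ge> n0 \<Longrightarrow> n \<ge> 1 \<Longrightarrow> g \<noteq> \<one>\<^bsub>G (n + d - 1)\<^esub> \<Longrightarrow>
      \<exists>k\<in>{1..n}. g \<notin> \<kappa> n k ` carrier (G n)"
    using diverse_not_in_kappa_image[OF div] by blast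
  have "dvalid d (rtree t0)" using validD t0 by blast
  then obtain Z where Z: "dvalid d Z" "tree_le (rtree t0) Z" "tree_le Z0 Z" "leaves Z \<ge> n0"
    using refinement_with_many_leaves[OF arity_ge_2 _ Z0(1)] by blast
  define n where "n = leaves Z"
  define A where "A = grow d 1 Z"
  have n: "n \<ge> n0" "n \<ge> 1" using Z(1,4) leaves_pos[OF arity_pos] unfolding n_def by auto
  have A: "dvalid d A" "leaves A = n + d - 1" "tree_le (rtree t0) A"
    using grow_valid grow_leaves tree_le_grow Z(1,2) n(2) tree_le_trans unfolding A_def n_def by auto
  define tA where "tA = expand_to t0 A"
  have tA: "valid tA" "rtree tA = A" "cls tA = x"
    using expand_to_props[OF t0(1) A(1,3)] sim_expand_to[OF t0(1) A(1,3)] t0(2) cls_eq_iff sim_sym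
    unfolding tA_def by metis+
  then have tA_eq: "tA = (A, elem tA, A)" using diagonal by (cases tA) auto
  have "elem tA \<noteq> \<one>\<^bsub>G (n + d - 1)\<^esub>"
    using nx tA_eq tA(3) one_cls[OF A(1)] A(2) by metis
  then obtain k where k: "k \<in> {1..n}" "elem tA \<notin> \<kappa> n k ` carrier (G n)" using n0 n by blast
  define B where "B = grow d k Z"
  have B: "dvalid d B" "leaves B = leaves A"
    using grow_valid[OF Z(1)] grow_leaves[OF Z(1)] k A(2) unfolding B_def n_def by auto
  have "cls (B, elem tA, B) = inv\<^bsub>TGd\<^esub> (cls (A, \<one>\<^bsub>G (leaves A)\<^esub>, B)) \<otimes>\<^bsub>TGd\<^esub> x \<otimes>\<^bsub>TGd\<^esub> cls (A, \<one>\<^bsub>G (leaves A)\<^esub>, B)"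
    using conj_diagonal_by_Fd[OF A(1) B(1) B(2)[symmetric] tA(1)] tA tA_eq by (metis triple_sel(1))
  then have "cls (B, elem tA, B) \<in> Fd_conjugates x"
    unfolding Fd_conjugates_def using Fd_copyI[OF A(1) B(1) B(2)[symmetric]] by blast
  then obtain s where s: "valid s" "cls s = cls (B, elem tA, B)" "rtree s = Z"
    using Z0(2)[OF _ Z(1,3)] by blast
  have "elem tA \<in> carrier (G (leaves A))" using validD[OF tA(1)] tA(2) tA_eq by (metis triple_sel(1))
  then have "valid (B, elem tA, B)" using B by (simp add: valid_simp)
  then have "elem tA \<in> \<kappa> n k ` carrier (G n)"
    using cls_expand_grow_elem[OF s(1,3)] k s(2) unfolding B_def n_def by auto
  then show False using k(2) by blast
qed

lemma nondiagonal_zero_pair: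
  assumes "valid t" "ltree t \<noteq> rtree t"
  obtains a b where "(a, b) \<in> leaf_rel (cls t)" "incomparable a b" "0 \<in> set a" "0 \<in> set b"
    "\<forall>z\<in>set a. z < d" "\<forall>z\<in>set b. z < d"
proof -
  obtain a b where "sends t a b" "a \<noteq> b" using sends_distinct_pair assms by blast
  then obtain a1 b1 where "sends t a1 b1" "incomparable a1 b1" using sends_incomparable_pair by blast
  then obtain t2 a2 b2 where m2: "sends t2 a2 b2" "cls t2 = cls t" "incomparable a2 b2" "0 \<in> set a2" "0 \<in> set b2"
    using sends_incomparable_pair_zero by blast
  have "a2 \<in> set (leaf_addrs (rtree t2))" "b2 \<in> set (leaf_addrs (ltree t2))"
    using sends_mem[OF m2(1)] by auto
  moreover have "valid t2" using m2(1) unfolding sends_def by blast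
  ultimately have "\<forall>z\<in>set a2. z < d" "\<forall>z\<in>set b2. z < d" using leaf_addrs_digits validD by blast+
  moreover have "(a2, b2) \<in> leaf_rel (cls t)" using m2(1,2) unfolding leaf_rel_def by blast
  ultimately show thesis using that m2(3-5) by blast
qed

lemma leaf_rel_conj_Fd:
  assumes x: "x \<in> carrier TGd" "(a, b) \<in> leaf_rel x"
    and PQ: "dvalid d P" "dvalid d Q" "leaves P = leaves Q"
    and pq: "1 \<le> p" "p \<le> leaves P" "1 \<le> q" "q \<le> leaves P"
    and ab: "leaf_addrs P ! (p - 1) = a" "leaf_addrs P ! (q - 1) = b"
  defines "f \<equiv> cls (P, \<one>\<^bsub>G (leaves P)\<^esub>, Q)"
  shows "(leaf_addrs Q ! (p - 1), leaf_addrs Q ! (q - 1)) \<in> leaf_rel (inv\<^bsub>TGd\<^esub> f \<otimes>\<^bsub>TGd\<^esub> x \<otimes>\<^bsub>TGd\<^esub> f)"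
proof -
  interpret TGd: group TGd by (rule TG_group)
  have "sends (P, \<one>\<^bsub>G (leaves P)\<^esub>, Q) (leaf_addrs Q ! (p - 1)) a"
    using sends_one[OF PQ, of p] pq ab PQ(3) by simp
  then have "(leaf_addrs Q ! (p - 1), a) \<in> leaf_rel f" unfolding leaf_rel_def f_def by blast
  then have xf: "(leaf_addrs Q ! (p - 1), b) \<in> leaf_rel (x \<otimes>\<^bsub>TGd\<^esub> f)" using leaf_rel_mult x(2) by blast
  have "sends (Q, \<one>\<^bsub>G (leaves Q)\<^esub>, P) b (leaf_addrs Q ! (q - 1))"
    using sends_one[OF PQ(2,1) PQ(3)[symmetric], of q] pq ab PQ(3) by simp
  moreover have "inv\<^bsub>TGd\<^esub> f = cls (Q, \<one>\<^bsub>G (leaves Q)\<^esub>, P)"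
    unfolding f_def using inv_Fd_copy[OF PQ] PQ(3) by simp
  ultimately have "(b, leaf_addrs Q ! (q - 1)) \<in> leaf_rel (inv\<^bsub>TGd\<^esub> f)" unfolding leaf_rel_def by blast
  then have "(leaf_addrs Q ! (p - 1), leaf_addrs Q ! (q - 1)) \<in> leaf_rel (inv\<^bsub>TGd\<^esub> f \<otimes>\<^bsub>TGd\<^esub> (x \<otimes>\<^bsub>TGd\<^esub> f))"
    using leaf_rel_mult xf by blast
  moreover have "f \<in> carrier TGd" using Fd_copy_subset Fd_copyI[OF PQ] unfolding f_def by blast
  ultimately show ?thesis using x(1) by (simp add: TGd.m_assoc)
qed

lemma infinite_conjugates_nondiagonal:
  assumes "valid t" "ltree t \<noteq> rtree t"
  shows "infinite (Fd_conjugates (cls t))"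
proof -
  let ?x = "cls t"
  have xc: "?x \<in> carrier TGd" using assms(1) cls_carrier by blast
  obtain a b where ab: "(a, b) \<in> leaf_rel ?x" "incomparable a b" "0 \<in> set a" "0 \<in> set b"
    "\<forall>z\<in>set a. z < d" "\<forall>z\<in>set b. z < d"
    using nondiagonal_zero_pair[OF assms] .
  obtain P p q where P: "dvalid d P" "1 \<le> p" "p < leaves P" "1 \<le> q" "q < leaves P" "p \<noteq> q"
    "leaf_addrs P ! (p - 1) = a" "leaf_addrs P ! (q - 1) = b"
    using two_leaves_not_last[OF arity_ge_2 ab(2-6)] .
  define n where "n = leaves P"
  define m where "m = max p q"
  define Pi where "Pi i = grow_iter d n i P" for i
  define Qi where "Qi i = grow_iter d m i P" for i
  have Pi: "dvalid d (Pi i)" "leaves (Pi i) = n + i * (d - 1)"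
    "leaf_addrs (Pi i) ! (p - 1) = a" "leaf_addrs (Pi i) ! (q - 1) = b" for i
    using grow_iter_props[OF P(1) _ _ arity_pos, of n i] P unfolding Pi_def n_def by auto
  have Qi: "dvalid d (Qi i)" "leaves (Qi i) = n + i * (d - 1)"
    "\<forall>j. 1 \<le> j \<and> j < m \<longrightarrow> leaf_addrs (Qi i) ! (j - 1) = leaf_addrs P ! (j - 1)"
    "leaf_addrs (Qi i) ! (m - 1) = leaf_addrs P ! (m - 1) @ replicate i 0" for i
    using grow_iter_props[OF P(1) _ _ arity_pos, of m i] P unfolding Qi_def n_def m_def by auto
  define Y where "Y i = inv\<^bsub>TGd\<^esub> (cls (Pi i, \<one>\<^bsub>G (leaves (Pi i))\<^esub>, Qi i)) \<otimes>\<^bsub>TGd\<^esub> ?x \<otimes>\<^bsub>TGd\<^esub>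
    cls (Pi i, \<one>\<^bsub>G (leaves (Pi i))\<^esub>, Qi i)" for i
  have Y: "(leaf_addrs (Qi i) ! (p - 1), leaf_addrs (Qi i) ! (q - 1)) \<in> leaf_rel (Y i)" for i
    unfolding Y_def using leaf_rel_conj_Fd[OF xc ab(1) Pi(1) Qi(1)] Pi Qi P by (simp add: n_def)
  have "inj Y"
  proof (rule injI)
    fix i j assume e: "Y i = Y j"
    show "i = j"
    proof (cases "p < q")
      case True
      then have "leaf_addrs (Qi i) ! (p - 1) = a" "leaf_addrs (Qi j) ! (p - 1) = a"
        "leaf_addrs (Qi i) ! (q - 1) = b @ replicate i 0" "leaf_addrs (Qi j) ! (q - 1) = b @ replicate j 0"
        using Qi P unfolding m_def by auto
      then have "b @ replicate i 0 = b @ replicate j 0"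
        using Y[of i] Y[of j] e leaf_rel_functional by metis
      then show ?thesis by (metis length_append length_replicate add_left_cancel)
    next
      case False
      then have "leaf_addrs (Qi i) ! (q - 1) = b" "leaf_addrs (Qi j) ! (q - 1) = b"
        "leaf_addrs (Qi i) ! (p - 1) = a @ replicate i 0" "leaf_addrs (Qi j) ! (p - 1) = a @ replicate j 0"
        using Qi P unfolding m_def by auto
      then have "a @ replicate i 0 = a @ replicate j 0"
        using Y[of i] Y[of j] e leaf_rel_injective by metis
      then show ?thesis by (metis length_append length_replicate add_left_cancel)
    qed
  qed
  moreover have "range Y \<subseteq> Fd_conjugates ?x"
    unfolding Y_def Fd_conjugates_def using Fd_copyI Pi(1,2) Qi(1,2) by fastforce
  ultimately show ?thesis using finite_imageD[of Y UNIV] infinite_UNIV_nat infinite_super by blast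
qed

theorem infinite_Fd_conjugates:
  assumes "x \<in> carrier TGd" "x \<noteq> \<one>\<^bsub>TGd\<^esub>" "diverse d G \<kappa>"
  shows "infinite (Fd_conjugates x)"
proof -
  obtain t0 where t0: "valid t0" "x = cls t0" using assms(1) TG_carrier by auto
  show ?thesis
  proof (cases "\<forall>t. valid t \<and> cls t = x \<longrightarrow> ltree t = rtree t")
    case True
    then show ?thesis using infinite_conjugates_diagonal[OF t0 assms(2) _ assms(3)] by blast
  next
    case False
    then show ?thesis using infinite_conjugates_nondiagonal by blast
  qed
qed

corollary infinite_conjugates:
  assumes "x \<in> carrier TGd" "x \<noteq> \<one>\<^bsub>TGd\<^esub>" "diverse d G \<kappa>"
  shows "infinite {inv\<^bsub>TGd\<^esub> f \<otimes>\<^bsub>TGd\<^esub> x \<otimes>\<^bsub>TGd\<^esub> f | f. f \<in> carrier TGd}"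
proof -
  have "Fd_conjugates x \<subseteq> {inv\<^bsub>TGd\<^esub> f \<otimes>\<^bsub>TGd\<^esub> x \<otimes>\<^bsub>TGd\<^esub> f | f. f \<in> carrier TGd}"
    unfolding Fd_conjugates_def using Fd_copy_subset by blast
  then show ?thesis using infinite_Fd_conjugates[OF assms] infinite_super by blast
qed

end

theorem mainTheorem1:
  fixes d :: nat
    and G :: "nat \<Rightarrow> 'g monoid"
    and \<rho> :: "nat \<Rightarrow> 'g \<Rightarrow> nat \<Rightarrow> nat"
    and \<kappa> :: "nat \<Rightarrow> nat \<Rightarrow> 'g \<Rightarrow> 'g"
  assumes "cloning_system d G \<rho> \<kappa>"
    and "diverse d G \<kappa>"
  shows "\<forall>x\<in>carrier (TG d G \<rho> \<kappa>). x \<noteq> \<one>\<^bsub>TG d G \<rho> \<kappa>\<^esub> \<longrightarrow>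
           infinite {inv\<^bsub>TG d G \<rho> \<kappa>\<^esub> f \<otimes>\<^bsub>TG d G \<rho> \<kappa>\<^esub> x \<otimes>\<^bsub>TG d G \<rho> \<kappa>\<^esub> f | f.
                       f \<in> Fd_copy d G \<rho> \<kappa>}
         \<and> infinite {inv\<^bsub>TG d G \<rho> \<kappa>\<^esub> f \<otimes>\<^bsub>TG d G \<rho> \<kappa>\<^esub> x \<otimes>\<^bsub>TG d G \<rho> \<kappa>\<^esub> f | f.
                       f \<in> carrier (TG d G \<rho> \<kappa>)}"
proof -
  interpret cloning_sys d G \<rho> \<kappa> by (rule cloning_sys.intro) (rule assms(1))
  show ?thesis
    using infinite_Fd_conjugates[OF _ _ assms(2)] infinite_conjugates[OF _ _ assms(2)]
    unfolding Fd_conjugates_def by blast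
qed

end
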